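(* Let $\mathcal{C}$ be a Grothendieck site with enough points, let $X,Y$ be presheaves of groupoids on $\mathcal{C}$ with $\Gamma=\mathbb{Z}/2\mathbb{Z}$-actions, and let $f\colon X\to Y$ be a $\Gamma$-equivariant morphism. If $f$ is a local weak equivalence, then $f^{h\Gamma}\colon X^{h\Gamma}\to Y^{h\Gamma}$ is a local weak equivalence.
   Context: A groupoid is a small category with all morphisms invertible; a map of groupoids is a weak equivalence if it is an equivalence of categories. A presheaf of groupoids is a strict contravariant functor from $\mathcal{C}$ to groupoids; stalks at points are defined by the same colimit formula as for presheaves of sets. A morphism of presheaves of groupoids is a local weak equivalence if it induces a weak equivalence of groupoids on all stalks at points of $\mathcal{C}$. A $\Gamma$-action on a presheaf of groupoids is a $\Gamma$-action on each $X(U)$ (on objects and morphisms, compatible with structure maps; nontrivial element $x\mapsto\bar x$) compatible with restrictions; a $\Gamma$-equivariant morphism commutes with the actions on sections. For a groupoid $X$ with $\Gamma$-action, $X^{h\Gamma}$ has objects $(x,\phi)$ with $\phi\in\mathrm{Hom}(x,\bar x)$, $\bar\phi=\phi^{-1}$, and arrows $(x,\phi)\to(x_1,\phi_1)$ the $\alpha\colon x\to x_1$ with $\phi_1\alpha=\bar\alpha\phi$; for presheaves $X^{h\Gamma}(U)=X(U)^{h\Gamma}$, and $f^{h\Gamma}$ is given on sections by $(x,\phi)\mapsto(f(x),f(\phi))$, $\alpha\mapsto f(\alpha)$. *)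

theory Defs
  imports Main
begin

record ('a,'b) gcat =
  gobs  :: "'a set"
  garrs :: "'b set"
  gdom  :: "'b \<Rightarrow> 'a"
  gcod  :: "'b \<Rightarrow> 'a"
  gcomp :: "'b \<Rightarrow> 'b \<Rightarrow> 'b"   (* gcomp C g f = g \<circ> f, defined when gcod f = gdom g *)
  gide  :: "'a \<Rightarrow> 'b"

definition ghom :: "('a,'b) gcat \<Rightarrow> 'a \<Rightarrow> 'a \<Rightarrow> 'b set" where
  "ghom C a b = {f \<in> garrs C. gdom C f = a \<and> gcod C f = b}"

definition category :: "('a,'b) gcat \<Rightarrow> bool" where
  "category C \<longleftrightarrow>
     (\<forall>f\<in>garrs C. gdom C f \<in> gobs C \<and> gcod C f \<in> gobs C) \<and>
     (\<forall>a\<in>gobs C. gide C a \<in> ghom C a a) \<and>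
     (\<forall>f\<in>garrs C. \<forall>g\<in>garrs C. gcod C f = gdom C g \<longrightarrow>
        gcomp C g f \<in> ghom C (gdom C f) (gcod C g)) \<and>
     (\<forall>f\<in>garrs C. gcomp C (gide C (gcod C f)) f = f \<and> gcomp C f (gide C (gdom C f)) = f) \<and>
     (\<forall>f\<in>garrs C. \<forall>g\<in>garrs C. \<forall>h\<in>garrs C. gcod C f = gdom C g \<longrightarrow> gcod C g = gdom C h \<longrightarrow>
        gcomp C h (gcomp C g f) = gcomp C (gcomp C h g) f)"

definition is_iso :: "('a,'b) gcat \<Rightarrow> 'b \<Rightarrow> bool" where
  "is_iso C f \<longleftrightarrow> (\<exists>g\<in>ghom C (gcod C f) (gdom C f).
      gcomp C g f = gide C (gdom C f) \<and> gcomp C f g = gide C (gcod C f))"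

definition groupoid :: "('a,'b) gcat \<Rightarrow> bool" where
  "groupoid G \<longleftrightarrow> category G \<and> (\<forall>f\<in>garrs G. is_iso G f)"

definition is_functor :: "('a,'b) gcat \<Rightarrow> ('c,'d) gcat \<Rightarrow> ('a \<Rightarrow> 'c) \<Rightarrow> ('b \<Rightarrow> 'd) \<Rightarrow> bool" where
  "is_functor C D Fo Fa \<longleftrightarrow>
     (\<forall>a\<in>gobs C. Fo a \<in> gobs D) \<and>
     (\<forall>f\<in>garrs C. Fa f \<in> ghom D (Fo (gdom C f)) (Fo (gcod C f))) \<and>
     (\<forall>a\<in>gobs C. Fa (gide C a) = gide D (Fo a)) \<and>
     (\<forall>f\<in>garrs C. \<forall>g\<in>garrs C. gcod C f = gdom C g \<longrightarrow> Fa (gcomp C g f) = gcomp D (Fa g) (Fa f))"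

text \<open>Weak equivalence of groupoids = equivalence of categories: a functor admitting a
  quasi-inverse functor together with natural isomorphisms to the identities.\<close>
definition grpd_weq :: "('a,'b) gcat \<Rightarrow> ('c,'d) gcat \<Rightarrow> ('a \<Rightarrow> 'c) \<Rightarrow> ('b \<Rightarrow> 'd) \<Rightarrow> bool" where
  "grpd_weq G H Fo Fa \<longleftrightarrow> is_functor G H Fo Fa \<and>
     (\<exists>Go Ga \<eta> \<epsilon>. is_functor H G Go Ga \<and>
        (\<forall>a\<in>gobs G. \<eta> a \<in> ghom G a (Go (Fo a)) \<and> is_iso G (\<eta> a)) \<and>
        (\<forall>f\<in>garrs G. gcomp G (\<eta> (gcod G f)) f = gcomp G (Ga (Fa f)) (\<eta> (gdom G f))) \<and>
        (\<forall>b\<in>gobs H. \<epsilon> b \<in> ghom H (Fo (Go b)) b \<and> is_iso H (\<epsilon> b)) \<and>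
        (\<forall>g\<in>garrs H. gcomp H (\<epsilon> (gcod H g)) (Fa (Ga g)) = gcomp H g (\<epsilon> (gdom H g))))"

definition sieve :: "('o,'m) gcat \<Rightarrow> 'o \<Rightarrow> 'm set \<Rightarrow> bool" where
  "sieve C U S \<longleftrightarrow> S \<subseteq> {f \<in> garrs C. gcod C f = U} \<and>
     (\<forall>f\<in>S. \<forall>g\<in>garrs C. gcod C g = gdom C f \<longrightarrow> gcomp C f g \<in> S)"

definition max_sieve :: "('o,'m) gcat \<Rightarrow> 'o \<Rightarrow> 'm set" where
  "max_sieve C U = {f \<in> garrs C. gcod C f = U}"

definition pullback_sieve :: "('o,'m) gcat \<Rightarrow> 'm \<Rightarrow> 'm set \<Rightarrow> 'm set" where
  "pullback_sieve C f S = {g \<in> garrs C. gcod C g = gdom C f \<and> gcomp C f g \<in> S}"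

definition grothendieck_topology :: "('o,'m) gcat \<Rightarrow> ('o \<Rightarrow> 'm set set) \<Rightarrow> bool" where
  "grothendieck_topology C J \<longleftrightarrow>
     (\<forall>U\<in>gobs C. \<forall>S\<in>J U. sieve C U S) \<and>
     (\<forall>U\<in>gobs C. max_sieve C U \<in> J U) \<and>
     (\<forall>f\<in>garrs C. \<forall>S\<in>J (gcod C f). pullback_sieve C f S \<in> J (gdom C f)) \<and>
     (\<forall>U\<in>gobs C. \<forall>S\<in>J U. \<forall>R. sieve C U R \<and> (\<forall>f\<in>S. pullback_sieve C f R \<in> J (gdom C f))
        \<longrightarrow> R \<in> J U)"

definition site :: "('o,'m) gcat \<Rightarrow> ('o \<Rightarrow> 'm set set) \<Rightarrow> bool" where
  "site C J \<longleftrightarrow> category C \<and> grothendieck_topology C J"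

record ('o,'m,'x) setfunctor =
  sob :: "'o \<Rightarrow> 'x set"
  sar :: "'m \<Rightarrow> 'x \<Rightarrow> 'x"

definition set_functor :: "('o,'m) gcat \<Rightarrow> ('o,'m,'x) setfunctor \<Rightarrow> bool" where
  "set_functor C u \<longleftrightarrow>
     (\<forall>f\<in>garrs C. \<forall>y\<in>sob u (gdom C f). sar u f y \<in> sob u (gcod C f)) \<and>
     (\<forall>U\<in>gobs C. \<forall>y\<in>sob u U. sar u (gide C U) y = y) \<and>
     (\<forall>f\<in>garrs C. \<forall>g\<in>garrs C. gcod C f = gdom C g \<longrightarrow>
        (\<forall>y\<in>sob u (gdom C f). sar u (gcomp C g f) y = sar u g (sar u f y)))"

text \<open>Flat: the category of elements of u is cofiltered.\<close>
definition flat :: "('o,'m) gcat \<Rightarrow> ('o,'m,'x) setfunctor \<Rightarrow> bool" where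
  "flat C u \<longleftrightarrow> set_functor C u \<and>
     (\<exists>U\<in>gobs C. sob u U \<noteq> {}) \<and>
     (\<forall>U\<in>gobs C. \<forall>V\<in>gobs C. \<forall>x\<in>sob u U. \<forall>y\<in>sob u V.
        \<exists>W z g h. W \<in> gobs C \<and> z \<in> sob u W \<and> g \<in> ghom C W U \<and> h \<in> ghom C W V \<and>
                  sar u g z = x \<and> sar u h z = y) \<and>
     (\<forall>U V y f g. f \<in> ghom C V U \<and> g \<in> ghom C V U \<and> y \<in> sob u V \<and> sar u f y = sar u g y \<longrightarrow>
        (\<exists>W z h. W \<in> gobs C \<and> z \<in> sob u W \<and> h \<in> ghom C W V \<and> sar u h z = y \<and>
                 gcomp C f h = gcomp C g h))"

definition continuous_pt :: "('o,'m) gcat \<Rightarrow> ('o \<Rightarrow> 'm set set) \<Rightarrow> ('o,'m,'x) setfunctor \<Rightarrow> bool" where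
  "continuous_pt C J u \<longleftrightarrow>
     (\<forall>U\<in>gobs C. \<forall>S\<in>J U. \<forall>x\<in>sob u U. \<exists>f\<in>S. \<exists>y\<in>sob u (gdom C f). sar u f y = x)"

definition site_point :: "('o,'m) gcat \<Rightarrow> ('o \<Rightarrow> 'm set set) \<Rightarrow> ('o,'m,'x) setfunctor \<Rightarrow> bool" where
  "site_point C J u \<longleftrightarrow> flat C u \<and> continuous_pt C J u"

section \<open>Stalks: colim over the category of elements of a point\<close>

definition colim_carrier :: "('o,'m) gcat \<Rightarrow> ('o,'m,'x) setfunctor \<Rightarrow> ('o \<Rightarrow> 'v set) \<Rightarrow> ('o \<times> 'x \<times> 'v) set" where
  "colim_carrier C u A = {(U,x,a). U \<in> gobs C \<and> x \<in> sob u U \<and> a \<in> A U}"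

definition colim_step :: "('o,'m) gcat \<Rightarrow> ('o,'m,'x) setfunctor \<Rightarrow> ('o \<Rightarrow> 'v set) \<Rightarrow> ('m \<Rightarrow> 'v \<Rightarrow> 'v)
    \<Rightarrow> ('o \<times> 'x \<times> 'v) \<Rightarrow> ('o \<times> 'x \<times> 'v) \<Rightarrow> bool" where
  "colim_step C u A r p q \<longleftrightarrow> (\<exists>U x a V y g. p = (U,x,a) \<and> q = (V,y,r g a) \<and>
      U \<in> gobs C \<and> x \<in> sob u U \<and> a \<in> A U \<and> g \<in> ghom C V U \<and> y \<in> sob u V \<and> sar u g y = x)"

definition colim_eq :: "('o,'m) gcat \<Rightarrow> ('o,'m,'x) setfunctor \<Rightarrow> ('o \<Rightarrow> 'v set) \<Rightarrow> ('m \<Rightarrow> 'v \<Rightarrow> 'v)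
    \<Rightarrow> ('o \<times> 'x \<times> 'v) \<Rightarrow> ('o \<times> 'x \<times> 'v) \<Rightarrow> bool" where
  "colim_eq C u A r = (\<lambda>p q. colim_step C u A r p q \<or> colim_step C u A r q p)\<^sup>*\<^sup>*"

definition colim_class :: "('o,'m) gcat \<Rightarrow> ('o,'m,'x) setfunctor \<Rightarrow> ('o \<Rightarrow> 'v set) \<Rightarrow> ('m \<Rightarrow> 'v \<Rightarrow> 'v)
    \<Rightarrow> ('o \<times> 'x \<times> 'v) \<Rightarrow> ('o \<times> 'x \<times> 'v) set" where
  "colim_class C u A r p = {q \<in> colim_carrier C u A. colim_eq C u A r p q}"

definition colim_set :: "('o,'m) gcat \<Rightarrow> ('o,'m,'x) setfunctor \<Rightarrow> ('o \<Rightarrow> 'v set) \<Rightarrow> ('m \<Rightarrow> 'v \<Rightarrow> 'v)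
    \<Rightarrow> ('o \<times> 'x \<times> 'v) set set" where
  "colim_set C u A r = colim_class C u A r ` colim_carrier C u A"

record ('o,'m,'a,'b) pgrpd =
  psec :: "'o \<Rightarrow> ('a,'b) gcat"
  prob :: "'m \<Rightarrow> 'a \<Rightarrow> 'a"
  prar :: "'m \<Rightarrow> 'b \<Rightarrow> 'b"

definition presheaf_of_groupoids :: "('o,'m) gcat \<Rightarrow> ('o,'m,'a,'b) pgrpd \<Rightarrow> bool" where
  "presheaf_of_groupoids C X \<longleftrightarrow>
     (\<forall>U\<in>gobs C. groupoid (psec X U)) \<and>
     (\<forall>f\<in>garrs C. is_functor (psec X (gcod C f)) (psec X (gdom C f)) (prob X f) (prar X f)) \<and>
     (\<forall>U\<in>gobs C. (\<forall>a\<in>gobs (psec X U). prob X (gide C U) a = a) \<and>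
                  (\<forall>\<alpha>\<in>garrs (psec X U). prar X (gide C U) \<alpha> = \<alpha>)) \<and>
     (\<forall>f\<in>garrs C. \<forall>g\<in>garrs C. gcod C f = gdom C g \<longrightarrow>
        (\<forall>a\<in>gobs (psec X (gcod C g)). prob X (gcomp C g f) a = prob X f (prob X g a)) \<and>
        (\<forall>\<alpha>\<in>garrs (psec X (gcod C g)). prar X (gcomp C g f) \<alpha> = prar X f (prar X g \<alpha>)))"

record ('o,'a,'b,'c,'d) pmor =
  mob :: "'o \<Rightarrow> 'a \<Rightarrow> 'c"
  mar :: "'o \<Rightarrow> 'b \<Rightarrow> 'd"

definition presheaf_morphism :: "('o,'m) gcat \<Rightarrow> ('o,'m,'a,'b) pgrpd \<Rightarrow> ('o,'m,'c,'d) pgrpd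
    \<Rightarrow> ('o,'a,'b,'c,'d) pmor \<Rightarrow> bool" where
  "presheaf_morphism C X Y F \<longleftrightarrow>
     (\<forall>U\<in>gobs C. is_functor (psec X U) (psec Y U) (mob F U) (mar F U)) \<and>
     (\<forall>f\<in>garrs C.
        (\<forall>a\<in>gobs (psec X (gcod C f)). mob F (gdom C f) (prob X f a) = prob Y f (mob F (gcod C f) a)) \<and>
        (\<forall>\<alpha>\<in>garrs (psec X (gcod C f)). mar F (gdom C f) (prar X f \<alpha>) = prar Y f (mar F (gcod C f) \<alpha>)))"

definition stalk_ob_cls where
  "stalk_ob_cls C u X = colim_class C u (\<lambda>U. gobs (psec X U)) (prob X)"

definition stalk_ar_cls where
  "stalk_ar_cls C u X = colim_class C u (\<lambda>U. garrs (psec X U)) (prar X)"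

definition stalk :: "('o,'m) gcat \<Rightarrow> ('o,'m,'x) setfunctor \<Rightarrow> ('o,'m,'a,'b) pgrpd
    \<Rightarrow> (('o \<times> 'x \<times> 'a) set, ('o \<times> 'x \<times> 'b) set) gcat" where
  "stalk C u X = \<lparr>
     gobs = colim_set C u (\<lambda>U. gobs (psec X U)) (prob X),
     garrs = colim_set C u (\<lambda>U. garrs (psec X U)) (prar X),
     gdom = (\<lambda>A. case (SOME t. t \<in> A) of (U,x,\<alpha>) \<Rightarrow> stalk_ob_cls C u X (U, x, gdom (psec X U) \<alpha>)),
     gcod = (\<lambda>A. case (SOME t. t \<in> A) of (U,x,\<alpha>) \<Rightarrow> stalk_ob_cls C u X (U, x, gcod (psec X U) \<alpha>)),
     gcomp = (\<lambda>B A. case (SOME t. case t of (U,x,\<alpha>,\<beta>) \<Rightarrow>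
                          (U,x,\<alpha>) \<in> A \<and> (U,x,\<beta>) \<in> B \<and> gcod (psec X U) \<alpha> = gdom (psec X U) \<beta>)
                 of (U,x,\<alpha>,\<beta>) \<Rightarrow> stalk_ar_cls C u X (U, x, gcomp (psec X U) \<beta> \<alpha>)),
     gide = (\<lambda>P. case (SOME t. t \<in> P) of (U,x,a) \<Rightarrow> stalk_ar_cls C u X (U, x, gide (psec X U) a)) \<rparr>"

definition stalk_mob :: "('o,'m) gcat \<Rightarrow> ('o,'m,'x) setfunctor \<Rightarrow> ('o,'m,'c,'d) pgrpd
    \<Rightarrow> ('o,'a,'b,'c,'d) pmor \<Rightarrow> ('o \<times> 'x \<times> 'a) set \<Rightarrow> ('o \<times> 'x \<times> 'c) set" where
  "stalk_mob C u Y F = (\<lambda>P. case (SOME t. t \<in> P) of (U,x,a) \<Rightarrow> stalk_ob_cls C u Y (U, x, mob F U a))"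

definition stalk_mar :: "('o,'m) gcat \<Rightarrow> ('o,'m,'x) setfunctor \<Rightarrow> ('o,'m,'c,'d) pgrpd
    \<Rightarrow> ('o,'a,'b,'c,'d) pmor \<Rightarrow> ('o \<times> 'x \<times> 'b) set \<Rightarrow> ('o \<times> 'x \<times> 'd) set" where
  "stalk_mar C u Y F = (\<lambda>A. case (SOME t. t \<in> A) of (U,x,\<alpha>) \<Rightarrow> stalk_ar_cls C u Y (U, x, mar F U \<alpha>))"

text \<open>Local weak equivalence: weak equivalence on the stalks at all points of the site
  (points with values in the type 'x).\<close>
definition local_weq :: "('o,'m) gcat \<Rightarrow> ('o \<Rightarrow> 'm set set) \<Rightarrow> 'x itself
    \<Rightarrow> ('o,'m,'a,'b) pgrpd \<Rightarrow> ('o,'m,'c,'d) pgrpd \<Rightarrow> ('o,'a,'b,'c,'d) pmor \<Rightarrow> bool" where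
  "local_weq C J tx X Y F \<longleftrightarrow>
     (\<forall>u :: ('o,'m,'x) setfunctor. site_point C J u \<longrightarrow>
        grpd_weq (stalk C u X) (stalk C u Y) (stalk_mob C u Y F) (stalk_mar C u Y F))"

record ('o,'m,'v) psh =
  pshob :: "'o \<Rightarrow> 'v set"
  pshar :: "'m \<Rightarrow> 'v \<Rightarrow> 'v"

definition presheaf_of_sets :: "('o,'m) gcat \<Rightarrow> ('o,'m,'v) psh \<Rightarrow> bool" where
  "presheaf_of_sets C F \<longleftrightarrow>
     (\<forall>f\<in>garrs C. \<forall>s\<in>pshob F (gcod C f). pshar F f s \<in> pshob F (gdom C f)) \<and>
     (\<forall>U\<in>gobs C. \<forall>s\<in>pshob F U. pshar F (gide C U) s = s) \<and>
     (\<forall>f\<in>garrs C. \<forall>g\<in>garrs C. gcod C f = gdom C g \<longrightarrow>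
        (\<forall>s\<in>pshob F (gcod C g). pshar F (gcomp C g f) s = pshar F f (pshar F g s)))"

definition is_sheaf :: "('o,'m) gcat \<Rightarrow> ('o \<Rightarrow> 'm set set) \<Rightarrow> ('o,'m,'v) psh \<Rightarrow> bool" where
  "is_sheaf C J F \<longleftrightarrow> presheaf_of_sets C F \<and>
     (\<forall>U\<in>gobs C. \<forall>S\<in>J U. \<forall>s.
        (\<forall>f\<in>S. s f \<in> pshob F (gdom C f)) \<and>
        (\<forall>f\<in>S. \<forall>g\<in>garrs C. gcod C g = gdom C f \<longrightarrow> pshar F g (s f) = s (gcomp C f g))
        \<longrightarrow> (\<exists>!t. t \<in> pshob F U \<and> (\<forall>f\<in>S. pshar F f t = s f)))"

definition psh_morphism :: "('o,'m) gcat \<Rightarrow> ('o,'m,'v) psh \<Rightarrow> ('o,'m,'w) psh \<Rightarrow> ('o \<Rightarrow> 'v \<Rightarrow> 'w) \<Rightarrow> bool" where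
  "psh_morphism C F G \<phi> \<longleftrightarrow>
     (\<forall>U\<in>gobs C. \<forall>s\<in>pshob F U. \<phi> U s \<in> pshob G U) \<and>
     (\<forall>f\<in>garrs C. \<forall>s\<in>pshob F (gcod C f). \<phi> (gdom C f) (pshar F f s) = pshar G f (\<phi> (gcod C f) s))"

definition stalk_map_set :: "('o,'m) gcat \<Rightarrow> ('o,'m,'x) setfunctor \<Rightarrow> ('o,'m,'w) psh
    \<Rightarrow> ('o \<Rightarrow> 'v \<Rightarrow> 'w) \<Rightarrow> ('o \<times> 'x \<times> 'v) set \<Rightarrow> ('o \<times> 'x \<times> 'w) set" where
  "stalk_map_set C u G \<phi> = (\<lambda>P. case (SOME t. t \<in> P) of (U,x,s) \<Rightarrow>
       colim_class C u (pshob G) (pshar G) (U, x, \<phi> U s))"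

text \<open>Enough points: the points (with values in type 'x) jointly detect isomorphisms of
  sheaves of sets (with values in type 'v).\<close>
definition enough_points :: "('o,'m) gcat \<Rightarrow> ('o \<Rightarrow> 'm set set) \<Rightarrow> 'x itself \<Rightarrow> 'v itself \<Rightarrow> bool" where
  "enough_points C J tx tv \<longleftrightarrow>
     (\<forall>(F :: ('o,'m,'v) psh) (G :: ('o,'m,'v) psh) \<phi>.
        is_sheaf C J F \<and> is_sheaf C J G \<and> psh_morphism C F G \<phi> \<and>
        (\<forall>u :: ('o,'m,'x) setfunctor. site_point C J u \<longrightarrow>
           bij_betw (stalk_map_set C u G \<phi>) (colim_set C u (pshob F) (pshar F))
                                             (colim_set C u (pshob G) (pshar G)))
        \<longrightarrow> (\<forall>U\<in>gobs C. bij_betw (\<phi> U) (pshob F U) (pshob G U)))"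

text \<open>A Z/2-action is given by the action of the nontrivial element x \<mapsto> x-bar,
  an involutive automorphism of each X(U), compatible with restrictions.\<close>
record ('o,'a,'b) z2act =
  aob :: "'o \<Rightarrow> 'a \<Rightarrow> 'a"
  aar :: "'o \<Rightarrow> 'b \<Rightarrow> 'b"

definition z2_action :: "('o,'m) gcat \<Rightarrow> ('o,'m,'a,'b) pgrpd \<Rightarrow> ('o,'a,'b) z2act \<Rightarrow> bool" where
  "z2_action C X T \<longleftrightarrow>
     (\<forall>U\<in>gobs C. is_functor (psec X U) (psec X U) (aob T U) (aar T U) \<and>
        (\<forall>a\<in>gobs (psec X U). aob T U (aob T U a) = a) \<and>
        (\<forall>\<alpha>\<in>garrs (psec X U). aar T U (aar T U \<alpha>) = \<alpha>)) \<and>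
     (\<forall>f\<in>garrs C.
        (\<forall>a\<in>gobs (psec X (gcod C f)). prob X f (aob T (gcod C f) a) = aob T (gdom C f) (prob X f a)) \<and>
        (\<forall>\<alpha>\<in>garrs (psec X (gcod C f)). prar X f (aar T (gcod C f) \<alpha>) = aar T (gdom C f) (prar X f \<alpha>)))"

definition equivariant :: "('o,'m) gcat \<Rightarrow> ('o,'m,'a,'b) pgrpd \<Rightarrow> ('o,'a,'b) z2act
    \<Rightarrow> ('o,'c,'d) z2act \<Rightarrow> ('o,'a,'b,'c,'d) pmor \<Rightarrow> bool" where
  "equivariant C X TX TY F \<longleftrightarrow>
     (\<forall>U\<in>gobs C.
        (\<forall>a\<in>gobs (psec X U). mob F U (aob TX U a) = aob TY U (mob F U a)) \<and>
        (\<forall>\<alpha>\<in>garrs (psec X U). mar F U (aar TX U \<alpha>) = aar TY U (mar F U \<alpha>)))"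

definition hfp_obs :: "('a,'b) gcat \<Rightarrow> ('a \<Rightarrow> 'a) \<Rightarrow> ('b \<Rightarrow> 'b) \<Rightarrow> ('a \<times> 'b) set" where
  "hfp_obs G tob tar = {(x,\<phi>). x \<in> gobs G \<and> \<phi> \<in> ghom G x (tob x) \<and>
      gcomp G (tar \<phi>) \<phi> = gide G x \<and> gcomp G \<phi> (tar \<phi>) = gide G (tob x)}"

text \<open>X^{h\<Gamma>}: objects (x,\<phi>) with \<phi> : x \<rightarrow> x-bar and \<phi>-bar = \<phi>^{-1}; an arrow
  (x,\<phi>) \<rightarrow> (x1,\<phi>1) is \<alpha> : x \<rightarrow> x1 with \<phi>1 \<alpha> = \<alpha>-bar \<phi>, recorded together with its
  source and target.\<close>
definition hfp_grpd :: "('a,'b) gcat \<Rightarrow> ('a \<Rightarrow> 'a) \<Rightarrow> ('b \<Rightarrow> 'b)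
    \<Rightarrow> ('a \<times> 'b, ('a \<times> 'b) \<times> 'b \<times> ('a \<times> 'b)) gcat" where
  "hfp_grpd G tob tar = \<lparr>
     gobs = hfp_obs G tob tar,
     garrs = {(p,\<alpha>,q). p \<in> hfp_obs G tob tar \<and> q \<in> hfp_obs G tob tar \<and>
                 \<alpha> \<in> ghom G (fst p) (fst q) \<and> gcomp G (snd q) \<alpha> = gcomp G (tar \<alpha>) (snd p)},
     gdom = (\<lambda>(p,\<alpha>,q). p),
     gcod = (\<lambda>(p,\<alpha>,q). q),
     gcomp = (\<lambda>(p2,\<beta>,q2) (p1,\<alpha>,q1). (p1, gcomp G \<beta> \<alpha>, q2)),
     gide = (\<lambda>p. (p, gide G (fst p), p)) \<rparr>"

definition hfp_psh :: "('o,'m,'a,'b) pgrpd \<Rightarrow> ('o,'a,'b) z2act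
    \<Rightarrow> ('o,'m,'a \<times> 'b, ('a \<times> 'b) \<times> 'b \<times> ('a \<times> 'b)) pgrpd" where
  "hfp_psh X T = \<lparr>
     psec = (\<lambda>U. hfp_grpd (psec X U) (aob T U) (aar T U)),
     prob = (\<lambda>f (x,\<phi>). (prob X f x, prar X f \<phi>)),
     prar = (\<lambda>f ((x,\<phi>),\<alpha>,(y,\<psi>)). ((prob X f x, prar X f \<phi>), prar X f \<alpha>, (prob X f y, prar X f \<psi>))) \<rparr>"

definition hfp_mor :: "('o,'a,'b,'c,'d) pmor
    \<Rightarrow> ('o, 'a \<times> 'b, ('a \<times> 'b) \<times> 'b \<times> ('a \<times> 'b), 'c \<times> 'd, ('c \<times> 'd) \<times> 'd \<times> ('c \<times> 'd)) pmor" where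
  "hfp_mor F = \<lparr>
     mob = (\<lambda>U (x,\<phi>). (mob F U x, mar F U \<phi>)),
     mar = (\<lambda>U ((x,\<phi>),\<alpha>,(y,\<psi>)). ((mob F U x, mar F U \<phi>), mar F U \<alpha>, (mob F U y, mar F U \<psi>))) \<rparr>"

end

theory Submission
  imports Defs
begin

(* A stalk is a filtered colimit over the category of elements of a point, so finitely many
   germs, and finitely many equations between them, can always be realised by sections at one
   common stage.  Hence a morphism F of presheaves of categories induces an equivalence on the
   stalk at a point exactly when it is faithful, full and essentially surjective "locally":
   each property holds for sections after restriction along some arrow of the category of
   elements.  These local properties pass to homotopy fixed points by the argument for a single
   equivalence of groupoids, paying one restriction for every use of fullness or faithfulness.
   An arrow of homotopy fixed points is lifted by fullness, and faithfulness makes the lift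
   compatible with the structure maps.  An object (b, psi) is reached by choosing a and an
   isomorphism e : F a -> b, transporting psi along e to a structure gamma on F a, lifting gamma
   to phi by fullness and proving that phi is a homotopy fixed point structure by faithfulness;
   e is then an isomorphism (F a, F phi) -> (b, psi) of homotopy fixed points. *)

lemma ghomD: "f \<in> ghom C a b \<Longrightarrow> f \<in> garrs C \<and> gdom C f = a \<and> gcod C f = b"
  by (simp add: ghom_def)

lemma garrs_ghom: "f \<in> garrs C \<Longrightarrow> f \<in> ghom C (gdom C f) (gcod C f)"
  by (simp add: ghom_def)

lemma is_isoI:
  "f \<in> ghom G a b \<Longrightarrow> g \<in> ghom G b a \<Longrightarrow> gcomp G g f = gide G a \<Longrightarrow> gcomp G f g = gide G b
    \<Longrightarrow> is_iso G f"
  unfolding is_iso_def ghom_def by auto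

context
  fixes G :: "('a,'b) gcat" assumes G: "category G"
begin

lemma cat_dom: "f \<in> ghom G a b \<Longrightarrow> a \<in> gobs G"
  using G unfolding category_def ghom_def by auto

lemma cat_cod: "f \<in> ghom G a b \<Longrightarrow> b \<in> gobs G"
  using G unfolding category_def ghom_def by auto

lemma cat_arr_dom: "f \<in> garrs G \<Longrightarrow> gdom G f \<in> gobs G"
  using G unfolding category_def by auto

lemma cat_arr_cod: "f \<in> garrs G \<Longrightarrow> gcod G f \<in> gobs G"
  using G unfolding category_def by auto

lemma cat_id: "a \<in> gobs G \<Longrightarrow> gide G a \<in> ghom G a a"
  using G unfolding category_def by auto

lemma cat_comp: "f \<in> ghom G a b \<Longrightarrow> g \<in> ghom G b c \<Longrightarrow> gcomp G g f \<in> ghom G a c"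
  using G unfolding category_def ghom_def by auto

lemma cat_id_left: "f \<in> ghom G a b \<Longrightarrow> gcomp G (gide G b) f = f"
  using G unfolding category_def ghom_def by auto

lemma cat_id_right: "f \<in> ghom G a b \<Longrightarrow> gcomp G f (gide G a) = f"
  using G unfolding category_def ghom_def by auto

lemma cat_assoc:
  "f \<in> ghom G a b \<Longrightarrow> g \<in> ghom G b c \<Longrightarrow> h \<in> ghom G c d \<Longrightarrow>
    gcomp G h (gcomp G g f) = gcomp G (gcomp G h g) f"
  using G unfolding category_def ghom_def by auto

definition ginv :: "'b \<Rightarrow> 'b" where
  "ginv f = (SOME g. g \<in> ghom G (gcod G f) (gdom G f) \<and>
      gcomp G g f = gide G (gdom G f) \<and> gcomp G f g = gide G (gcod G f))"

lemma ginv: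
  assumes "f \<in> ghom G a b" "is_iso G f"
  shows "ginv f \<in> ghom G b a" "gcomp G (ginv f) f = gide G a" "gcomp G f (ginv f) = gide G b"
proof -
  have "\<exists>g. g \<in> ghom G (gcod G f) (gdom G f) \<and>
      gcomp G g f = gide G (gdom G f) \<and> gcomp G f g = gide G (gcod G f)"
    using assms(2) unfolding is_iso_def by blast
  from someI_ex[OF this] assms(1)
  show "ginv f \<in> ghom G b a" "gcomp G (ginv f) f = gide G a" "gcomp G f (ginv f) = gide G b"
    unfolding ginv_def ghom_def by auto
qed

lemma iso_cancel_left:
  assumes "f \<in> ghom G b c" "is_iso G f" "g1 \<in> ghom G a b" "g2 \<in> ghom G a b"
    and "gcomp G f g1 = gcomp G f g2"
  shows "g1 = g2"
proof -
  note f' = ginv[OF assms(1,2)]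
  have "g1 = gcomp G (gcomp G (ginv f) f) g1" using f' cat_id_left[OF assms(3)] by simp
  also have "\<dots> = gcomp G (ginv f) (gcomp G f g2)" using cat_assoc[OF assms(3,1) f'(1)] assms(5) by simp
  also have "\<dots> = gcomp G (gcomp G (ginv f) f) g2" using cat_assoc[OF assms(4,1) f'(1)] by simp
  also have "\<dots> = g2" using f' cat_id_left[OF assms(4)] by simp
  finally show ?thesis .
qed

lemma iso_cancel_right:
  assumes "f \<in> ghom G a b" "is_iso G f" "g1 \<in> ghom G b c" "g2 \<in> ghom G b c"
    and "gcomp G g1 f = gcomp G g2 f"
  shows "g1 = g2"
proof -
  note f' = ginv[OF assms(1,2)]
  have "g1 = gcomp G g1 (gcomp G f (ginv f))" using f' cat_id_right[OF assms(3)] by simp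
  also have "\<dots> = gcomp G (gcomp G g2 f) (ginv f)" using cat_assoc[OF f'(1) assms(1,3)] assms(5) by simp
  also have "\<dots> = gcomp G g2 (gcomp G f (ginv f))" using cat_assoc[OF f'(1) assms(1,4)] by simp
  also have "\<dots> = g2" using f' cat_id_right[OF assms(4)] by simp
  finally show ?thesis .
qed

end

lemma is_functorI:
  assumes "\<And>a. a \<in> gobs G \<Longrightarrow> Fo a \<in> gobs H"
    and "\<And>f a b. f \<in> ghom G a b \<Longrightarrow> Fa f \<in> ghom H (Fo a) (Fo b)"
    and "\<And>a. a \<in> gobs G \<Longrightarrow> Fa (gide G a) = gide H (Fo a)"
    and "\<And>f g a b c. f \<in> ghom G a b \<Longrightarrow> g \<in> ghom G b c \<Longrightarrow> Fa (gcomp G g f) = gcomp H (Fa g) (Fa f)"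
  shows "is_functor G H Fo Fa"
  unfolding is_functor_def using assms by (auto simp: ghom_def)

context
  fixes G :: "('a,'b) gcat" and H :: "('c,'d) gcat" and Fo Fa
  assumes F: "is_functor G H Fo Fa"
begin

lemma functor_ob: "a \<in> gobs G \<Longrightarrow> Fo a \<in> gobs H"
  using F unfolding is_functor_def by auto

lemma functor_hom: "f \<in> ghom G a b \<Longrightarrow> Fa f \<in> ghom H (Fo a) (Fo b)"
  using F unfolding is_functor_def ghom_def by auto

lemma functor_id: "a \<in> gobs G \<Longrightarrow> Fa (gide G a) = gide H (Fo a)"
  using F unfolding is_functor_def by auto

lemma functor_comp: "f \<in> ghom G a b \<Longrightarrow> g \<in> ghom G b c \<Longrightarrow> Fa (gcomp G g f) = gcomp H (Fa g) (Fa f)"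
  using F unfolding is_functor_def ghom_def by auto

lemma functor_iso:
  assumes G: "category G" and f: "f \<in> ghom G a b" "is_iso G f"
  shows "is_iso H (Fa f)"
proof (rule is_isoI)
  note f' = ginv[OF G f]
  show "Fa f \<in> ghom H (Fo a) (Fo b)" "Fa (ginv G f) \<in> ghom H (Fo b) (Fo a)"
    using functor_hom f(1) f'(1) by blast+
  show "gcomp H (Fa (ginv G f)) (Fa f) = gide H (Fo a)"
    using functor_comp[OF f(1) f'(1)] functor_id[OF cat_dom[OF G f(1)]] f'(2) by simp
  show "gcomp H (Fa f) (Fa (ginv G f)) = gide H (Fo b)"
    using functor_comp[OF f'(1) f(1)] functor_id[OF cat_cod[OF G f(1)]] f'(3) by simp
qed

end

definition faithful_functor :: "('a,'b) gcat \<Rightarrow> ('b \<Rightarrow> 'd) \<Rightarrow> bool" where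
  "faithful_functor G Fa \<longleftrightarrow>
     (\<forall>a a' f g. f \<in> ghom G a a' \<longrightarrow> g \<in> ghom G a a' \<longrightarrow> Fa f = Fa g \<longrightarrow> f = g)"

definition full_functor :: "('a,'b) gcat \<Rightarrow> ('c,'d) gcat \<Rightarrow> ('a \<Rightarrow> 'c) \<Rightarrow> ('b \<Rightarrow> 'd) \<Rightarrow> bool" where
  "full_functor G H Fo Fa \<longleftrightarrow>
     (\<forall>a\<in>gobs G. \<forall>a'\<in>gobs G. \<forall>h\<in>ghom H (Fo a) (Fo a'). \<exists>f\<in>ghom G a a'. Fa f = h)"

definition ess_surj_functor :: "('a,'b) gcat \<Rightarrow> ('c,'d) gcat \<Rightarrow> ('a \<Rightarrow> 'c) \<Rightarrow> bool" where
  "ess_surj_functor G H Fo \<longleftrightarrow> (\<forall>b\<in>gobs H. \<exists>a\<in>gobs G. \<exists>e\<in>ghom H (Fo a) b. is_iso H e)"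

lemma grpd_weq_imp_fully_faithful_ess_surj:
  assumes G: "category G" and H: "category H" and W: "grpd_weq G H Fo Fa"
  shows "faithful_functor G Fa" "full_functor G H Fo Fa" "ess_surj_functor G H Fo"
proof -
  have F: "is_functor G H Fo Fa" using W unfolding grpd_weq_def by blast
  from W obtain Go Ga \<eta> \<epsilon> where Gf: "is_functor H G Go Ga"
    and eta: "\<And>a. a \<in> gobs G \<Longrightarrow> \<eta> a \<in> ghom G a (Go (Fo a)) \<and> is_iso G (\<eta> a)"
    and eta_nat: "\<And>f. f \<in> garrs G \<Longrightarrow> gcomp G (\<eta> (gcod G f)) f = gcomp G (Ga (Fa f)) (\<eta> (gdom G f))"
    and eps: "\<And>b. b \<in> gobs H \<Longrightarrow> \<epsilon> b \<in> ghom H (Fo (Go b)) b \<and> is_iso H (\<epsilon> b)"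
    and eps_nat: "\<And>g. g \<in> garrs H \<Longrightarrow> gcomp H (\<epsilon> (gcod H g)) (Fa (Ga g)) = gcomp H g (\<epsilon> (gdom H g))"
    unfolding grpd_weq_def by blast
  have faithful: "f = g" if fg: "f \<in> ghom G a a'" "g \<in> ghom G a a'" "Fa f = Fa g" for f g a a'
  proof -
    have "gcomp G (\<eta> a') f = gcomp G (\<eta> a') g"
      using eta_nat[of f] eta_nat[of g] fg by (simp add: ghom_def)
    then show "f = g" using iso_cancel_left[OF G _ _ fg(1,2)] eta[OF cat_cod[OF G fg(1)]] by blast
  qed
  then show "faithful_functor G Fa" unfolding faithful_functor_def by blast
  have Ga_faithful: "g1 = g2" if g: "g1 \<in> ghom H b b'" "g2 \<in> ghom H b b'" "Ga g1 = Ga g2" for g1 g2 b b'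
  proof -
    have "gcomp H g1 (\<epsilon> b) = gcomp H g2 (\<epsilon> b)" using eps_nat g by (metis ghomD)
    then show ?thesis using iso_cancel_right[OF H _ _ g(1,2)] eps[OF cat_dom[OF H g(1)]] by blast
  qed
  show "full_functor G H Fo Fa" unfolding full_functor_def
  proof (intro ballI)
    fix a a' h assume a: "a \<in> gobs G" "a' \<in> gobs G" and h: "h \<in> ghom H (Fo a) (Fo a')"
    note e1 = eta[OF a(1)] and e2 = eta[OF a(2)]
    note i2 = ginv[OF G conjunct1[OF e2] conjunct2[OF e2]]
    have Gh: "Ga h \<in> ghom G (Go (Fo a)) (Go (Fo a'))" using functor_hom[OF Gf h] .
    define f where "f = gcomp G (ginv G (\<eta> a')) (gcomp G (Ga h) (\<eta> a))"
    have f: "f \<in> ghom G a a'" unfolding f_def using cat_comp[OF G] e1 Gh i2 by blast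
    have Ff: "Fa f \<in> ghom H (Fo a) (Fo a')" using functor_hom[OF F f] .
    have "gcomp G (Ga (Fa f)) (\<eta> a) = gcomp G (\<eta> a') f" using eta_nat[of f] f by (simp add: ghom_def)
    also have "\<dots> = gcomp G (gcomp G (\<eta> a') (ginv G (\<eta> a'))) (gcomp G (Ga h) (\<eta> a))"
      unfolding f_def using cat_assoc[OF G _ i2(1), of _ a] cat_comp[OF G] e1 e2 Gh by blast
    also have "\<dots> = gcomp G (Ga h) (\<eta> a)" using i2(3) cat_id_left[OF G] cat_comp[OF G] e1 Gh by metis
    finally have "Ga (Fa f) = Ga h"
      using iso_cancel_right[OF G conjunct1[OF e1] conjunct2[OF e1] functor_hom[OF Gf Ff] Gh] by blast
    then show "\<exists>f\<in>ghom G a a'. Fa f = h" using Ga_faithful[OF Ff h] f by blast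
  qed
  show "ess_surj_functor G H Fo"
    unfolding ess_surj_functor_def using eps functor_ob[OF Gf] by blast
qed

locale fully_faithful_ess_surj =
  fixes G :: "('a,'b) gcat" and H :: "('c,'d) gcat" and Fo Fa
  assumes G: "category G" and H: "category H" and F: "is_functor G H Fo Fa"
    and faithful: "faithful_functor G Fa" and full: "full_functor G H Fo Fa"
    and ess_surj: "ess_surj_functor G H Fo"
begin

definition inv_ob :: "'c \<Rightarrow> 'a" where
  "inv_ob b = (SOME a. a \<in> gobs G \<and> (\<exists>e\<in>ghom H (Fo a) b. is_iso H e))"

definition counit :: "'c \<Rightarrow> 'd" where
  "counit b = (SOME e. e \<in> ghom H (Fo (inv_ob b)) b \<and> is_iso H e)"

lemma inv_ob_counit:
  assumes "b \<in> gobs H"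
  shows "inv_ob b \<in> gobs G" "counit b \<in> ghom H (Fo (inv_ob b)) b" "is_iso H (counit b)"
proof -
  have "\<exists>a. a \<in> gobs G \<and> (\<exists>e\<in>ghom H (Fo a) b. is_iso H e)"
    using ess_surj assms unfolding ess_surj_functor_def by blast
  then have 1: "inv_ob b \<in> gobs G \<and> (\<exists>e\<in>ghom H (Fo (inv_ob b)) b. is_iso H e)"
    unfolding inv_ob_def by (rule someI_ex)
  then have "counit b \<in> ghom H (Fo (inv_ob b)) b \<and> is_iso H (counit b)"
    unfolding counit_def by (metis (mono_tags, lifting) someI_ex)
  then show "inv_ob b \<in> gobs G" "counit b \<in> ghom H (Fo (inv_ob b)) b" "is_iso H (counit b)"
    using 1 by blast+
qed

abbreviation counit_inv :: "'c \<Rightarrow> 'd" where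
  "counit_inv b \<equiv> ginv H (counit b)"

lemma counit_inv:
  assumes "b \<in> gobs H"
  shows "counit_inv b \<in> ghom H b (Fo (inv_ob b))"
    "gcomp H (counit_inv b) (counit b) = gide H (Fo (inv_ob b))"
    "gcomp H (counit b) (counit_inv b) = gide H b"
  using ginv[OF H] inv_ob_counit[OF assms] by blast+

lemma faithfulD: "f \<in> ghom G a a' \<Longrightarrow> g \<in> ghom G a a' \<Longrightarrow> Fa f = Fa g \<Longrightarrow> f = g"
  using faithful unfolding faithful_functor_def by blast

lemma fullD: "a \<in> gobs G \<Longrightarrow> a' \<in> gobs G \<Longrightarrow> h \<in> ghom H (Fo a) (Fo a') \<Longrightarrow> \<exists>f\<in>ghom G a a'. Fa f = h"
  using full unfolding full_functor_def by blast

definition inv_ar :: "'d \<Rightarrow> 'b" where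
  "inv_ar g = (SOME f. f \<in> ghom G (inv_ob (gdom H g)) (inv_ob (gcod H g)) \<and>
     Fa f = gcomp H (counit_inv (gcod H g)) (gcomp H g (counit (gdom H g))))"

lemma inv_ar:
  assumes g: "g \<in> ghom H b b'"
  shows "inv_ar g \<in> ghom G (inv_ob b) (inv_ob b')"
    "Fa (inv_ar g) = gcomp H (counit_inv b') (gcomp H g (counit b))"
proof -
  have b: "b \<in> gobs H" "b' \<in> gobs H" using cat_dom[OF H g] cat_cod[OF H g] by auto
  have "gcomp H (counit_inv b') (gcomp H g (counit b)) \<in> ghom H (Fo (inv_ob b)) (Fo (inv_ob b'))"
    using cat_comp[OF H cat_comp[OF H inv_ob_counit(2)[OF b(1)] g] counit_inv(1)[OF b(2)]] .
  then have "\<exists>f. f \<in> ghom G (inv_ob b) (inv_ob b') \<and> Fa f = gcomp H (counit_inv b') (gcomp H g (counit b))"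
    using fullD inv_ob_counit b by blast
  from someI_ex[OF this] g
  show "inv_ar g \<in> ghom G (inv_ob b) (inv_ob b')"
    "Fa (inv_ar g) = gcomp H (counit_inv b') (gcomp H g (counit b))"
    unfolding inv_ar_def ghom_def by auto
qed

lemma inv_ar_gide: "b \<in> gobs H \<Longrightarrow> inv_ar (gide H b) = gide G (inv_ob b)"
  using faithfulD[OF inv_ar(1)[OF cat_id[OF H]] cat_id[OF G inv_ob_counit(1)]] inv_ar(2)[OF cat_id[OF H]]
    cat_id_left[OF H inv_ob_counit(2)] counit_inv(2) functor_id[OF F inv_ob_counit(1)] by simp

lemma inv_ar_gcomp:
  assumes fg: "f \<in> ghom H a b" "g \<in> ghom H b c"
  shows "inv_ar (gcomp H g f) = gcomp G (inv_ar g) (inv_ar f)"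
proof (rule faithfulD)
  have abc: "a \<in> gobs H" "b \<in> gobs H" "c \<in> gobs H"
    using cat_dom[OF H fg(1)] cat_cod[OF H fg(1)] cat_cod[OF H fg(2)] by auto
  have ea: "counit a \<in> ghom H (Fo (inv_ob a)) a" and eb: "counit b \<in> ghom H (Fo (inv_ob b)) b"
    using inv_ob_counit abc by blast+
  note eb' = counit_inv[OF abc(2)] and ec' = counit_inv[OF abc(3)]
  have gf: "gcomp H g f \<in> ghom H a c" using cat_comp[OF H fg] .
  show "inv_ar (gcomp H g f) \<in> ghom G (inv_ob a) (inv_ob c)" using inv_ar gf by blast
  show "gcomp G (inv_ar g) (inv_ar f) \<in> ghom G (inv_ob a) (inv_ob c)" using cat_comp[OF G] inv_ar fg by blast
  have x1: "gcomp H f (counit a) \<in> ghom H (Fo (inv_ob a)) b" using cat_comp[OF H ea fg(1)] .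
  have x2: "gcomp H (counit_inv b) (gcomp H f (counit a)) \<in> ghom H (Fo (inv_ob a)) (Fo (inv_ob b))"
    using cat_comp[OF H x1 eb'(1)] .
  have "Fa (gcomp G (inv_ar g) (inv_ar f))
      = gcomp H (gcomp H (counit_inv c) (gcomp H g (counit b)))
        (gcomp H (counit_inv b) (gcomp H f (counit a)))"
    using functor_comp[OF F inv_ar(1)[OF fg(1)] inv_ar(1)[OF fg(2)]] inv_ar(2)[OF fg(1)] inv_ar(2)[OF fg(2)]
      by simp
  also have "\<dots> = gcomp H (counit_inv c) (gcomp H (gcomp H g (counit b)) (gcomp H (counit_inv b) (gcomp H f (counit a))))"
    using cat_assoc[OF H x2 cat_comp[OF H eb fg(2)] ec'(1)] by simp
  also have "gcomp H (gcomp H g (counit b)) (gcomp H (counit_inv b) (gcomp H f (counit a)))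
      = gcomp H g (gcomp H (gcomp H (counit b) (counit_inv b)) (gcomp H f (counit a)))"
    using cat_assoc[OF H x2 eb fg(2)] cat_assoc[OF H x1 eb'(1) eb] by simp
  also have "\<dots> = gcomp H (gcomp H g f) (counit a)"
    using eb'(3) cat_id_left[OF H x1] cat_assoc[OF H ea fg] by simp
  also have "gcomp H (counit_inv c) \<dots> = Fa (inv_ar (gcomp H g f))"
    using inv_ar(2)[OF gf] by simp
  finally show "Fa (inv_ar (gcomp H g f)) = Fa (gcomp G (inv_ar g) (inv_ar f))" by simp
qed

lemma inv_is_functor: "is_functor H G inv_ob inv_ar"
  using inv_ob_counit inv_ar inv_ar_gide inv_ar_gcomp by (intro is_functorI) blast+

lemma counit_natural:
  assumes g: "g \<in> ghom H b b'"
  shows "gcomp H (counit b') (Fa (inv_ar g)) = gcomp H g (counit b)"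
proof -
  have b: "b \<in> gobs H" "b' \<in> gobs H" using cat_dom[OF H g] cat_cod[OF H g] by auto
  note eb' = counit_inv[OF b(2)]
  have x: "gcomp H g (counit b) \<in> ghom H (Fo (inv_ob b)) b'"
    using cat_comp[OF H _ g] inv_ob_counit[OF b(1)] by blast
  have "gcomp H (counit b') (Fa (inv_ar g)) = gcomp H (gcomp H (counit b') (counit_inv b')) (gcomp H g (counit b))"
    using inv_ar(2)[OF g] cat_assoc[OF H x eb'(1)] inv_ob_counit[OF b(2)] by simp
  also have "\<dots> = gcomp H g (counit b)" using eb'(3) cat_id_left[OF H x] by simp
  finally show ?thesis .
qed

definition unit :: "'a \<Rightarrow> 'b" where
  "unit a = (SOME f. f \<in> ghom G a (inv_ob (Fo a)) \<and> Fa f = counit_inv (Fo a))"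

lemma unit:
  assumes a: "a \<in> gobs G"
  shows "unit a \<in> ghom G a (inv_ob (Fo a))" "Fa (unit a) = counit_inv (Fo a)"
proof -
  have "\<exists>f. f \<in> ghom G a (inv_ob (Fo a)) \<and> Fa f = counit_inv (Fo a)"
    using fullD a inv_ob_counit counit_inv functor_ob[OF F a] by blast
  then show "unit a \<in> ghom G a (inv_ob (Fo a))" "Fa (unit a) = counit_inv (Fo a)"
    unfolding unit_def by (metis (mono_tags, lifting) someI_ex)+
qed

lemma unit_iso:
  assumes a: "a \<in> gobs G"
  shows "is_iso G (unit a)"
proof -
  have Fa: "Fo a \<in> gobs H" using functor_ob[OF F a] .
  have ga: "inv_ob (Fo a) \<in> gobs G" using inv_ob_counit[OF Fa] by blast
  obtain f' where f': "f' \<in> ghom G (inv_ob (Fo a)) a" "Fa f' = counit (Fo a)"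
    using fullD[OF ga a] inv_ob_counit[OF Fa] by blast
  note u = unit[OF a]
  show ?thesis
  proof (rule is_isoI[OF u(1) f'(1)])
    show "gcomp G f' (unit a) = gide G a"
      using faithfulD[OF cat_comp[OF G u(1) f'(1)] cat_id[OF G a]] functor_comp[OF F u(1) f'(1)]
        f'(2) u(2) counit_inv(3)[OF Fa] functor_id[OF F a] by simp
    show "gcomp G (unit a) f' = gide G (inv_ob (Fo a))"
      using faithfulD[OF cat_comp[OF G f'(1) u(1)] cat_id[OF G ga]] functor_comp[OF F f'(1) u(1)]
        f'(2) u(2) counit_inv(2)[OF Fa] functor_id[OF F ga] by simp
  qed
qed

lemma unit_natural:
  assumes f: "f \<in> ghom G a a'"
  shows "gcomp G (unit a') f = gcomp G (inv_ar (Fa f)) (unit a)"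
proof (rule faithfulD)
  have a: "a \<in> gobs G" "a' \<in> gobs G" using cat_dom[OF G f] cat_cod[OF G f] by auto
  have Fa: "Fo a \<in> gobs H" "Fo a' \<in> gobs H" using functor_ob[OF F] a by blast+
  note ua = unit[OF a(1)] and ua' = unit[OF a(2)] and ea' = counit_inv[OF Fa(1)]
  have ea: "counit (Fo a) \<in> ghom H (Fo (inv_ob (Fo a))) (Fo a)" using inv_ob_counit[OF Fa(1)] by blast
  have Ff: "Fa f \<in> ghom H (Fo a) (Fo a')" using functor_hom[OF F f] .
  note GFf = inv_ar[OF Ff]
  show "gcomp G (unit a') f \<in> ghom G a (inv_ob (Fo a'))" using cat_comp[OF G f ua'(1)] .
  show "gcomp G (inv_ar (Fa f)) (unit a) \<in> ghom G a (inv_ob (Fo a'))" using cat_comp[OF G ua(1) GFf(1)] .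
  have x: "gcomp H (Fa f) (counit (Fo a)) \<in> ghom H (Fo (inv_ob (Fo a))) (Fo a')"
    using cat_comp[OF H ea Ff] .
  have "Fa (gcomp G (inv_ar (Fa f)) (unit a))
      = gcomp H (counit_inv (Fo a')) (gcomp H (gcomp H (Fa f) (counit (Fo a))) (counit_inv (Fo a)))"
    using functor_comp[OF F ua(1) GFf(1)] GFf(2) ua(2)
      cat_assoc[OF H ea'(1) x counit_inv(1)[OF Fa(2)]] by simp
  also have "gcomp H (gcomp H (Fa f) (counit (Fo a))) (counit_inv (Fo a)) = Fa f"
    using cat_assoc[OF H ea'(1) ea Ff] ea'(3) cat_id_right[OF H Ff] by simp
  also have "gcomp H (counit_inv (Fo a')) (Fa f) = Fa (gcomp G (unit a') f)"
    using functor_comp[OF F f ua'(1)] ua'(2) by simp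
  finally show "Fa (gcomp G (unit a') f) = Fa (gcomp G (inv_ar (Fa f)) (unit a))" by simp
qed

lemma grpd_weq: "grpd_weq G H Fo Fa"
  unfolding grpd_weq_def
proof (intro conjI exI[of _ inv_ob] exI[of _ inv_ar] exI[of _ unit] exI[of _ counit])
  show "\<forall>f\<in>garrs G. gcomp G (unit (gcod G f)) f = gcomp G (inv_ar (Fa f)) (unit (gdom G f))"
    using unit_natural[OF garrs_ghom] by blast
  show "\<forall>g\<in>garrs H. gcomp H (counit (gcod H g)) (Fa (inv_ar g)) = gcomp H g (counit (gdom H g))"
    using counit_natural[OF garrs_ghom] by blast
qed (use F inv_is_functor unit unit_iso inv_ob_counit in blast)+

end

lemma grpd_weq_iff_fully_faithful_ess_surj:
  assumes "category G" "category H"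
  shows "grpd_weq G H Fo Fa \<longleftrightarrow>
    is_functor G H Fo Fa \<and> faithful_functor G Fa \<and> full_functor G H Fo Fa \<and> ess_surj_functor G H Fo"
proof
  show "grpd_weq G H Fo Fa \<Longrightarrow> is_functor G H Fo Fa \<and> faithful_functor G Fa \<and>
      full_functor G H Fo Fa \<and> ess_surj_functor G H Fo"
    using grpd_weq_imp_fully_faithful_ess_surj[OF assms] unfolding grpd_weq_def by blast
  show "is_functor G H Fo Fa \<and> faithful_functor G Fa \<and> full_functor G H Fo Fa \<and> ess_surj_functor G H Fo
      \<Longrightarrow> grpd_weq G H Fo Fa"
    using fully_faithful_ess_surj.grpd_weq[OF fully_faithful_ess_surj.intro[OF assms]] by blast
qed

section \<open>Colimits over the category of elements of a point\<close>

context
  fixes C :: "('o,'m) gcat" and A :: "'o \<Rightarrow> 'v set" and r :: "'m \<Rightarrow> 'v \<Rightarrow> 'v"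
  assumes P: "presheaf_of_sets C \<lparr>pshob = A, pshar = r\<rparr>"
begin

lemma psh_restrict_mem: "g \<in> ghom C W U \<Longrightarrow> a \<in> A U \<Longrightarrow> r g a \<in> A W"
  using P unfolding presheaf_of_sets_def ghom_def by auto

lemma psh_restrict_id: "U \<in> gobs C \<Longrightarrow> a \<in> A U \<Longrightarrow> r (gide C U) a = a"
  using P unfolding presheaf_of_sets_def by auto

lemma psh_restrict_comp:
  "k \<in> ghom C W' W \<Longrightarrow> g \<in> ghom C W U \<Longrightarrow> a \<in> A U \<Longrightarrow> r (gcomp C g k) a = r k (r g a)"
  using P unfolding presheaf_of_sets_def ghom_def by auto

end

context
  fixes C :: "('o,'m) gcat" and u :: "('o,'m,'x) setfunctor"
    and A :: "'o \<Rightarrow> 'v set" and r :: "'m \<Rightarrow> 'v \<Rightarrow> 'v"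
begin

lemma colim_carrier_iff: "(U,x,a) \<in> colim_carrier C u A \<longleftrightarrow> U \<in> gobs C \<and> x \<in> sob u U \<and> a \<in> A U"
  unfolding colim_carrier_def by simp

lemma colim_eq_refl: "colim_eq C u A r p p"
  unfolding colim_eq_def by simp

lemma colim_eq_sym: "colim_eq C u A r p q \<Longrightarrow> colim_eq C u A r q p"
  unfolding colim_eq_def
proof (induction rule: rtranclp_induct)
  case (step q s)
  then show ?case by (metis (mono_tags, lifting) converse_rtranclp_into_rtranclp)
qed simp

lemma colim_eq_trans: "colim_eq C u A r p q \<Longrightarrow> colim_eq C u A r q s \<Longrightarrow> colim_eq C u A r p s"
  unfolding colim_eq_def by (rule rtranclp_trans)

lemma colim_class_eq_iff:
  assumes "q \<in> colim_carrier C u A"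
  shows "colim_class C u A r p = colim_class C u A r q \<longleftrightarrow> colim_eq C u A r p q"
proof
  assume "colim_class C u A r p = colim_class C u A r q"
  then have "q \<in> colim_class C u A r p" unfolding colim_class_def using assms colim_eq_refl by auto
  then show "colim_eq C u A r p q" unfolding colim_class_def by auto
next
  assume "colim_eq C u A r p q"
  then show "colim_class C u A r p = colim_class C u A r q"
    unfolding colim_class_def using colim_eq_sym colim_eq_trans by blast
qed

lemma colim_class_some:
  assumes "p \<in> colim_carrier C u A"
  obtains V y b where "(SOME t. t \<in> colim_class C u A r p) = (V,y,b)"
    "(V,y,b) \<in> colim_carrier C u A" "colim_eq C u A r p (V,y,b)"
proof -
  have "p \<in> colim_class C u A r p" unfolding colim_class_def using assms colim_eq_refl by blast
  then have t: "(SOME t. t \<in> colim_class C u A r p) \<in> colim_class C u A r p" by (rule someI)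
  obtain V y b where eq: "(SOME t. t \<in> colim_class C u A r p) = (V,y,b)"
    by (cases "SOME t. t \<in> colim_class C u A r p") blast
  show ?thesis using that[OF eq] t[unfolded eq] unfolding colim_class_def by blast
qed

end

lemma colim_eq_map:
  assumes "colim_eq C u A r p q"
    and maps: "\<And>U a. U \<in> gobs C \<Longrightarrow> a \<in> A U \<Longrightarrow> \<phi> U a \<in> B U"
    and natural: "\<And>g a V U. g \<in> ghom C V U \<Longrightarrow> a \<in> A U \<Longrightarrow> \<phi> V (r g a) = r' g (\<phi> U a)"
  shows "colim_eq C u B r' (case p of (U,x,a) \<Rightarrow> (U,x,\<phi> U a)) (case q of (U,x,a) \<Rightarrow> (U,x,\<phi> U a))"
proof -
  let ?m = "\<lambda>p. case p of (U,x,a) \<Rightarrow> (U,x,\<phi> U a)"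
  have map_step: "colim_step C u B r' (?m p) (?m q)" if "colim_step C u A r p q" for p q
  proof -
    from that obtain U x a V y g where pq: "p = (U,x,a)" "q = (V,y,r g a)" "U \<in> gobs C" "x \<in> sob u U"
      "a \<in> A U" "g \<in> ghom C V U" "y \<in> sob u V" "sar u g y = x"
      unfolding colim_step_def by blast
    show ?thesis unfolding colim_step_def pq using pq maps natural by auto
  qed
  from assms(1) show ?thesis unfolding colim_eq_def
  proof (induction rule: rtranclp_induct)
    case (step q s)
    then have "colim_step C u B r' (?m q) (?m s) \<or> colim_step C u B r' (?m s) (?m q)"
      using map_step by blast
    then show ?case using rtranclp.rtrancl_into_rtrancl[OF step.IH] by blast
  qed simp
qed

text \<open>The operations of a stalk are defined on a chosen representative of a class; for a
  map compatible with restrictions the choice does not matter.\<close>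
lemma colim_class_map_some:
  assumes p: "(U,x,a) \<in> colim_carrier C u A"
    and maps: "\<And>U a. U \<in> gobs C \<Longrightarrow> a \<in> A U \<Longrightarrow> \<phi> U a \<in> B U"
    and natural: "\<And>g a V U. g \<in> ghom C V U \<Longrightarrow> a \<in> A U \<Longrightarrow> \<phi> V (r g a) = r' g (\<phi> U a)"
  shows "(case SOME t. t \<in> colim_class C u A r (U,x,a) of (V,y,b) \<Rightarrow> colim_class C u B r' (V,y,\<phi> V b))
    = colim_class C u B r' (U,x,\<phi> U a)"
proof -
  obtain V y b where t: "(SOME t. t \<in> colim_class C u A r (U,x,a)) = (V,y,b)"
    and V: "(V,y,b) \<in> colim_carrier C u A" and eq: "colim_eq C u A r (U,x,a) (V,y,b)"
    using colim_class_some[OF p] by blast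
  have "colim_eq C u B r' (U,x,\<phi> U a) (V,y,\<phi> V b)"
    using colim_eq_map[where \<phi>=\<phi>, OF eq maps natural] by simp
  moreover have "(V,y,\<phi> V b) \<in> colim_carrier C u B"
    using V maps unfolding colim_carrier_iff by blast
  ultimately have "colim_class C u B r' (U,x,\<phi> U a) = colim_class C u B r' (V,y,\<phi> V b)"
    using colim_class_eq_iff by blast
  then show ?thesis unfolding t by simp
qed

locale flat_point =
  fixes C :: "('o,'m) gcat" and u :: "('o,'m,'x) setfunctor"
  assumes cat: "category C" and flat: "flat C u"
begin

definition el_arr :: "'o \<Rightarrow> 'x \<Rightarrow> 'm \<Rightarrow> 'o \<Rightarrow> 'x \<Rightarrow> bool" where
  "el_arr W z g U x \<longleftrightarrow> W \<in> gobs C \<and> z \<in> sob u W \<and> g \<in> ghom C W U \<and> sar u g z = x"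

lemma point_set_functor: "set_functor C u"
  using flat unfolding flat_def by blast

lemma point_map_mem: "g \<in> ghom C W U \<Longrightarrow> z \<in> sob u W \<Longrightarrow> sar u g z \<in> sob u U"
  using point_set_functor unfolding set_functor_def ghom_def by auto

lemma el_arrD:
  "el_arr W z g U x \<Longrightarrow> U \<in> gobs C \<and> x \<in> sob u U \<and> W \<in> gobs C \<and> z \<in> sob u W \<and> g \<in> ghom C W U"
  unfolding el_arr_def using point_map_mem cat_cod[OF cat] by blast

lemma el_arr_hom: "el_arr W z g U x \<Longrightarrow> g \<in> ghom C W U"
  unfolding el_arr_def by blast

lemma el_arr_id: "U \<in> gobs C \<Longrightarrow> x \<in> sob u U \<Longrightarrow> el_arr U x (gide C U) U x"
  unfolding el_arr_def using cat_id[OF cat] point_set_functor unfolding set_functor_def by auto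

lemma el_arr_comp: "el_arr W z g U x \<Longrightarrow> el_arr W' z' k W z \<Longrightarrow> el_arr W' z' (gcomp C g k) U x"
  unfolding el_arr_def using cat_comp[OF cat] point_set_functor unfolding set_functor_def ghom_def by auto

lemma el_cone:
  "U \<in> gobs C \<Longrightarrow> V \<in> gobs C \<Longrightarrow> x \<in> sob u U \<Longrightarrow> y \<in> sob u V \<Longrightarrow>
    \<exists>W z g h. el_arr W z g U x \<and> el_arr W z h V y"
  using flat unfolding flat_def el_arr_def by blast

lemma el_equalize:
  "el_arr W z g U x \<Longrightarrow> el_arr W z h U x \<Longrightarrow> \<exists>W' z' k. el_arr W' z' k W z \<and> gcomp C g k = gcomp C h k"
  using flat unfolding flat_def el_arr_def by metis

context
  fixes A :: "'o \<Rightarrow> 'v set" and r :: "'m \<Rightarrow> 'v \<Rightarrow> 'v"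
  assumes P: "presheaf_of_sets C \<lparr>pshob = A, pshar = r\<rparr>"
begin

lemma el_arr_restrict_comp:
  "el_arr W z g U x \<Longrightarrow> el_arr W' z' k W z \<Longrightarrow> a \<in> A U \<Longrightarrow> r (gcomp C g k) a = r k (r g a)"
  using psh_restrict_comp[OF P] el_arrD by blast

lemma colim_class_restrict:
  assumes "el_arr W z g U x" "a \<in> A U"
  shows "colim_class C u A r (U,x,a) = colim_class C u A r (W,z,r g a)"
proof -
  have "colim_step C u A r (U,x,a) (W,z,r g a)"
    unfolding colim_step_def using assms el_arrD[OF assms(1)] unfolding el_arr_def by blast
  then have "colim_eq C u A r (U,x,a) (W,z,r g a)" unfolding colim_eq_def by auto
  moreover have "(W,z,r g a) \<in> colim_carrier C u A"
    using el_arrD[OF assms(1)] psh_restrict_mem[OF P _ assms(2)] by (simp add: colim_carrier_iff)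
  ultimately show ?thesis using colim_class_eq_iff by blast
qed

text \<open>Since the category of elements of a flat functor is cofiltered, the equivalence
  relation generated by the restriction maps is equality after restriction to a common stage.\<close>
definition same_germ :: "'o \<times> 'x \<times> 'v \<Rightarrow> 'o \<times> 'x \<times> 'v \<Rightarrow> bool" where
  "same_germ p q \<longleftrightarrow> (case p of (U,x,a) \<Rightarrow> case q of (V,y,b) \<Rightarrow>
     (\<exists>W z g h. el_arr W z g U x \<and> el_arr W z h V y \<and> a \<in> A U \<and> b \<in> A V \<and> r g a = r h b))"

lemma same_germ_sym: "same_germ p q \<Longrightarrow> same_germ q p"
  unfolding same_germ_def by (auto split: prod.splits) metis

lemma same_germ_refl: "p \<in> colim_carrier C u A \<Longrightarrow> same_germ p p"
proof -
  assume "p \<in> colim_carrier C u A"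
  then obtain U x a where "p = (U,x,a)" "U \<in> gobs C" "x \<in> sob u U" "a \<in> A U"
    unfolding colim_carrier_def by auto
  then show ?thesis unfolding same_germ_def using el_arr_id by blast
qed

lemma same_germ_trans:
  assumes "same_germ p q" "same_germ q s"
  shows "same_germ p s"
proof -
  obtain U x a V y b S t c where pqs: "p = (U,x,a)" "q = (V,y,b)" "s = (S,t,c)"
    by (cases p, cases q, cases s) auto
  from assms(1) obtain W1 z1 g1 h1 where
    1: "el_arr W1 z1 g1 U x" "el_arr W1 z1 h1 V y" "a \<in> A U" "b \<in> A V" "r g1 a = r h1 b"
    unfolding same_germ_def pqs by auto
  from assms(2) obtain W2 z2 g2 h2 where
    2: "el_arr W2 z2 g2 V y" "el_arr W2 z2 h2 S t" "c \<in> A S" "r g2 b = r h2 c"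
    unfolding same_germ_def pqs by auto
  obtain W3 z3 k1 k2 where 3: "el_arr W3 z3 k1 W1 z1" "el_arr W3 z3 k2 W2 z2"
    using el_cone el_arrD[OF 1(1)] el_arrD[OF 2(1)] by blast
  have "el_arr W3 z3 (gcomp C h1 k1) V y" "el_arr W3 z3 (gcomp C g2 k2) V y"
    using el_arr_comp 1 2 3 by blast+
  then obtain W4 z4 m where 4: "el_arr W4 z4 m W3 z3" "gcomp C (gcomp C h1 k1) m = gcomp C (gcomp C g2 k2) m"
    using el_equalize by blast
  have m: "m \<in> ghom C W4 W3" "k1 \<in> ghom C W3 W1" "k2 \<in> ghom C W3 W2"
    and hg: "h1 \<in> ghom C W1 V" "g2 \<in> ghom C W2 V"
    using el_arrD 1 2 3 4 by blast+
  have 5: "gcomp C h1 (gcomp C k1 m) = gcomp C g2 (gcomp C k2 m)"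
    using cat_assoc[OF cat m(1,2) hg(1)] cat_assoc[OF cat m(1,3) hg(2)] 4(2) by simp
  have l: "el_arr W4 z4 (gcomp C k1 m) W1 z1" "el_arr W4 z4 (gcomp C k2 m) W2 z2"
    using el_arr_comp 3 4(1) by blast+
  have "r (gcomp C g1 (gcomp C k1 m)) a = r (gcomp C k1 m) (r h1 b)"
    using el_arr_restrict_comp[OF 1(1) l(1) 1(3)] 1(5) by simp
  also have "\<dots> = r (gcomp C g2 (gcomp C k2 m)) b"
    using el_arr_restrict_comp[OF 1(2) l(1) 1(4)] 5 by simp
  also have "\<dots> = r (gcomp C h2 (gcomp C k2 m)) c"
    using el_arr_restrict_comp[OF 2(1) l(2) 1(4)] el_arr_restrict_comp[OF 2(2) l(2) 2(3)] 2(4) by simp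
  finally have "r (gcomp C g1 (gcomp C k1 m)) a = r (gcomp C h2 (gcomp C k2 m)) c" .
  moreover have "el_arr W4 z4 (gcomp C g1 (gcomp C k1 m)) U x" "el_arr W4 z4 (gcomp C h2 (gcomp C k2 m)) S t"
    using el_arr_comp 1(1) 2(2) l by blast+
  ultimately show ?thesis unfolding same_germ_def pqs using 1(3) 2(3) by blast
qed

lemma colim_step_same_germ: "colim_step C u A r p q \<Longrightarrow> same_germ p q"
proof -
  assume "colim_step C u A r p q"
  then obtain U x a V y g where pq: "p = (U,x,a)" "q = (V,y,r g a)" "a \<in> A U"
    and V: "g \<in> ghom C V U" "y \<in> sob u V" "sar u g y = x"
    unfolding colim_step_def by blast
  have "V \<in> gobs C" using cat_dom[OF cat V(1)] .
  then have V: "V \<in> gobs C" "y \<in> sob u V" "g \<in> ghom C V U" "el_arr V y g U x"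
    using V unfolding el_arr_def by blast+
  have "r (gide C V) (r g a) = r g a"
    using psh_restrict_id[OF P V(1) psh_restrict_mem[OF P V(3) pq(3)]] .
  then show ?thesis unfolding same_germ_def pq
    using pq(3) V(4) el_arr_id[OF V(1,2)] psh_restrict_mem[OF P V(3) pq(3)] by fastforce
qed

lemma colim_eq_same_germ: "colim_eq C u A r p q \<Longrightarrow> p \<in> colim_carrier C u A \<Longrightarrow> same_germ p q"
  unfolding colim_eq_def
proof (induction rule: rtranclp_induct)
  case base then show ?case using same_germ_refl by blast
next
  case (step q s) then show ?case using same_germ_trans same_germ_sym colim_step_same_germ by blast
qed

lemma colim_class_eq_imp_restrict_eq:
  assumes "colim_class C u A r (U,x,a) = colim_class C u A r (U,x,b)"
    and "U \<in> gobs C" "x \<in> sob u U" "a \<in> A U" "b \<in> A U"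
  shows "\<exists>W z k. el_arr W z k U x \<and> r k a = r k b"
proof -
  have car: "(U,x,a) \<in> colim_carrier C u A" "(U,x,b) \<in> colim_carrier C u A"
    using assms(2-5) by (simp_all add: colim_carrier_iff)
  have "same_germ (U,x,a) (U,x,b)"
    using colim_eq_same_germ[OF colim_class_eq_iff[OF car(2), THEN iffD1, OF assms(1)] car(1)] .
  then obtain W z g h where 1: "el_arr W z g U x" "el_arr W z h U x" "r g a = r h b"
    unfolding same_germ_def by auto
  obtain W' z' m where 2: "el_arr W' z' m W z" "gcomp C g m = gcomp C h m"
    using el_equalize[OF 1(1,2)] by blast
  have "r (gcomp C g m) a = r (gcomp C g m) b"
    using el_arr_restrict_comp[OF 1(1) 2(1) assms(4)] el_arr_restrict_comp[OF 1(2) 2(1) assms(5)] 1(3) 2(2)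
    by simp
  then show ?thesis using el_arr_comp[OF 1(1) 2(1)] by blast
qed

lemma colim_class_eq2_imp_restrict_eq:
  assumes "colim_class C u A r (U,x,a) = colim_class C u A r (V,y,a')"
    and "colim_class C u A r (U,x,b) = colim_class C u A r (V,y,b')"
    and U: "U \<in> gobs C" "x \<in> sob u U" and V: "V \<in> gobs C" "y \<in> sob u V"
    and "a \<in> A U" "b \<in> A U" "a' \<in> A V" "b' \<in> A V"
  shows "\<exists>W z g h. el_arr W z g U x \<and> el_arr W z h V y \<and> r g a = r h a' \<and> r g b = r h b'"
proof -
  obtain W0 z0 g0 h0 where 0: "el_arr W0 z0 g0 U x" "el_arr W0 z0 h0 V y" using el_cone U V by blast
  have W0: "W0 \<in> gobs C" "z0 \<in> sob u W0" "g0 \<in> ghom C W0 U" "h0 \<in> ghom C W0 V" using el_arrD 0 by blast+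
  note mem0 = psh_restrict_mem[OF P W0(3)] psh_restrict_mem[OF P W0(4)]
  have "colim_class C u A r (W0,z0,r g0 a) = colim_class C u A r (W0,z0,r h0 a')"
    using colim_class_restrict[OF 0(1) assms(7)] colim_class_restrict[OF 0(2) assms(9)] assms(1) by simp
  then obtain W1 z1 k where 1: "el_arr W1 z1 k W0 z0" "r k (r g0 a) = r k (r h0 a')"
    using colim_class_eq_imp_restrict_eq W0 mem0 assms(7,9) by blast
  have W1: "W1 \<in> gobs C" "z1 \<in> sob u W1" "k \<in> ghom C W1 W0" using el_arrD 1 by blast+
  have "colim_class C u A r (W1,z1,r k (r g0 b)) = colim_class C u A r (W1,z1,r k (r h0 b'))"
    using colim_class_restrict[OF 0(1) assms(8)] colim_class_restrict[OF 0(2) assms(10)] assms(2)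
      colim_class_restrict[OF 1(1) mem0(1)[OF assms(8)]] colim_class_restrict[OF 1(1) mem0(2)[OF assms(10)]]
    by simp
  then obtain W2 z2 m where 2: "el_arr W2 z2 m W1 z1" "r m (r k (r g0 b)) = r m (r k (r h0 b'))"
    using colim_class_eq_imp_restrict_eq W1 psh_restrict_mem[OF P W1(3)] mem0 assms(8,10) by blast
  have km: "el_arr W2 z2 (gcomp C k m) W0 z0" using el_arr_comp 1(1) 2(1) by blast
  note comp = el_arr_restrict_comp[OF _ km] el_arr_restrict_comp[OF 1(1) 2(1)]
  have "r (gcomp C g0 (gcomp C k m)) a = r (gcomp C h0 (gcomp C k m)) a'"
    "r (gcomp C g0 (gcomp C k m)) b = r (gcomp C h0 (gcomp C k m)) b'"
    using comp 0 1(2) 2(2) mem0 assms(7-10) by simp_all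
  moreover have "el_arr W2 z2 (gcomp C g0 (gcomp C k m)) U x" "el_arr W2 z2 (gcomp C h0 (gcomp C k m)) V y"
    using el_arr_comp 0 km by blast+
  ultimately show ?thesis by blast
qed

end

end

definition presheaf_of_categories :: "('o,'m) gcat \<Rightarrow> ('o,'m,'a,'b) pgrpd \<Rightarrow> bool" where
  "presheaf_of_categories C X \<longleftrightarrow>
     (\<forall>U\<in>gobs C. category (psec X U)) \<and>
     (\<forall>f\<in>garrs C. is_functor (psec X (gcod C f)) (psec X (gdom C f)) (prob X f) (prar X f)) \<and>
     (\<forall>U\<in>gobs C. (\<forall>a\<in>gobs (psec X U). prob X (gide C U) a = a) \<and>
                  (\<forall>\<alpha>\<in>garrs (psec X U). prar X (gide C U) \<alpha> = \<alpha>)) \<and>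
     (\<forall>f\<in>garrs C. \<forall>g\<in>garrs C. gcod C f = gdom C g \<longrightarrow>
        (\<forall>a\<in>gobs (psec X (gcod C g)). prob X (gcomp C g f) a = prob X f (prob X g a)) \<and>
        (\<forall>\<alpha>\<in>garrs (psec X (gcod C g)). prar X (gcomp C g f) \<alpha> = prar X f (prar X g \<alpha>)))"

lemma presheaf_of_groupoids_imp_categories: "presheaf_of_groupoids C X \<Longrightarrow> presheaf_of_categories C X"
  unfolding presheaf_of_groupoids_def presheaf_of_categories_def groupoid_def by blast

context
  fixes C :: "('o,'m) gcat" and X :: "('o,'m,'a,'b) pgrpd"
  assumes X: "presheaf_of_categories C X"
begin

lemma section_category: "U \<in> gobs C \<Longrightarrow> category (psec X U)"
  using X unfolding presheaf_of_categories_def by blast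

lemma restriction_functor: "g \<in> ghom C W U \<Longrightarrow> is_functor (psec X U) (psec X W) (prob X g) (prar X g)"
  using X unfolding presheaf_of_categories_def ghom_def by blast

lemma obs_presheaf: "presheaf_of_sets C \<lparr>pshob = \<lambda>U. gobs (psec X U), pshar = prob X\<rparr>"
  using X unfolding presheaf_of_sets_def presheaf_of_categories_def is_functor_def by auto

lemma arrs_presheaf: "presheaf_of_sets C \<lparr>pshob = \<lambda>U. garrs (psec X U), pshar = prar X\<rparr>"
  using X unfolding presheaf_of_sets_def presheaf_of_categories_def is_functor_def ghom_def by auto

lemma restrict_dom:
  "g \<in> ghom C V U \<Longrightarrow> \<alpha> \<in> garrs (psec X U) \<Longrightarrow> gdom (psec X V) (prar X g \<alpha>) = prob X g (gdom (psec X U) \<alpha>)"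
  using functor_hom[OF restriction_functor garrs_ghom, of g V U \<alpha>] by (simp add: ghom_def)

lemma restrict_cod:
  "g \<in> ghom C V U \<Longrightarrow> \<alpha> \<in> garrs (psec X U) \<Longrightarrow> gcod (psec X V) (prar X g \<alpha>) = prob X g (gcod (psec X U) \<alpha>)"
  using functor_hom[OF restriction_functor garrs_ghom, of g V U \<alpha>] by (simp add: ghom_def)

end

context flat_point
begin

context
  fixes X :: "('o,'m,'a,'b) pgrpd"
  assumes X: "presheaf_of_categories C X"
begin

lemma restrict_ob: "el_arr W z k U x \<Longrightarrow> a \<in> gobs (psec X U) \<Longrightarrow> prob X k a \<in> gobs (psec X W)"
  using functor_ob[OF restriction_functor[OF X]] el_arrD by blast

lemma restrict_hom:
  "el_arr W z k U x \<Longrightarrow> \<alpha> \<in> ghom (psec X U) a b \<Longrightarrow> prar X k \<alpha> \<in> ghom (psec X W) (prob X k a) (prob X k b)"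
  using functor_hom[OF restriction_functor[OF X]] el_arrD by blast

lemma restrict_arr: "el_arr W z k U x \<Longrightarrow> \<alpha> \<in> garrs (psec X U) \<Longrightarrow> prar X k \<alpha> \<in> garrs (psec X W)"
  using restrict_hom[OF _ garrs_ghom, of W z k U x \<alpha>] by (simp add: ghom_def)

lemma restrict_gcomp:
  "el_arr W z k U x \<Longrightarrow> \<alpha> \<in> ghom (psec X U) a b \<Longrightarrow> \<beta> \<in> ghom (psec X U) b c \<Longrightarrow>
    prar X k (gcomp (psec X U) \<beta> \<alpha>) = gcomp (psec X W) (prar X k \<beta>) (prar X k \<alpha>)"
  using functor_comp[OF restriction_functor[OF X]] el_arrD by blast

lemma restrict_gide:
  "el_arr W z k U x \<Longrightarrow> a \<in> gobs (psec X U) \<Longrightarrow> prar X k (gide (psec X U) a) = gide (psec X W) (prob X k a)"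
  using functor_id[OF restriction_functor[OF X]] el_arrD by blast

lemma restrict_ob_comp:
  "el_arr W z g U x \<Longrightarrow> el_arr W' z' k W z \<Longrightarrow> a \<in> gobs (psec X U) \<Longrightarrow>
    prob X (gcomp C g k) a = prob X k (prob X g a)"
  using el_arr_restrict_comp[OF obs_presheaf[OF X]] by simp

lemma restrict_arr_comp:
  "el_arr W z g U x \<Longrightarrow> el_arr W' z' k W z \<Longrightarrow> \<alpha> \<in> garrs (psec X U) \<Longrightarrow>
    prar X (gcomp C g k) \<alpha> = prar X k (prar X g \<alpha>)"
  using el_arr_restrict_comp[OF arrs_presheaf[OF X]] by simp

lemma stalk_obs_iff:
  "P \<in> gobs (stalk C u X) \<longleftrightarrow>
    (\<exists>U x a. U \<in> gobs C \<and> x \<in> sob u U \<and> a \<in> gobs (psec X U) \<and> P = stalk_ob_cls C u X (U,x,a))"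
  unfolding stalk_def stalk_ob_cls_def colim_set_def colim_carrier_def by auto

lemma stalk_arrs_iff:
  "A \<in> garrs (stalk C u X) \<longleftrightarrow>
    (\<exists>U x \<alpha>. U \<in> gobs C \<and> x \<in> sob u U \<and> \<alpha> \<in> garrs (psec X U) \<and> A = stalk_ar_cls C u X (U,x,\<alpha>))"
  unfolding stalk_def stalk_ar_cls_def colim_set_def colim_carrier_def by auto

lemma stalk_ob_cls_mem:
  "U \<in> gobs C \<Longrightarrow> x \<in> sob u U \<Longrightarrow> a \<in> gobs (psec X U) \<Longrightarrow> stalk_ob_cls C u X (U,x,a) \<in> gobs (stalk C u X)"
  using stalk_obs_iff by blast

lemma stalk_ar_cls_mem:
  "U \<in> gobs C \<Longrightarrow> x \<in> sob u U \<Longrightarrow> \<alpha> \<in> garrs (psec X U) \<Longrightarrow> stalk_ar_cls C u X (U,x,\<alpha>) \<in> garrs (stalk C u X)"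
  using stalk_arrs_iff by blast

lemma stalk_ob_cls_restrict:
  "el_arr W z g U x \<Longrightarrow> a \<in> gobs (psec X U) \<Longrightarrow> stalk_ob_cls C u X (U,x,a) = stalk_ob_cls C u X (W,z,prob X g a)"
  unfolding stalk_ob_cls_def using colim_class_restrict[OF obs_presheaf[OF X]] by simp

lemma stalk_ar_cls_restrict:
  "el_arr W z g U x \<Longrightarrow> \<alpha> \<in> garrs (psec X U) \<Longrightarrow> stalk_ar_cls C u X (U,x,\<alpha>) = stalk_ar_cls C u X (W,z,prar X g \<alpha>)"
  unfolding stalk_ar_cls_def using colim_class_restrict[OF arrs_presheaf[OF X]] by simp

lemma stalk_ob_cls_eq_imp_restrict_eq:
  "stalk_ob_cls C u X (U,x,a) = stalk_ob_cls C u X (U,x,b) \<Longrightarrow> U \<in> gobs C \<Longrightarrow> x \<in> sob u U \<Longrightarrow>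
    a \<in> gobs (psec X U) \<Longrightarrow> b \<in> gobs (psec X U) \<Longrightarrow> \<exists>W z k. el_arr W z k U x \<and> prob X k a = prob X k b"
  unfolding stalk_ob_cls_def using colim_class_eq_imp_restrict_eq[OF obs_presheaf[OF X]] by simp

lemma stalk_ar_cls_eq_imp_restrict_eq:
  "stalk_ar_cls C u X (U,x,\<alpha>) = stalk_ar_cls C u X (U,x,\<beta>) \<Longrightarrow> U \<in> gobs C \<Longrightarrow> x \<in> sob u U \<Longrightarrow>
    \<alpha> \<in> garrs (psec X U) \<Longrightarrow> \<beta> \<in> garrs (psec X U) \<Longrightarrow> \<exists>W z k. el_arr W z k U x \<and> prar X k \<alpha> = prar X k \<beta>"
  unfolding stalk_ar_cls_def using colim_class_eq_imp_restrict_eq[OF arrs_presheaf[OF X]] by simp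

lemma stalk_dom_cod_cls:
  assumes "U \<in> gobs C" "x \<in> sob u U" "\<alpha> \<in> garrs (psec X U)"
  shows "gdom (stalk C u X) (stalk_ar_cls C u X (U,x,\<alpha>)) = stalk_ob_cls C u X (U,x,gdom (psec X U) \<alpha>)"
    and "gcod (stalk C u X) (stalk_ar_cls C u X (U,x,\<alpha>)) = stalk_ob_cls C u X (U,x,gcod (psec X U) \<alpha>)"
proof -
  have car: "(U,x,\<alpha>) \<in> colim_carrier C u (\<lambda>U. garrs (psec X U))"
    using assms by (simp add: colim_carrier_iff)
  show "gdom (stalk C u X) (stalk_ar_cls C u X (U,x,\<alpha>)) = stalk_ob_cls C u X (U,x,gdom (psec X U) \<alpha>)"
    unfolding stalk_def stalk_ar_cls_def stalk_ob_cls_def gcat.select_convs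
    by (rule colim_class_map_some[where \<phi> = "\<lambda>U. gdom (psec X U)", OF car])
      (simp_all add: cat_arr_dom[OF section_category[OF X]] restrict_dom[OF X])
  show "gcod (stalk C u X) (stalk_ar_cls C u X (U,x,\<alpha>)) = stalk_ob_cls C u X (U,x,gcod (psec X U) \<alpha>)"
    unfolding stalk_def stalk_ar_cls_def stalk_ob_cls_def gcat.select_convs
    by (rule colim_class_map_some[where \<phi> = "\<lambda>U. gcod (psec X U)", OF car])
      (simp_all add: cat_arr_cod[OF section_category[OF X]] restrict_cod[OF X])
qed

lemma stalk_ar_cls_hom:
  assumes "U \<in> gobs C" "x \<in> sob u U" "\<alpha> \<in> ghom (psec X U) a b"
  shows "stalk_ar_cls C u X (U,x,\<alpha>) \<in> ghom (stalk C u X) (stalk_ob_cls C u X (U,x,a)) (stalk_ob_cls C u X (U,x,b))"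
  using stalk_dom_cod_cls[OF assms(1,2)] stalk_ar_cls_mem[OF assms(1,2)] assms(3) by (auto simp: ghom_def)

lemma stalk_gide_cls:
  assumes "U \<in> gobs C" "x \<in> sob u U" "a \<in> gobs (psec X U)"
  shows "gide (stalk C u X) (stalk_ob_cls C u X (U,x,a)) = stalk_ar_cls C u X (U,x,gide (psec X U) a)"
proof -
  have car: "(U,x,a) \<in> colim_carrier C u (\<lambda>U. gobs (psec X U))"
    using assms by (simp add: colim_carrier_iff)
  show ?thesis
    unfolding stalk_def stalk_ar_cls_def stalk_ob_cls_def gcat.select_convs
    by (rule colim_class_map_some[where \<phi> = "\<lambda>U. gide (psec X U)", OF car])
      (use cat_id[OF section_category[OF X]] functor_id[OF restriction_functor[OF X]] cat_dom[OF cat]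
        in \<open>auto simp: ghom_def\<close>)
qed

lemma stalk_gcomp_cls:
  assumes U: "U \<in> gobs C" "x \<in> sob u U"
    and \<alpha>\<beta>: "\<alpha> \<in> ghom (psec X U) a b" "\<beta> \<in> ghom (psec X U) b c"
  shows "gcomp (stalk C u X) (stalk_ar_cls C u X (U,x,\<beta>)) (stalk_ar_cls C u X (U,x,\<alpha>))
    = stalk_ar_cls C u X (U,x,gcomp (psec X U) \<beta> \<alpha>)"
proof -
  let ?ac = "\<lambda>U x \<alpha>. stalk_ar_cls C u X (U,x,\<alpha>)"
  let ?Q = "\<lambda>t. case t of (V,y,\<alpha>',\<beta>') \<Rightarrow> (V,y,\<alpha>') \<in> ?ac U x \<alpha> \<and> (V,y,\<beta>') \<in> ?ac U x \<beta> \<and>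
      gcod (psec X V) \<alpha>' = gdom (psec X V) \<beta>'"
  have mem_self: "(U,x,\<gamma>) \<in> ?ac U x \<gamma>" if "\<gamma> \<in> garrs (psec X U)" for \<gamma>
    unfolding stalk_ar_cls_def colim_class_def using U that colim_eq_refl by (simp add: colim_carrier_iff)
  have "?Q (U,x,\<alpha>,\<beta>)" using mem_self \<alpha>\<beta> by (auto simp: ghom_def)
  then have q: "?Q (SOME t. ?Q t)" by (rule someI)
  obtain V y \<alpha>' \<beta>' where t: "(SOME t. ?Q t) = (V,y,\<alpha>',\<beta>')" by (cases "SOME t. ?Q t") blast
  from q t have m: "(V,y,\<alpha>') \<in> ?ac U x \<alpha>" "(V,y,\<beta>') \<in> ?ac U x \<beta>"
    "gcod (psec X V) \<alpha>' = gdom (psec X V) \<beta>'" by auto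
  have mem_ac: "(V,y,\<gamma>') \<in> colim_carrier C u (\<lambda>U. garrs (psec X U)) \<and> ?ac U x \<gamma> = ?ac V y \<gamma>'"
    if "(V,y,\<gamma>') \<in> ?ac U x \<gamma>" for \<gamma> \<gamma>'
    using that colim_class_eq_iff unfolding stalk_ar_cls_def colim_class_def by blast
  note m1 = mem_ac[OF m(1)] and m2 = mem_ac[OF m(2)]
  have V: "V \<in> gobs C" "y \<in> sob u V" "\<alpha>' \<in> garrs (psec X V)" "\<beta>' \<in> garrs (psec X V)"
    using m1 m2 by (auto simp: colim_carrier_iff)
  have arrs: "\<alpha> \<in> garrs (psec X U)" "\<beta> \<in> garrs (psec X U)" using \<alpha>\<beta> by (auto simp: ghom_def)
  obtain W z g h where w: "el_arr W z g U x" "el_arr W z h V y"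
    "prar X g \<alpha> = prar X h \<alpha>'" "prar X g \<beta> = prar X h \<beta>'"
    using colim_class_eq2_imp_restrict_eq[OF arrs_presheaf[OF X]] m1 m2 U V arrs
    unfolding stalk_ar_cls_def by simp blast
  have \<alpha>\<beta>': "\<alpha>' \<in> ghom (psec X V) (gdom (psec X V) \<alpha>') (gdom (psec X V) \<beta>')"
    "\<beta>' \<in> ghom (psec X V) (gdom (psec X V) \<beta>') (gcod (psec X V) \<beta>')"
    using V m(3) by (auto simp: ghom_def)
  have comp: "gcomp (psec X U) \<beta> \<alpha> \<in> garrs (psec X U)" "gcomp (psec X V) \<beta>' \<alpha>' \<in> garrs (psec X V)"
    using cat_comp[OF section_category[OF X U(1)] \<alpha>\<beta>] cat_comp[OF section_category[OF X V(1)] \<alpha>\<beta>']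
    by (simp_all add: ghom_def)
  have "?ac U x (gcomp (psec X U) \<beta> \<alpha>) = ?ac W z (prar X h (gcomp (psec X V) \<beta>' \<alpha>'))"
    using stalk_ar_cls_restrict[OF w(1) comp(1)] restrict_gcomp[OF w(1) \<alpha>\<beta>]
      restrict_gcomp[OF w(2) \<alpha>\<beta>'] w(3,4) by simp
  also have "\<dots> = ?ac V y (gcomp (psec X V) \<beta>' \<alpha>')" using stalk_ar_cls_restrict[OF w(2) comp(2)] by simp
  finally show ?thesis unfolding stalk_def using t by simp
qed

lemma stalk_arr_at_stage:
  assumes "A \<in> garrs (stalk C u X)" "U \<in> gobs C" "x \<in> sob u U"
  shows "\<exists>W z g \<alpha>. el_arr W z g U x \<and> \<alpha> \<in> garrs (psec X W) \<and> A = stalk_ar_cls C u X (W,z,\<alpha>)"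
proof -
  obtain V y \<alpha> where 1: "V \<in> gobs C" "y \<in> sob u V" "\<alpha> \<in> garrs (psec X V)" "A = stalk_ar_cls C u X (V,y,\<alpha>)"
    using assms(1) unfolding stalk_arrs_iff by blast
  obtain W z g h where w: "el_arr W z g U x" "el_arr W z h V y" using el_cone assms(2,3) 1(1,2) by blast
  have "A = stalk_ar_cls C u X (W,z,prar X h \<alpha>)" using stalk_ar_cls_restrict[OF w(2) 1(3)] 1(4) by simp
  then show ?thesis using w(1) restrict_arr[OF w(2) 1(3)] by blast
qed

lemma stalk_ob_at_stage:
  assumes "P \<in> gobs (stalk C u X)" "U \<in> gobs C" "x \<in> sob u U"
  shows "\<exists>W z g a. el_arr W z g U x \<and> a \<in> gobs (psec X W) \<and> P = stalk_ob_cls C u X (W,z,a)"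
proof -
  obtain V y a where 1: "V \<in> gobs C" "y \<in> sob u V" "a \<in> gobs (psec X V)" "P = stalk_ob_cls C u X (V,y,a)"
    using assms(1) unfolding stalk_obs_iff by blast
  obtain W z g h where w: "el_arr W z g U x" "el_arr W z h V y" using el_cone assms(2,3) 1(1,2) by blast
  have "P = stalk_ob_cls C u X (W,z,prob X h a)" using stalk_ob_cls_restrict[OF w(2) 1(3)] 1(4) by simp
  then show ?thesis using w(1) restrict_ob[OF w(2) 1(3)] by blast
qed

lemma stalk_dom_eq_imp_restrict:
  assumes "W \<in> gobs C" "z \<in> sob u W" "\<alpha> \<in> garrs (psec X W)" "a \<in> gobs (psec X W)"
    and "gdom (stalk C u X) (stalk_ar_cls C u X (W,z,\<alpha>)) = stalk_ob_cls C u X (W,z,a)"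
  shows "\<exists>W' z' k. el_arr W' z' k W z \<and> gdom (psec X W') (prar X k \<alpha>) = prob X k a"
proof -
  have "stalk_ob_cls C u X (W,z,gdom (psec X W) \<alpha>) = stalk_ob_cls C u X (W,z,a)"
    using assms(5) stalk_dom_cod_cls[OF assms(1-3)] by simp
  then obtain W' z' k where k: "el_arr W' z' k W z" "prob X k (gdom (psec X W) \<alpha>) = prob X k a"
    using stalk_ob_cls_eq_imp_restrict_eq assms(1-4) cat_arr_dom[OF section_category[OF X]] by blast
  moreover have "gdom (psec X W') (prar X k \<alpha>) = prob X k (gdom (psec X W) \<alpha>)"
    using restrict_dom[OF X _ assms(3)] el_arrD[OF k(1)] by blast
  ultimately show ?thesis by auto
qed

lemma stalk_cod_eq_imp_restrict:
  assumes "W \<in> gobs C" "z \<in> sob u W" "\<alpha> \<in> garrs (psec X W)" "a \<in> gobs (psec X W)"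
    and "gcod (stalk C u X) (stalk_ar_cls C u X (W,z,\<alpha>)) = stalk_ob_cls C u X (W,z,a)"
  shows "\<exists>W' z' k. el_arr W' z' k W z \<and> gcod (psec X W') (prar X k \<alpha>) = prob X k a"
proof -
  have "stalk_ob_cls C u X (W,z,gcod (psec X W) \<alpha>) = stalk_ob_cls C u X (W,z,a)"
    using assms(5) stalk_dom_cod_cls[OF assms(1-3)] by simp
  then obtain W' z' k where k: "el_arr W' z' k W z" "prob X k (gcod (psec X W) \<alpha>) = prob X k a"
    using stalk_ob_cls_eq_imp_restrict_eq assms(1-4) cat_arr_cod[OF section_category[OF X]] by blast
  moreover have "gcod (psec X W') (prar X k \<alpha>) = prob X k (gcod (psec X W) \<alpha>)"
    using restrict_cod[OF X _ assms(3)] el_arrD[OF k(1)] by blast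
  ultimately show ?thesis by auto
qed

lemma stalk_composable_at_common_stage:
  assumes "A \<in> garrs (stalk C u X)" "B \<in> garrs (stalk C u X)" "gcod (stalk C u X) A = gdom (stalk C u X) B"
  shows "\<exists>U x a b c \<alpha> \<beta>. U \<in> gobs C \<and> x \<in> sob u U \<and> \<alpha> \<in> ghom (psec X U) a b \<and> \<beta> \<in> ghom (psec X U) b c \<and>
     A = stalk_ar_cls C u X (U,x,\<alpha>) \<and> B = stalk_ar_cls C u X (U,x,\<beta>)"
proof -
  obtain U x \<alpha> where 1: "U \<in> gobs C" "x \<in> sob u U" "\<alpha> \<in> garrs (psec X U)" "A = stalk_ar_cls C u X (U,x,\<alpha>)"
    using assms(1) unfolding stalk_arrs_iff by blast
  obtain W z g \<beta> where w: "el_arr W z g U x" "\<beta> \<in> garrs (psec X W)" "B = stalk_ar_cls C u X (W,z,\<beta>)"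
    using stalk_arr_at_stage[OF assms(2) 1(1,2)] by blast
  have W: "W \<in> gobs C" "z \<in> sob u W" using el_arrD w(1) by blast+
  define \<alpha>0 where "\<alpha>0 = prar X g \<alpha>"
  have \<alpha>0: "\<alpha>0 \<in> garrs (psec X W)" "A = stalk_ar_cls C u X (W,z,\<alpha>0)"
    unfolding \<alpha>0_def using restrict_arr[OF w(1) 1(3)] stalk_ar_cls_restrict[OF w(1) 1(3)] 1(4) by auto
  have "gdom (stalk C u X) (stalk_ar_cls C u X (W,z,\<beta>)) = stalk_ob_cls C u X (W,z,gcod (psec X W) \<alpha>0)"
    using assms(3) stalk_dom_cod_cls[OF W \<alpha>0(1)] \<alpha>0(2) w(3) by simp
  then obtain W' z' k where k: "el_arr W' z' k W z"
    "gdom (psec X W') (prar X k \<beta>) = prob X k (gcod (psec X W) \<alpha>0)"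
    using stalk_dom_eq_imp_restrict[OF W w(2) cat_arr_cod[OF section_category[OF X W(1)] \<alpha>0(1)]] by blast
  have "prar X k \<alpha>0 \<in> ghom (psec X W') (prob X k (gdom (psec X W) \<alpha>0)) (prob X k (gcod (psec X W) \<alpha>0))"
    using restrict_hom[OF k(1) garrs_ghom[OF \<alpha>0(1)]] .
  moreover have "prar X k \<beta> \<in> ghom (psec X W') (prob X k (gcod (psec X W) \<alpha>0)) (gcod (psec X W') (prar X k \<beta>))"
    using restrict_arr[OF k(1) w(2)] k(2) by (simp add: ghom_def)
  moreover have "A = stalk_ar_cls C u X (W',z',prar X k \<alpha>0)" "B = stalk_ar_cls C u X (W',z',prar X k \<beta>)"
    using stalk_ar_cls_restrict[OF k(1)] \<alpha>0 w by auto
  moreover have "W' \<in> gobs C" "z' \<in> sob u W'" using el_arrD[OF k(1)] by blast+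
  ultimately show ?thesis by (intro exI conjI)
qed

lemma stalk_composable3_at_common_stage:
  assumes "A \<in> garrs (stalk C u X)" "B \<in> garrs (stalk C u X)" "D \<in> garrs (stalk C u X)"
    "gcod (stalk C u X) A = gdom (stalk C u X) B" "gcod (stalk C u X) B = gdom (stalk C u X) D"
  shows "\<exists>U x a b c d \<alpha> \<beta> \<delta>. U \<in> gobs C \<and> x \<in> sob u U \<and> \<alpha> \<in> ghom (psec X U) a b \<and>
    \<beta> \<in> ghom (psec X U) b c \<and> \<delta> \<in> ghom (psec X U) c d \<and> A = stalk_ar_cls C u X (U,x,\<alpha>) \<and>
    B = stalk_ar_cls C u X (U,x,\<beta>) \<and> D = stalk_ar_cls C u X (U,x,\<delta>)"
proof -
  obtain U x a b c \<alpha> \<beta> where 0: "U \<in> gobs C" "x \<in> sob u U" "\<alpha> \<in> ghom (psec X U) a b"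
    "\<beta> \<in> ghom (psec X U) b c" "A = stalk_ar_cls C u X (U,x,\<alpha>)" "B = stalk_ar_cls C u X (U,x,\<beta>)"
    using stalk_composable_at_common_stage[OF assms(1,2,4)] by blast
  obtain W z g \<delta> where w: "el_arr W z g U x" "\<delta> \<in> garrs (psec X W)" "D = stalk_ar_cls C u X (W,z,\<delta>)"
    using stalk_arr_at_stage[OF assms(3) 0(1,2)] by blast
  have W: "W \<in> gobs C" "z \<in> sob u W" using el_arrD w(1) by blast+
  note \<alpha>1 = restrict_hom[OF w(1) 0(3)] and \<beta>1 = restrict_hom[OF w(1) 0(4)]
  have AB: "A = stalk_ar_cls C u X (W,z,prar X g \<alpha>)" "B = stalk_ar_cls C u X (W,z,prar X g \<beta>)"
    using stalk_ar_cls_restrict[OF w(1)] 0 by (auto simp: ghom_def)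
  have "gdom (stalk C u X) (stalk_ar_cls C u X (W,z,\<delta>)) = stalk_ob_cls C u X (W,z,prob X g c)"
    using assms(5) AB(2) w(3) stalk_ar_cls_hom[OF W \<beta>1] by (simp add: ghom_def)
  then obtain W' z' k where k: "el_arr W' z' k W z" "gdom (psec X W') (prar X k \<delta>) = prob X k (prob X g c)"
    using stalk_dom_eq_imp_restrict[OF W w(2) cat_cod[OF section_category[OF X W(1)] \<beta>1]] by blast
  have \<delta>2: "prar X k \<delta> \<in> ghom (psec X W') (prob X k (prob X g c)) (gcod (psec X W') (prar X k \<delta>))"
    using restrict_arr[OF k(1) w(2)] k(2) by (simp add: ghom_def)
  have "A = stalk_ar_cls C u X (W',z',prar X k (prar X g \<alpha>))"
    "B = stalk_ar_cls C u X (W',z',prar X k (prar X g \<beta>))"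
    "D = stalk_ar_cls C u X (W',z',prar X k \<delta>)"
    using stalk_ar_cls_restrict[OF k(1)] AB \<alpha>1 \<beta>1 w(2,3) by (auto simp: ghom_def)
  moreover have "W' \<in> gobs C" "z' \<in> sob u W'" using el_arrD[OF k(1)] by blast+
  ultimately show ?thesis using restrict_hom[OF k(1) \<alpha>1] restrict_hom[OF k(1) \<beta>1] \<delta>2 by (intro exI conjI)
qed

lemma stalk_gcomp_hom:
  assumes "f \<in> garrs (stalk C u X)" "g \<in> garrs (stalk C u X)" "gcod (stalk C u X) f = gdom (stalk C u X) g"
  shows "gcomp (stalk C u X) g f \<in> ghom (stalk C u X) (gdom (stalk C u X) f) (gcod (stalk C u X) g)"
proof -
  obtain U x a b c \<alpha> \<beta> where 1: "U \<in> gobs C" "x \<in> sob u U"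
    "\<alpha> \<in> ghom (psec X U) a b" "\<beta> \<in> ghom (psec X U) b c"
    "f = stalk_ar_cls C u X (U,x,\<alpha>)" "g = stalk_ar_cls C u X (U,x,\<beta>)"
    using stalk_composable_at_common_stage[OF assms] by blast
  show ?thesis
    using stalk_gcomp_cls[OF 1(1-4)]
      stalk_ar_cls_hom[OF 1(1,2) cat_comp[OF section_category[OF X 1(1)] 1(3,4)]]
      stalk_ar_cls_hom[OF 1(1,2,3)] stalk_ar_cls_hom[OF 1(1,2,4)] 1(5,6)
    by (simp add: ghom_def)
qed

lemma stalk_gcomp_assoc:
  assumes "f \<in> garrs (stalk C u X)" "g \<in> garrs (stalk C u X)" "h \<in> garrs (stalk C u X)"
    "gcod (stalk C u X) f = gdom (stalk C u X) g" "gcod (stalk C u X) g = gdom (stalk C u X) h"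
  shows "gcomp (stalk C u X) h (gcomp (stalk C u X) g f) = gcomp (stalk C u X) (gcomp (stalk C u X) h g) f"
proof -
  obtain U x a b c d \<alpha> \<beta> \<delta> where 1: "U \<in> gobs C" "x \<in> sob u U"
    "\<alpha> \<in> ghom (psec X U) a b" "\<beta> \<in> ghom (psec X U) b c" "\<delta> \<in> ghom (psec X U) c d"
    "f = stalk_ar_cls C u X (U,x,\<alpha>)" "g = stalk_ar_cls C u X (U,x,\<beta>)" "h = stalk_ar_cls C u X (U,x,\<delta>)"
    using stalk_composable3_at_common_stage[OF assms] by blast
  note cU = section_category[OF X 1(1)]
  show ?thesis
    using stalk_gcomp_cls[OF 1(1-4)] stalk_gcomp_cls[OF 1(1,2,4,5)]
      stalk_gcomp_cls[OF 1(1,2) cat_comp[OF cU 1(3,4)] 1(5)]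
      stalk_gcomp_cls[OF 1(1,2,3) cat_comp[OF cU 1(4,5)]]
      cat_assoc[OF cU 1(3-5)] 1(6-8) by simp
qed

lemma stalk_category: "category (stalk C u X)"
  unfolding category_def
proof (intro conjI ballI impI)
  fix f assume "f \<in> garrs (stalk C u X)"
  then obtain U x \<alpha> where 1: "U \<in> gobs C" "x \<in> sob u U" "\<alpha> \<in> garrs (psec X U)"
    "f = stalk_ar_cls C u X (U,x,\<alpha>)"
    unfolding stalk_arrs_iff by blast
  note cU = section_category[OF X 1(1)]
  note h = garrs_ghom[OF 1(3)]
  show "gdom (stalk C u X) f \<in> gobs (stalk C u X)" "gcod (stalk C u X) f \<in> gobs (stalk C u X)"
    using stalk_dom_cod_cls[OF 1(1-3)] stalk_ob_cls_mem[OF 1(1,2)] cat_arr_dom[OF cU 1(3)]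
      cat_arr_cod[OF cU 1(3)] 1(4)
    by simp_all
  show "gcomp (stalk C u X) (gide (stalk C u X) (gcod (stalk C u X) f)) f = f"
    "gcomp (stalk C u X) f (gide (stalk C u X) (gdom (stalk C u X) f)) = f"
    using stalk_dom_cod_cls[OF 1(1-3)] stalk_gide_cls[OF 1(1,2)] cat_arr_dom[OF cU 1(3)]
      cat_arr_cod[OF cU 1(3)]
      stalk_gcomp_cls[OF 1(1,2) h cat_id[OF cU cat_arr_cod[OF cU 1(3)]]]
      stalk_gcomp_cls[OF 1(1,2) cat_id[OF cU cat_arr_dom[OF cU 1(3)]] h]
      cat_id_left[OF cU h] cat_id_right[OF cU h] 1(4) by simp_all
next
  fix P assume "P \<in> gobs (stalk C u X)"
  then obtain U x a where 1: "U \<in> gobs C" "x \<in> sob u U" "a \<in> gobs (psec X U)" "P = stalk_ob_cls C u X (U,x,a)"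
    unfolding stalk_obs_iff by blast
  show "gide (stalk C u X) P \<in> ghom (stalk C u X) P P"
    using stalk_gide_cls[OF 1(1-3)] stalk_ar_cls_hom[OF 1(1,2) cat_id[OF section_category[OF X 1(1)] 1(3)]]
      1(4)
    by simp
next
  fix f g assume "f \<in> garrs (stalk C u X)" "g \<in> garrs (stalk C u X)"
    "gcod (stalk C u X) f = gdom (stalk C u X) g"
  then show "gcomp (stalk C u X) g f \<in> ghom (stalk C u X) (gdom (stalk C u X) f) (gcod (stalk C u X) g)"
    by (rule stalk_gcomp_hom)
next
  fix f g h assume "f \<in> garrs (stalk C u X)" "g \<in> garrs (stalk C u X)" "h \<in> garrs (stalk C u X)"
    "gcod (stalk C u X) f = gdom (stalk C u X) g" "gcod (stalk C u X) g = gdom (stalk C u X) h"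
  then show "gcomp (stalk C u X) h (gcomp (stalk C u X) g f) = gcomp (stalk C u X) (gcomp (stalk C u X) h g) f"
    by (rule stalk_gcomp_assoc)
qed

end

end

context
  fixes C :: "('o,'m) gcat" and X :: "('o,'m,'a,'b) pgrpd" and Y :: "('o,'m,'c,'d) pgrpd"
    and F :: "('o,'a,'b,'c,'d) pmor"
  assumes F: "presheaf_morphism C X Y F"
begin

lemma section_functor: "U \<in> gobs C \<Longrightarrow> is_functor (psec X U) (psec Y U) (mob F U) (mar F U)"
  using F unfolding presheaf_morphism_def by blast

lemma morphism_restrict_ob:
  "g \<in> ghom C V U \<Longrightarrow> a \<in> gobs (psec X U) \<Longrightarrow> mob F V (prob X g a) = prob Y g (mob F U a)"
  using F unfolding presheaf_morphism_def ghom_def by auto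

lemma morphism_restrict_arr:
  "g \<in> ghom C V U \<Longrightarrow> \<alpha> \<in> garrs (psec X U) \<Longrightarrow> mar F V (prar X g \<alpha>) = prar Y g (mar F U \<alpha>)"
  using F unfolding presheaf_morphism_def ghom_def by auto

lemma section_functor_arr: "U \<in> gobs C \<Longrightarrow> \<alpha> \<in> garrs (psec X U) \<Longrightarrow> mar F U \<alpha> \<in> garrs (psec Y U)"
  using functor_hom[OF section_functor garrs_ghom, of U \<alpha>] by (simp add: ghom_def)

end

context flat_point
begin

context
  fixes X :: "('o,'m,'a,'b) pgrpd"
  assumes X: "presheaf_of_categories C X"
begin

lemma stalk_germ_functor:
  assumes "U \<in> gobs C" "x \<in> sob u U"
  shows "is_functor (psec X U) (stalk C u X) (\<lambda>a. stalk_ob_cls C u X (U,x,a)) (\<lambda>\<alpha>. stalk_ar_cls C u X (U,x,\<alpha>))"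
  using stalk_ob_cls_mem[OF X assms] stalk_ar_cls_hom[OF X assms] stalk_gide_cls[OF X assms]
    stalk_gcomp_cls[OF X assms] by (intro is_functorI) auto

lemma stalk_obs2_at_common_stage:
  assumes "P \<in> gobs (stalk C u X)" "P' \<in> gobs (stalk C u X)"
  obtains U x a a' where "U \<in> gobs C" "x \<in> sob u U" "a \<in> gobs (psec X U)" "a' \<in> gobs (psec X U)"
    "P = stalk_ob_cls C u X (U,x,a)" "P' = stalk_ob_cls C u X (U,x,a')"
proof -
  obtain V y b where 1: "V \<in> gobs C" "y \<in> sob u V" "b \<in> gobs (psec X V)" "P = stalk_ob_cls C u X (V,y,b)"
    using assms(1) unfolding stalk_obs_iff[OF X] by blast
  obtain U x g a' where 2: "el_arr U x g V y" "a' \<in> gobs (psec X U)" "P' = stalk_ob_cls C u X (U,x,a')"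
    using stalk_ob_at_stage[OF X assms(2) 1(1,2)] by blast
  show ?thesis
    using that[OF _ _ restrict_ob[OF X 2(1) 1(3)] 2(2) _ 2(3)] el_arrD[OF 2(1)]
      stalk_ob_cls_restrict[OF X 2(1) 1(3)] 1(4) by blast
qed

lemma stalk_hom_at_stage:
  assumes A: "A \<in> ghom (stalk C u X) (stalk_ob_cls C u X (U,x,a)) (stalk_ob_cls C u X (U,x,a'))"
    and U: "U \<in> gobs C" "x \<in> sob u U" and a: "a \<in> gobs (psec X U)" "a' \<in> gobs (psec X U)"
  shows "\<exists>W z k \<alpha>. el_arr W z k U x \<and> \<alpha> \<in> ghom (psec X W) (prob X k a) (prob X k a') \<and>
    A = stalk_ar_cls C u X (W,z,\<alpha>)"
proof -
  obtain W z g \<alpha> where w: "el_arr W z g U x" "\<alpha> \<in> garrs (psec X W)" "A = stalk_ar_cls C u X (W,z,\<alpha>)"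
    using stalk_arr_at_stage[OF X ghomD[OF A, THEN conjunct1] U] by blast
  have W: "W \<in> gobs C" "z \<in> sob u W" using el_arrD[OF w(1)] by blast+
  have "gdom (stalk C u X) (stalk_ar_cls C u X (W,z,\<alpha>)) = stalk_ob_cls C u X (W,z,prob X g a)"
    using A w(3) stalk_ob_cls_restrict[OF X w(1) a(1)] by (simp add: ghom_def)
  then obtain W1 z1 k1 where k1: "el_arr W1 z1 k1 W z"
    "gdom (psec X W1) (prar X k1 \<alpha>) = prob X k1 (prob X g a)"
    using stalk_dom_eq_imp_restrict[OF X W w(2) restrict_ob[OF X w(1) a(1)]] by blast
  note gk1 = el_arr_comp[OF w(1) k1(1)]
  have \<alpha>1: "prar X k1 \<alpha> \<in> garrs (psec X W1)" "A = stalk_ar_cls C u X (W1,z1,prar X k1 \<alpha>)"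
    using restrict_arr[OF X k1(1) w(2)] stalk_ar_cls_restrict[OF X k1(1) w(2)] w(3) by auto
  have "gcod (stalk C u X) (stalk_ar_cls C u X (W1,z1,prar X k1 \<alpha>)) = stalk_ob_cls C u X (W1,z1,prob X (gcomp C g k1) a')"
    using A \<alpha>1(2) stalk_ob_cls_restrict[OF X gk1 a(2)] by (simp add: ghom_def)
  then obtain W2 z2 k2 where k2: "el_arr W2 z2 k2 W1 z1"
    "gcod (psec X W2) (prar X k2 (prar X k1 \<alpha>)) = prob X k2 (prob X (gcomp C g k1) a')"
    using stalk_cod_eq_imp_restrict[OF X _ _ \<alpha>1(1) restrict_ob[OF X gk1 a(2)]] el_arrD[OF k1(1)] by blast
  define K where "K = gcomp C (gcomp C g k1) k2"
  have K: "el_arr W2 z2 K U x" unfolding K_def using el_arr_comp[OF gk1 k2(1)] .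
  have Kob: "prob X K b = prob X k2 (prob X k1 (prob X g b))" if "b \<in> gobs (psec X U)" for b
    unfolding K_def using restrict_ob_comp[OF X gk1 k2(1) that] restrict_ob_comp[OF X w(1) k1(1) that] by simp
  have "gdom (psec X W2) (prar X k2 (prar X k1 \<alpha>)) = prob X k2 (prob X k1 (prob X g a))"
    using restrict_dom[OF X _ \<alpha>1(1)] el_arrD[OF k2(1)] k1(2) by simp
  then have "prar X k2 (prar X k1 \<alpha>) \<in> ghom (psec X W2) (prob X K a) (prob X K a')"
    using restrict_arr[OF X k2(1) \<alpha>1(1)] k2(2) Kob a restrict_ob_comp[OF X w(1) k1(1) a(2)]
    by (simp add: ghom_def)
  moreover have "A = stalk_ar_cls C u X (W2,z2,prar X k2 (prar X k1 \<alpha>))"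
    using stalk_ar_cls_restrict[OF X k2(1) \<alpha>1(1)] \<alpha>1(2) by simp
  ultimately show ?thesis using K by blast
qed

lemma stalk_homs2_at_common_stage:
  assumes "A \<in> ghom (stalk C u X) P P'" "B \<in> ghom (stalk C u X) P P'"
  obtains U x a a' \<alpha> \<beta> where "U \<in> gobs C" "x \<in> sob u U"
    "\<alpha> \<in> ghom (psec X U) a a'" "\<beta> \<in> ghom (psec X U) a a'"
    "A = stalk_ar_cls C u X (U,x,\<alpha>)" "B = stalk_ar_cls C u X (U,x,\<beta>)"
proof -
  have "P \<in> gobs (stalk C u X)" "P' \<in> gobs (stalk C u X)"
    using cat_dom[OF stalk_category[OF X] assms(1)] cat_cod[OF stalk_category[OF X] assms(1)] .
  then obtain U x a a' where P: "U \<in> gobs C" "x \<in> sob u U" "a \<in> gobs (psec X U)" "a' \<in> gobs (psec X U)"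
    "P = stalk_ob_cls C u X (U,x,a)" "P' = stalk_ob_cls C u X (U,x,a')"
    by (rule stalk_obs2_at_common_stage)
  obtain W z k \<alpha> where 1: "el_arr W z k U x" "\<alpha> \<in> ghom (psec X W) (prob X k a) (prob X k a')"
    "A = stalk_ar_cls C u X (W,z,\<alpha>)"
    using stalk_hom_at_stage[OF assms(1)[unfolded P(5,6)] P(1-4)] by blast
  have W: "W \<in> gobs C" "z \<in> sob u W" using el_arrD[OF 1(1)] by blast+
  have "B \<in> ghom (stalk C u X) (stalk_ob_cls C u X (W,z,prob X k a)) (stalk_ob_cls C u X (W,z,prob X k a'))"
    using assms(2) P stalk_ob_cls_restrict[OF X 1(1)] by simp
  then obtain W' z' k' \<beta> where 2: "el_arr W' z' k' W z"
    "\<beta> \<in> ghom (psec X W') (prob X k' (prob X k a)) (prob X k' (prob X k a'))"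
    "B = stalk_ar_cls C u X (W',z',\<beta>)"
    using stalk_hom_at_stage[OF _ W restrict_ob[OF X 1(1) P(3)] restrict_ob[OF X 1(1) P(4)]] by blast
  have "A = stalk_ar_cls C u X (W',z',prar X k' \<alpha>)"
    using stalk_ar_cls_restrict[OF X 2(1)] 1(2,3) by (simp add: ghom_def)
  then show ?thesis
    using that[OF _ _ restrict_hom[OF X 2(1) 1(2)] 2(2) _ 2(3)] el_arrD[OF 2(1)] by blast
qed

end

context
  fixes X :: "('o,'m,'a,'b) pgrpd" and Y :: "('o,'m,'c,'d) pgrpd" and F :: "('o,'a,'b,'c,'d) pmor"
  assumes X: "presheaf_of_categories C X" and Y: "presheaf_of_categories C Y"
    and F: "presheaf_morphism C X Y F"
begin

lemma stalk_mob_cls: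
  assumes "U \<in> gobs C" "x \<in> sob u U" "a \<in> gobs (psec X U)"
  shows "stalk_mob C u Y F (stalk_ob_cls C u X (U,x,a)) = stalk_ob_cls C u Y (U,x,mob F U a)"
proof -
  have car: "(U,x,a) \<in> colim_carrier C u (\<lambda>U. gobs (psec X U))"
    using assms by (simp add: colim_carrier_iff)
  show ?thesis
    unfolding stalk_mob_def stalk_ob_cls_def
    by (rule colim_class_map_some[where \<phi> = "mob F", OF car])
      (simp_all add: functor_ob[OF section_functor[OF F]] morphism_restrict_ob[OF F])
qed

lemma stalk_mar_cls:
  assumes "U \<in> gobs C" "x \<in> sob u U" "\<alpha> \<in> garrs (psec X U)"
  shows "stalk_mar C u Y F (stalk_ar_cls C u X (U,x,\<alpha>)) = stalk_ar_cls C u Y (U,x,mar F U \<alpha>)"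
proof -
  have car: "(U,x,\<alpha>) \<in> colim_carrier C u (\<lambda>U. garrs (psec X U))"
    using assms by (simp add: colim_carrier_iff)
  show ?thesis
    unfolding stalk_mar_def stalk_ar_cls_def
    by (rule colim_class_map_some[where \<phi> = "mar F", OF car])
      (simp_all add: section_functor_arr[OF F] morphism_restrict_arr[OF F])
qed

lemma stalk_functor: "is_functor (stalk C u X) (stalk C u Y) (stalk_mob C u Y F) (stalk_mar C u Y F)"
proof (rule is_functorI)
  fix P assume "P \<in> gobs (stalk C u X)"
  then obtain U x a where 1: "U \<in> gobs C" "x \<in> sob u U" "a \<in> gobs (psec X U)" "P = stalk_ob_cls C u X (U,x,a)"
    unfolding stalk_obs_iff[OF X] by blast
  note FU = section_functor[OF F 1(1)]
  show "stalk_mob C u Y F P \<in> gobs (stalk C u Y)"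
    using stalk_mob_cls[OF 1(1-3)] stalk_ob_cls_mem[OF Y 1(1,2) functor_ob[OF FU 1(3)]] 1(4) by simp
  show "stalk_mar C u Y F (gide (stalk C u X) P) = gide (stalk C u Y) (stalk_mob C u Y F P)"
    using stalk_gide_cls[OF X 1(1-3)] stalk_mob_cls[OF 1(1-3)] stalk_mar_cls[OF 1(1,2)]
      cat_id[OF section_category[OF X 1(1)] 1(3)] stalk_gide_cls[OF Y 1(1,2) functor_ob[OF FU 1(3)]]
      functor_id[OF FU 1(3)] 1(4)
    by (simp add: ghom_def)
next
  fix A P Q assume A: "A \<in> ghom (stalk C u X) P Q"
  obtain U x a b \<alpha> \<beta> where 1: "U \<in> gobs C" "x \<in> sob u U" "\<alpha> \<in> ghom (psec X U) a b"
    "\<beta> \<in> ghom (psec X U) a b" "A = stalk_ar_cls C u X (U,x,\<alpha>)" "A = stalk_ar_cls C u X (U,x,\<beta>)"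
    by (rule stalk_homs2_at_common_stage[OF X A A])
  have PQ: "P = stalk_ob_cls C u X (U,x,a)" "Q = stalk_ob_cls C u X (U,x,b)"
    using A stalk_ar_cls_hom[OF X 1(1-3)] 1(5) by (auto simp: ghom_def)
  show "stalk_mar C u Y F A \<in> ghom (stalk C u Y) (stalk_mob C u Y F P) (stalk_mob C u Y F Q)"
    using stalk_ar_cls_hom[OF Y 1(1,2) functor_hom[OF section_functor[OF F 1(1)] 1(3)]]
      stalk_mar_cls[OF 1(1,2)] stalk_mob_cls[OF 1(1,2)] 1(3,5) PQ
      cat_dom[OF section_category[OF X 1(1)] 1(3)] cat_cod[OF section_category[OF X 1(1)] 1(3)]
    by (simp add: ghom_def)
next
  fix A B P Q R assume AB: "A \<in> ghom (stalk C u X) P Q" "B \<in> ghom (stalk C u X) Q R"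
  then obtain U x a b c \<alpha> \<beta> where 1: "U \<in> gobs C" "x \<in> sob u U" "\<alpha> \<in> ghom (psec X U) a b"
    "\<beta> \<in> ghom (psec X U) b c" "A = stalk_ar_cls C u X (U,x,\<alpha>)" "B = stalk_ar_cls C u X (U,x,\<beta>)"
    using stalk_composable_at_common_stage[OF X, of A B] by (auto simp: ghom_def)
  note FU = section_functor[OF F 1(1)]
  show "stalk_mar C u Y F (gcomp (stalk C u X) B A)
      = gcomp (stalk C u Y) (stalk_mar C u Y F B) (stalk_mar C u Y F A)"
    using stalk_gcomp_cls[OF X 1(1-4)] stalk_mar_cls[OF 1(1,2)] 1(3-6)
      cat_comp[OF section_category[OF X 1(1)] 1(3,4)] functor_comp[OF FU 1(3,4)]
      stalk_gcomp_cls[OF Y 1(1,2) functor_hom[OF FU 1(3)] functor_hom[OF FU 1(4)]]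
    by (simp add: ghom_def)
qed

end

end

section \<open>Local weak equivalences in terms of sections\<close>

context flat_point
begin

definition locally_faithful :: "('o,'m,'a,'b) pgrpd \<Rightarrow> ('o,'a,'b,'c,'d) pmor \<Rightarrow> bool" where
  "locally_faithful X F \<longleftrightarrow> (\<forall>U x a a' \<alpha> \<beta>. U \<in> gobs C \<and> x \<in> sob u U \<and>
     \<alpha> \<in> ghom (psec X U) a a' \<and> \<beta> \<in> ghom (psec X U) a a' \<and> mar F U \<alpha> = mar F U \<beta> \<longrightarrow>
     (\<exists>W z k. el_arr W z k U x \<and> prar X k \<alpha> = prar X k \<beta>))"

definition locally_full :: "('o,'m,'a,'b) pgrpd \<Rightarrow> ('o,'m,'c,'d) pgrpd \<Rightarrow> ('o,'a,'b,'c,'d) pmor \<Rightarrow> bool" where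
  "locally_full X Y F \<longleftrightarrow> (\<forall>U x a a' \<gamma>. U \<in> gobs C \<and> x \<in> sob u U \<and>
     a \<in> gobs (psec X U) \<and> a' \<in> gobs (psec X U) \<and> \<gamma> \<in> ghom (psec Y U) (mob F U a) (mob F U a') \<longrightarrow>
     (\<exists>W z k \<alpha>. el_arr W z k U x \<and> \<alpha> \<in> ghom (psec X W) (prob X k a) (prob X k a') \<and>
        mar F W \<alpha> = prar Y k \<gamma>))"

definition locally_ess_surj :: "('o,'m,'a,'b) pgrpd \<Rightarrow> ('o,'m,'c,'d) pgrpd \<Rightarrow> ('o,'a,'b,'c,'d) pmor \<Rightarrow> bool"
  where
  "locally_ess_surj X Y F \<longleftrightarrow> (\<forall>U x b. U \<in> gobs C \<and> x \<in> sob u U \<and> b \<in> gobs (psec Y U) \<longrightarrow>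
     (\<exists>W z k a e. el_arr W z k U x \<and> a \<in> gobs (psec X W) \<and>
        e \<in> ghom (psec Y W) (mob F W a) (prob Y k b) \<and> is_iso (psec Y W) e))"

context
  fixes X :: "('o,'m,'a,'b) pgrpd" and Y :: "('o,'m,'c,'d) pgrpd" and F :: "('o,'a,'b,'c,'d) pmor"
  assumes X: "presheaf_of_categories C X" and Y: "presheaf_of_categories C Y"
    and F: "presheaf_morphism C X Y F"
begin

lemma locally_faithful_if_stalk_faithful:
  assumes "faithful_functor (stalk C u X) (stalk_mar C u Y F)"
  shows "locally_faithful X F"
  unfolding locally_faithful_def
proof (intro allI impI, elim conjE)
  fix U x a a' \<alpha> \<beta>
  assume U: "U \<in> gobs C" "x \<in> sob u U" and \<alpha>\<beta>: "\<alpha> \<in> ghom (psec X U) a a'" "\<beta> \<in> ghom (psec X U) a a'"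
    and eq: "mar F U \<alpha> = mar F U \<beta>"
  have arr: "\<alpha> \<in> garrs (psec X U)" "\<beta> \<in> garrs (psec X U)" using \<alpha>\<beta> by (simp_all add: ghom_def)
  have "stalk_mar C u Y F (stalk_ar_cls C u X (U,x,\<alpha>)) = stalk_mar C u Y F (stalk_ar_cls C u X (U,x,\<beta>))"
    using stalk_mar_cls[OF X Y F U] arr eq by simp
  then have "stalk_ar_cls C u X (U,x,\<alpha>) = stalk_ar_cls C u X (U,x,\<beta>)"
    using assms stalk_ar_cls_hom[OF X U \<alpha>\<beta>(1)] stalk_ar_cls_hom[OF X U \<alpha>\<beta>(2)]
    unfolding faithful_functor_def by blast
  then show "\<exists>W z k. el_arr W z k U x \<and> prar X k \<alpha> = prar X k \<beta>"
    using stalk_ar_cls_eq_imp_restrict_eq[OF X _ U arr] by blast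
qed

lemma locally_full_if_stalk_full:
  assumes "full_functor (stalk C u X) (stalk C u Y) (stalk_mob C u Y F) (stalk_mar C u Y F)"
  shows "locally_full X Y F"
  unfolding locally_full_def
proof (intro allI impI, elim conjE)
  fix U x a a' \<gamma>
  assume U: "U \<in> gobs C" "x \<in> sob u U" and a: "a \<in> gobs (psec X U)" "a' \<in> gobs (psec X U)"
    and \<gamma>: "\<gamma> \<in> ghom (psec Y U) (mob F U a) (mob F U a')"
  have "stalk_ar_cls C u Y (U,x,\<gamma>) \<in> ghom (stalk C u Y)
      (stalk_mob C u Y F (stalk_ob_cls C u X (U,x,a))) (stalk_mob C u Y F (stalk_ob_cls C u X (U,x,a')))"
    using stalk_ar_cls_hom[OF Y U \<gamma>] stalk_mob_cls[OF X Y F U] a by simp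
  then obtain A where A: "A \<in> ghom (stalk C u X) (stalk_ob_cls C u X (U,x,a)) (stalk_ob_cls C u X (U,x,a'))"
    "stalk_mar C u Y F A = stalk_ar_cls C u Y (U,x,\<gamma>)"
    using assms stalk_ob_cls_mem[OF X U] a unfolding full_functor_def by blast
  obtain W z k \<alpha> where k: "el_arr W z k U x" "\<alpha> \<in> ghom (psec X W) (prob X k a) (prob X k a')"
    "A = stalk_ar_cls C u X (W,z,\<alpha>)"
    using stalk_hom_at_stage[OF X A(1) U a] by blast
  have W: "W \<in> gobs C" "z \<in> sob u W" using el_arrD[OF k(1)] by blast+
  have \<alpha>': "\<alpha> \<in> garrs (psec X W)" "\<gamma> \<in> garrs (psec Y U)" using k(2) \<gamma> by (simp_all add: ghom_def)
  have "stalk_ar_cls C u Y (W,z,mar F W \<alpha>) = stalk_ar_cls C u Y (W,z,prar Y k \<gamma>)"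
    using A(2) k(3) stalk_mar_cls[OF X Y F W \<alpha>'(1)] stalk_ar_cls_restrict[OF Y k(1) \<alpha>'(2)] by simp
  then obtain W' z' k' where k': "el_arr W' z' k' W z" "prar Y k' (mar F W \<alpha>) = prar Y k' (prar Y k \<gamma>)"
    using stalk_ar_cls_eq_imp_restrict_eq[OF Y _ W section_functor_arr[OF F W(1) \<alpha>'(1)]
      restrict_arr[OF Y k(1) \<alpha>'(2)]] by blast
  have "mar F W' (prar X k' \<alpha>) = prar Y (gcomp C k k') \<gamma>"
    using morphism_restrict_arr[OF F _ \<alpha>'(1)] el_arrD[OF k'(1)] k'(2)
      restrict_arr_comp[OF Y k(1) k'(1) \<alpha>'(2)] by simp
  moreover have "prar X k' \<alpha> \<in> ghom (psec X W') (prob X (gcomp C k k') a) (prob X (gcomp C k k') a')"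
    using restrict_hom[OF X k'(1) k(2)] restrict_ob_comp[OF X k(1) k'(1)] a by simp
  ultimately show "\<exists>W z k \<alpha>. el_arr W z k U x \<and> \<alpha> \<in> ghom (psec X W) (prob X k a) (prob X k a') \<and>
      mar F W \<alpha> = prar Y k \<gamma>"
    using el_arr_comp[OF k(1) k'(1)] by blast
qed

lemma locally_ess_surj_if_stalk_ess_surj:
  assumes "ess_surj_functor (stalk C u X) (stalk C u Y) (stalk_mob C u Y F)"
    and Y_groupoid: "\<And>U. U \<in> gobs C \<Longrightarrow> groupoid (psec Y U)"
  shows "locally_ess_surj X Y F"
  unfolding locally_ess_surj_def
proof (intro allI impI, elim conjE)
  fix U x b assume U: "U \<in> gobs C" "x \<in> sob u U" and b: "b \<in> gobs (psec Y U)"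
  obtain P E where PE: "P \<in> gobs (stalk C u X)"
    "E \<in> ghom (stalk C u Y) (stalk_mob C u Y F P) (stalk_ob_cls C u Y (U,x,b))"
    using assms(1) stalk_ob_cls_mem[OF Y U b] unfolding ess_surj_functor_def by blast
  obtain W z g a where g: "el_arr W z g U x" "a \<in> gobs (psec X W)" "P = stalk_ob_cls C u X (W,z,a)"
    using stalk_ob_at_stage[OF X PE(1) U] by blast
  have W: "W \<in> gobs C" "z \<in> sob u W" using el_arrD[OF g(1)] by blast+
  have "E \<in> ghom (stalk C u Y) (stalk_ob_cls C u Y (W,z,mob F W a)) (stalk_ob_cls C u Y (W,z,prob Y g b))"
    using PE(2) g(3) stalk_mob_cls[OF X Y F W g(2)] stalk_ob_cls_restrict[OF Y g(1) b] by simp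
  then obtain W' z' k e where k: "el_arr W' z' k W z"
    "e \<in> ghom (psec Y W') (prob Y k (mob F W a)) (prob Y k (prob Y g b))"
    using stalk_hom_at_stage[OF Y _ W functor_ob[OF section_functor[OF F W(1)] g(2)] restrict_ob[OF Y g(1) b]]
    by blast
  have "e \<in> ghom (psec Y W') (mob F W' (prob X k a)) (prob Y (gcomp C g k) b)"
    using k(2) morphism_restrict_ob[OF F _ g(2)] el_arrD[OF k(1)] restrict_ob_comp[OF Y g(1) k(1) b] by simp
  moreover have "is_iso (psec Y W') e"
    using Y_groupoid k(2) el_arrD[OF k(1)] unfolding groupoid_def ghom_def by blast
  ultimately show "\<exists>W z k a e. el_arr W z k U x \<and> a \<in> gobs (psec X W) \<and>
      e \<in> ghom (psec Y W) (mob F W a) (prob Y k b) \<and> is_iso (psec Y W) e"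
    using el_arr_comp[OF g(1) k(1)] restrict_ob[OF X k(1) g(2)] by blast
qed

lemma stalk_faithful_if_locally_faithful:
  assumes L: "locally_faithful X F"
  shows "faithful_functor (stalk C u X) (stalk_mar C u Y F)"
  unfolding faithful_functor_def
proof (intro allI impI)
  fix P P' A B
  assume AB: "A \<in> ghom (stalk C u X) P P'" "B \<in> ghom (stalk C u X) P P'"
    and eq: "stalk_mar C u Y F A = stalk_mar C u Y F B"
  obtain U x a a' \<alpha> \<beta> where U: "U \<in> gobs C" "x \<in> sob u U"
    and \<alpha>\<beta>: "\<alpha> \<in> ghom (psec X U) a a'" "\<beta> \<in> ghom (psec X U) a a'"
    and A: "A = stalk_ar_cls C u X (U,x,\<alpha>)" and B: "B = stalk_ar_cls C u X (U,x,\<beta>)"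
    by (rule stalk_homs2_at_common_stage[OF X AB])
  have arr: "\<alpha> \<in> garrs (psec X U)" "\<beta> \<in> garrs (psec X U)" using \<alpha>\<beta> by (simp_all add: ghom_def)
  have "stalk_ar_cls C u Y (U,x,mar F U \<alpha>) = stalk_ar_cls C u Y (U,x,mar F U \<beta>)"
    using eq A B stalk_mar_cls[OF X Y F U] arr by simp
  then obtain W z k where k: "el_arr W z k U x" "prar Y k (mar F U \<alpha>) = prar Y k (mar F U \<beta>)"
    using stalk_ar_cls_eq_imp_restrict_eq[OF Y _ U] section_functor_arr[OF F U(1)] arr by blast
  have W: "W \<in> gobs C" "z \<in> sob u W" using el_arrD[OF k(1)] by blast+
  have "mar F W (prar X k \<alpha>) = mar F W (prar X k \<beta>)"
    using k(2) morphism_restrict_arr[OF F _ arr(1)] morphism_restrict_arr[OF F _ arr(2)]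
      el_arrD[OF k(1)] by simp
  then obtain W' z' k' where k': "el_arr W' z' k' W z" "prar X k' (prar X k \<alpha>) = prar X k' (prar X k \<beta>)"
    using L W restrict_hom[OF X k(1) \<alpha>\<beta>(1)] restrict_hom[OF X k(1) \<alpha>\<beta>(2)]
    unfolding locally_faithful_def by blast
  have "A = stalk_ar_cls C u X (W',z',prar X k' (prar X k \<alpha>))"
    using A stalk_ar_cls_restrict[OF X k(1) arr(1)]
      stalk_ar_cls_restrict[OF X k'(1) restrict_arr[OF X k(1) arr(1)]]
    by simp
  also have "\<dots> = B"
    using B k'(2) stalk_ar_cls_restrict[OF X k(1) arr(2)]
      stalk_ar_cls_restrict[OF X k'(1) restrict_arr[OF X k(1) arr(2)]] by simp
  finally show "A = B" .
qed

lemma stalk_full_if_locally_full: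
  assumes L: "locally_full X Y F"
  shows "full_functor (stalk C u X) (stalk C u Y) (stalk_mob C u Y F) (stalk_mar C u Y F)"
  unfolding full_functor_def
proof (intro ballI)
  fix P P' \<Gamma>
  assume P: "P \<in> gobs (stalk C u X)" "P' \<in> gobs (stalk C u X)"
    and \<Gamma>: "\<Gamma> \<in> ghom (stalk C u Y) (stalk_mob C u Y F P) (stalk_mob C u Y F P')"
  obtain U x a a' where U: "U \<in> gobs C" "x \<in> sob u U" and a: "a \<in> gobs (psec X U)" "a' \<in> gobs (psec X U)"
    and P_eq: "P = stalk_ob_cls C u X (U,x,a)" "P' = stalk_ob_cls C u X (U,x,a')"
    by (rule stalk_obs2_at_common_stage[OF X P])
  note Fa = functor_ob[OF section_functor[OF F U(1)] a(1)] functor_ob[OF section_functor[OF F U(1)] a(2)]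
  have "\<Gamma> \<in> ghom (stalk C u Y) (stalk_ob_cls C u Y (U,x,mob F U a)) (stalk_ob_cls C u Y (U,x,mob F U a'))"
    using \<Gamma> P_eq stalk_mob_cls[OF X Y F U] a by simp
  then obtain W z k \<gamma> where k: "el_arr W z k U x"
    "\<gamma> \<in> ghom (psec Y W) (prob Y k (mob F U a)) (prob Y k (mob F U a'))"
    "\<Gamma> = stalk_ar_cls C u Y (W,z,\<gamma>)"
    using stalk_hom_at_stage[OF Y _ U Fa] by blast
  have W: "W \<in> gobs C" "z \<in> sob u W" using el_arrD[OF k(1)] by blast+
  have "\<gamma> \<in> ghom (psec Y W) (mob F W (prob X k a)) (mob F W (prob X k a'))"
    using k(2) morphism_restrict_ob[OF F _ a(1)] morphism_restrict_ob[OF F _ a(2)] el_arrD[OF k(1)]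
    by simp
  then obtain W' z' k' \<alpha> where k': "el_arr W' z' k' W z"
    "\<alpha> \<in> ghom (psec X W') (prob X k' (prob X k a)) (prob X k' (prob X k a'))" "mar F W' \<alpha> = prar Y k' \<gamma>"
    using L W restrict_ob[OF X k(1)] a unfolding locally_full_def by blast
  have W': "W' \<in> gobs C" "z' \<in> sob u W'" using el_arrD[OF k'(1)] by blast+
  have "stalk_ar_cls C u X (W',z',\<alpha>) \<in> ghom (stalk C u X) P P'"
    using stalk_ar_cls_hom[OF X W' k'(2)] P_eq stalk_ob_cls_restrict[OF X k(1)]
      stalk_ob_cls_restrict[OF X k'(1) restrict_ob[OF X k(1)]] a by simp
  moreover have "stalk_mar C u Y F (stalk_ar_cls C u X (W',z',\<alpha>)) = \<Gamma>"
    using stalk_mar_cls[OF X Y F W'] k'(2,3) k(3) stalk_ar_cls_restrict[OF Y k'(1)] k(2)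
    by (simp add: ghom_def)
  ultimately show "\<exists>A\<in>ghom (stalk C u X) P P'. stalk_mar C u Y F A = \<Gamma>" by blast
qed

lemma stalk_ess_surj_if_locally_ess_surj:
  assumes L: "locally_ess_surj X Y F"
  shows "ess_surj_functor (stalk C u X) (stalk C u Y) (stalk_mob C u Y F)"
  unfolding ess_surj_functor_def
proof
  fix Q assume "Q \<in> gobs (stalk C u Y)"
  then obtain U x b where U: "U \<in> gobs C" "x \<in> sob u U" and b: "b \<in> gobs (psec Y U)"
    and Q: "Q = stalk_ob_cls C u Y (U,x,b)"
    unfolding stalk_obs_iff[OF Y] by blast
  obtain W z k a e where k: "el_arr W z k U x" "a \<in> gobs (psec X W)"
    "e \<in> ghom (psec Y W) (mob F W a) (prob Y k b)" "is_iso (psec Y W) e"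
    using L U b unfolding locally_ess_surj_def by blast
  have W: "W \<in> gobs C" "z \<in> sob u W" using el_arrD[OF k(1)] by blast+
  have "stalk_ar_cls C u Y (W,z,e) \<in> ghom (stalk C u Y) (stalk_mob C u Y F (stalk_ob_cls C u X (W,z,a))) Q"
    using stalk_ar_cls_hom[OF Y W k(3)] stalk_mob_cls[OF X Y F W k(2)] stalk_ob_cls_restrict[OF Y k(1) b] Q
    by simp
  moreover have "is_iso (stalk C u Y) (stalk_ar_cls C u Y (W,z,e))"
    using functor_iso[OF stalk_germ_functor[OF Y W] section_category[OF Y W(1)] k(3,4)] .
  ultimately show "\<exists>P\<in>gobs (stalk C u X). \<exists>E\<in>ghom (stalk C u Y) (stalk_mob C u Y F P) Q. is_iso (stalk C u Y) E"
    using stalk_ob_cls_mem[OF X W k(2)] by blast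
qed

lemma stalk_weq_imp_local:
  assumes "grpd_weq (stalk C u X) (stalk C u Y) (stalk_mob C u Y F) (stalk_mar C u Y F)"
    and "\<And>U. U \<in> gobs C \<Longrightarrow> groupoid (psec Y U)"
  shows "locally_faithful X F" "locally_full X Y F" "locally_ess_surj X Y F"
proof -
  note weq = grpd_weq_imp_fully_faithful_ess_surj[OF stalk_category[OF X] stalk_category[OF Y] assms(1)]
  show "locally_faithful X F" using locally_faithful_if_stalk_faithful[OF weq(1)] .
  show "locally_full X Y F" using locally_full_if_stalk_full[OF weq(2)] .
  show "locally_ess_surj X Y F" using locally_ess_surj_if_stalk_ess_surj[OF weq(3) assms(2)] .
qed

lemma local_imp_stalk_weq:
  assumes "locally_faithful X F" "locally_full X Y F" "locally_ess_surj X Y F"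
  shows "grpd_weq (stalk C u X) (stalk C u Y) (stalk_mob C u Y F) (stalk_mar C u Y F)"
  using grpd_weq_iff_fully_faithful_ess_surj[OF stalk_category[OF X] stalk_category[OF Y], THEN iffD2]
    stalk_functor[OF X Y F] stalk_faithful_if_locally_faithful[OF assms(1)]
    stalk_full_if_locally_full[OF assms(2)] stalk_ess_surj_if_locally_ess_surj[OF assms(3)] by blast

end

end

lemma hfp_obs_iff:
  "(x,\<phi>) \<in> hfp_obs G t ta \<longleftrightarrow> x \<in> gobs G \<and> \<phi> \<in> ghom G x (t x) \<and>
    gcomp G (ta \<phi>) \<phi> = gide G x \<and> gcomp G \<phi> (ta \<phi>) = gide G (t x)"
  unfolding hfp_obs_def by simp

lemma hfp_grpd_simps:
  "gobs (hfp_grpd G t ta) = hfp_obs G t ta"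
  "garrs (hfp_grpd G t ta) = {(p,\<alpha>,q). p \<in> hfp_obs G t ta \<and> q \<in> hfp_obs G t ta \<and>
     \<alpha> \<in> ghom G (fst p) (fst q) \<and> gcomp G (snd q) \<alpha> = gcomp G (ta \<alpha>) (snd p)}"
  "gdom (hfp_grpd G t ta) (p,\<alpha>,q) = p"
  "gcod (hfp_grpd G t ta) (p,\<alpha>,q) = q"
  "gcomp (hfp_grpd G t ta) (p2,\<beta>,q2) (p1,\<alpha>,q1) = (p1, gcomp G \<beta> \<alpha>, q2)"
  "gide (hfp_grpd G t ta) p = (p, gide G (fst p), p)"
  unfolding hfp_grpd_def by simp_all

lemma hfp_hom_iff:
  "((x,\<phi>),\<alpha>,(y,\<psi>)) \<in> ghom (hfp_grpd G t ta) p q \<longleftrightarrow>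
    (x,\<phi>) \<in> hfp_obs G t ta \<and> (y,\<psi>) \<in> hfp_obs G t ta \<and> \<alpha> \<in> ghom G x y \<and>
    gcomp G \<psi> \<alpha> = gcomp G (ta \<alpha>) \<phi> \<and> p = (x,\<phi>) \<and> q = (y,\<psi>)"
  unfolding ghom_def[where C = "hfp_grpd G t ta"] by (auto simp: hfp_grpd_simps)

lemma hfp_obs_arrs: "(x,\<phi>) \<in> hfp_obs G t ta \<Longrightarrow> x \<in> gobs G \<and> \<phi> \<in> garrs G"
  unfolding hfp_obs_def ghom_def by auto

lemma hfp_arrs_cases:
  "f \<in> garrs (hfp_grpd G t ta) \<Longrightarrow>
    \<exists>x \<phi> \<alpha> y \<psi>. f = ((x,\<phi>),\<alpha>,(y,\<psi>)) \<and> x \<in> gobs G \<and> \<phi> \<in> garrs G \<and> \<alpha> \<in> garrs G \<and> y \<in> gobs G \<and> \<psi> \<in> garrs G"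
  by (auto simp: hfp_grpd_simps ghom_def dest!: hfp_obs_arrs)

lemma hfp_gcomp_hom:
  assumes G: "category G" and T: "is_functor G G t ta"
    and fg: "f \<in> garrs (hfp_grpd G t ta)" "g \<in> garrs (hfp_grpd G t ta)"
      "gcod (hfp_grpd G t ta) f = gdom (hfp_grpd G t ta) g"
  shows "gcomp (hfp_grpd G t ta) g f \<in> ghom (hfp_grpd G t ta) (gdom (hfp_grpd G t ta) f) (gcod (hfp_grpd G t ta) g)"
proof -
  obtain x \<phi> \<alpha> y \<psi> where f: "f = ((x,\<phi>),\<alpha>,(y,\<psi>))" "(x,\<phi>) \<in> hfp_obs G t ta" "(y,\<psi>) \<in> hfp_obs G t ta"
    "\<alpha> \<in> ghom G x y" "gcomp G \<psi> \<alpha> = gcomp G (ta \<alpha>) \<phi>"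
    using fg(1) by (cases f) (auto simp: hfp_grpd_simps)
  obtain w \<chi> \<beta> where g: "g = ((y,\<psi>),\<beta>,(w,\<chi>))" "(w,\<chi>) \<in> hfp_obs G t ta" "\<beta> \<in> ghom G y w"
    "gcomp G \<chi> \<beta> = gcomp G (ta \<beta>) \<psi>"
    using fg(2,3) f(1) by (cases g) (auto simp: hfp_grpd_simps)
  have o: "\<phi> \<in> ghom G x (t x)" "\<psi> \<in> ghom G y (t y)" "\<chi> \<in> ghom G w (t w)"
    using f g by (auto simp: hfp_obs_iff)
  have ta: "ta \<alpha> \<in> ghom G (t x) (t y)" "ta \<beta> \<in> ghom G (t y) (t w)"
    using functor_hom[OF T f(4)] functor_hom[OF T g(3)] .
  have "gcomp G \<chi> (gcomp G \<beta> \<alpha>) = gcomp G (gcomp G \<chi> \<beta>) \<alpha>" using cat_assoc[OF G f(4) g(3) o(3)] .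
  also have "\<dots> = gcomp G (ta \<beta>) (gcomp G \<psi> \<alpha>)" using g(4) cat_assoc[OF G f(4) o(2) ta(2)] by simp
  also have "\<dots> = gcomp G (gcomp G (ta \<beta>) (ta \<alpha>)) \<phi>" using f(5) cat_assoc[OF G o(1) ta] by simp
  also have "\<dots> = gcomp G (ta (gcomp G \<beta> \<alpha>)) \<phi>" using functor_comp[OF T f(4) g(3)] by simp
  finally show ?thesis using f g cat_comp[OF G f(4) g(3)] by (simp add: hfp_grpd_simps hfp_hom_iff)
qed

lemma hfp_category:
  assumes G: "category G" and T: "is_functor G G t ta"
  shows "category (hfp_grpd G t ta)"
  unfolding category_def
proof (intro conjI ballI impI)
  fix f assume f: "f \<in> garrs (hfp_grpd G t ta)"
  then show "gdom (hfp_grpd G t ta) f \<in> gobs (hfp_grpd G t ta)"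
    "gcod (hfp_grpd G t ta) f \<in> gobs (hfp_grpd G t ta)"
    by (auto simp: hfp_grpd_simps)
  from f obtain p \<alpha> q where "f = (p,\<alpha>,q)" "\<alpha> \<in> ghom G (fst p) (fst q)"
    by (auto simp: hfp_grpd_simps)
  then show "gcomp (hfp_grpd G t ta) (gide (hfp_grpd G t ta) (gcod (hfp_grpd G t ta) f)) f = f"
    "gcomp (hfp_grpd G t ta) f (gide (hfp_grpd G t ta) (gdom (hfp_grpd G t ta) f)) = f"
    using cat_id_left[OF G] cat_id_right[OF G] by (simp_all add: hfp_grpd_simps)
next
  fix p assume p: "p \<in> gobs (hfp_grpd G t ta)"
  then obtain x \<phi> where px: "p = (x,\<phi>)" "x \<in> gobs G" "\<phi> \<in> ghom G x (t x)"
    by (cases p) (auto simp: hfp_grpd_simps hfp_obs_iff)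
  have "gcomp G \<phi> (gide G x) = gcomp G (ta (gide G x)) \<phi>"
    using functor_id[OF T px(2)] cat_id_left[OF G px(3)] cat_id_right[OF G px(3)] by simp
  then show "gide (hfp_grpd G t ta) p \<in> ghom (hfp_grpd G t ta) p p"
    using p px cat_id[OF G px(2)] by (simp add: hfp_hom_iff hfp_grpd_simps)
next
  fix f g assume "f \<in> garrs (hfp_grpd G t ta)" "g \<in> garrs (hfp_grpd G t ta)"
    "gcod (hfp_grpd G t ta) f = gdom (hfp_grpd G t ta) g"
  then show "gcomp (hfp_grpd G t ta) g f
      \<in> ghom (hfp_grpd G t ta) (gdom (hfp_grpd G t ta) f) (gcod (hfp_grpd G t ta) g)"
    by (rule hfp_gcomp_hom[OF G T])
next
  fix f g h assume fgh: "f \<in> garrs (hfp_grpd G t ta)" "g \<in> garrs (hfp_grpd G t ta)"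
    "h \<in> garrs (hfp_grpd G t ta)" "gcod (hfp_grpd G t ta) f = gdom (hfp_grpd G t ta) g"
    "gcod (hfp_grpd G t ta) g = gdom (hfp_grpd G t ta) h"
  obtain p \<alpha> q where f: "f = (p,\<alpha>,q)" "\<alpha> \<in> ghom G (fst p) (fst q)"
    using fgh(1) by (cases f) (auto simp: hfp_grpd_simps)
  obtain \<beta> r where g: "g = (q,\<beta>,r)" "\<beta> \<in> ghom G (fst q) (fst r)"
    using fgh(2,4) f by (cases g) (auto simp: hfp_grpd_simps)
  obtain \<gamma> s where h: "h = (r,\<gamma>,s)" "\<gamma> \<in> ghom G (fst r) (fst s)"
    using fgh(3,5) g by (cases h) (auto simp: hfp_grpd_simps)
  show "gcomp (hfp_grpd G t ta) h (gcomp (hfp_grpd G t ta) g f)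
      = gcomp (hfp_grpd G t ta) (gcomp (hfp_grpd G t ta) h g) f"
    using f g h cat_assoc[OF G f(2) g(2) h(2)] by (simp add: hfp_grpd_simps)
qed

lemma hfp_obs_image:
  assumes G: "category G" and F: "is_functor G G' Fo Fa" and T: "is_functor G G t ta"
    and equivariant_ob: "\<And>x. x \<in> gobs G \<Longrightarrow> Fo (t x) = t' (Fo x)"
    and equivariant_arr: "\<And>\<alpha>. \<alpha> \<in> garrs G \<Longrightarrow> Fa (ta \<alpha>) = ta' (Fa \<alpha>)"
    and involutive: "\<And>x. x \<in> gobs G \<Longrightarrow> t (t x) = x"
    and "(x,\<phi>) \<in> hfp_obs G t ta"
  shows "(Fo x, Fa \<phi>) \<in> hfp_obs G' t' ta'"
proof -
  have x: "x \<in> gobs G" "\<phi> \<in> ghom G x (t x)" "gcomp G (ta \<phi>) \<phi> = gide G x"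
    "gcomp G \<phi> (ta \<phi>) = gide G (t x)"
    using assms(7) by (auto simp: hfp_obs_iff)
  have t\<phi>: "ta \<phi> \<in> ghom G (t x) x" using functor_hom[OF T x(2)] involutive[OF x(1)] by simp
  have Fta: "Fa (ta \<phi>) = ta' (Fa \<phi>)" using equivariant_arr x(2) by (simp add: ghom_def)
  have "Fa \<phi> \<in> ghom G' (Fo x) (t' (Fo x))" using functor_hom[OF F x(2)] equivariant_ob[OF x(1)] by simp
  moreover have "gcomp G' (ta' (Fa \<phi>)) (Fa \<phi>) = gide G' (Fo x)"
    using functor_comp[OF F x(2) t\<phi>] Fta x(3) functor_id[OF F x(1)] by simp
  moreover have "gcomp G' (Fa \<phi>) (ta' (Fa \<phi>)) = gide G' (t' (Fo x))"
    using functor_comp[OF F t\<phi> x(2)] Fta x(4) functor_id[OF F cat_cod[OF G x(2)]] equivariant_ob[OF x(1)]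
    by simp
  ultimately show ?thesis using functor_ob[OF F x(1)] by (simp add: hfp_obs_iff)
qed

lemma hfp_functor:
  assumes G: "category G" and F: "is_functor G G' Fo Fa" and T: "is_functor G G t ta"
    and equivariant_ob: "\<And>x. x \<in> gobs G \<Longrightarrow> Fo (t x) = t' (Fo x)"
    and equivariant_arr: "\<And>\<alpha>. \<alpha> \<in> garrs G \<Longrightarrow> Fa (ta \<alpha>) = ta' (Fa \<alpha>)"
    and involutive: "\<And>x. x \<in> gobs G \<Longrightarrow> t (t x) = x"
  shows "is_functor (hfp_grpd G t ta) (hfp_grpd G' t' ta') (\<lambda>(x,\<phi>). (Fo x, Fa \<phi>))
      (\<lambda>((x,\<phi>),\<alpha>,(y,\<psi>)). ((Fo x, Fa \<phi>), Fa \<alpha>, (Fo y, Fa \<psi>)))" (is "is_functor _ _ ?Fo ?Fa")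
proof -
  note ob = hfp_obs_image[OF G F T equivariant_ob equivariant_arr involutive]
  show ?thesis
  proof (rule is_functorI)
    fix p assume "p \<in> gobs (hfp_grpd G t ta)"
    then show "?Fo p \<in> gobs (hfp_grpd G' t' ta')" using ob by (cases p) (simp add: hfp_grpd_simps)
  next
    fix f p q assume f: "f \<in> ghom (hfp_grpd G t ta) p q"
    obtain x \<phi> \<alpha> y \<psi> where fx: "f = ((x,\<phi>),\<alpha>,(y,\<psi>))" by (cases f) auto
    have h: "(x,\<phi>) \<in> hfp_obs G t ta" "(y,\<psi>) \<in> hfp_obs G t ta" "\<alpha> \<in> ghom G x y"
      "gcomp G \<psi> \<alpha> = gcomp G (ta \<alpha>) \<phi>" "p = (x,\<phi>)" "q = (y,\<psi>)"
      using f unfolding fx hfp_hom_iff by blast+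
    have o: "\<phi> \<in> ghom G x (t x)" "\<psi> \<in> ghom G y (t y)" using h by (auto simp: hfp_obs_iff)
    have "gcomp G' (Fa \<psi>) (Fa \<alpha>) = gcomp G' (ta' (Fa \<alpha>)) (Fa \<phi>)"
      using functor_comp[OF F h(3) o(2)] functor_comp[OF F o(1) functor_hom[OF T h(3)]] h(4)
        equivariant_arr[of \<alpha>] h(3) by (simp add: ghom_def)
    then show "?Fa f \<in> ghom (hfp_grpd G' t' ta') (?Fo p) (?Fo q)"
      using fx h ob functor_hom[OF F h(3)] by (simp add: hfp_hom_iff)
  next
    fix p assume "p \<in> gobs (hfp_grpd G t ta)"
    then obtain x \<phi> where "p = (x,\<phi>)" "x \<in> gobs G" by (cases p) (auto simp: hfp_grpd_simps hfp_obs_iff)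
    then show "?Fa (gide (hfp_grpd G t ta) p) = gide (hfp_grpd G' t' ta') (?Fo p)"
      using functor_id[OF F] by (simp add: hfp_grpd_simps)
  next
    fix f g p q r assume fg: "f \<in> ghom (hfp_grpd G t ta) p q" "g \<in> ghom (hfp_grpd G t ta) q r"
    obtain x \<phi> \<alpha> y \<psi> where fx: "f = ((x,\<phi>),\<alpha>,(y,\<psi>))" by (cases f) auto
    obtain y' \<psi>' \<beta> w \<chi> where gx: "g = ((y',\<psi>'),\<beta>,(w,\<chi>))" by (cases g) auto
    have h: "\<alpha> \<in> ghom G x y" "\<beta> \<in> ghom G y w" "y' = y" "\<psi>' = \<psi>"
      using fg unfolding fx gx hfp_hom_iff by auto
    show "?Fa (gcomp (hfp_grpd G t ta) g f) = gcomp (hfp_grpd G' t' ta') (?Fa g) (?Fa f)"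
      using fx gx h functor_comp[OF F h(1,2)] by (simp add: hfp_grpd_simps)
  qed
qed

lemma cat_inverse_cancel:
  assumes G: "category G" and f: "f \<in> ghom G b c" "g \<in> ghom G c b" "gcomp G g f = gide G b"
    and x: "x \<in> ghom G a b"
  shows "gcomp G g (gcomp G f x) = x"
  using cat_assoc[OF G x f(1,2)] f(3) cat_id_left[OF G x] by simp

lemma hfp_obs_transport:
  assumes G: "category G" and T: "is_functor G G t ta"
    and involutive: "\<And>x. x \<in> gobs G \<Longrightarrow> t (t x) = x" "\<And>\<alpha>. \<alpha> \<in> garrs G \<Longrightarrow> ta (ta \<alpha>) = \<alpha>"
    and b: "(b,\<psi>) \<in> hfp_obs G t ta"
    and e: "e \<in> ghom G c b" "e' \<in> ghom G b c" "gcomp G e' e = gide G c" "gcomp G e e' = gide G b"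
  defines "\<gamma> \<equiv> gcomp G (ta e') (gcomp G \<psi> e)"
  shows "(c,\<gamma>) \<in> hfp_obs G t ta" "gcomp G \<psi> e = gcomp G (ta e) \<gamma>" "gcomp G \<gamma> e' = gcomp G (ta e') \<psi>"
proof -
  have \<psi>: "b \<in> gobs G" "\<psi> \<in> ghom G b (t b)" "gcomp G (ta \<psi>) \<psi> = gide G b" "gcomp G \<psi> (ta \<psi>) = gide G (t b)"
    using b by (auto simp: hfp_obs_iff)
  have c: "c \<in> gobs G" using cat_dom[OF G e(1)] .
  have t\<psi>: "ta \<psi> \<in> ghom G (t b) b" using functor_hom[OF T \<psi>(2)] involutive(1)[OF \<psi>(1)] by simp
  have te: "ta e \<in> ghom G (t c) (t b)" "ta e' \<in> ghom G (t b) (t c)" using functor_hom[OF T] e(1,2) by blast+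
  have te_inv: "gcomp G (ta e) (ta e') = gide G (t b)" "gcomp G (ta e') (ta e) = gide G (t c)"
    using functor_comp[OF T e(2,1)] functor_comp[OF T e(1,2)] e(3,4) functor_id[OF T] \<psi>(1) c by simp_all
  have \<psi>e: "gcomp G \<psi> e \<in> ghom G c (t b)" using cat_comp[OF G e(1) \<psi>(2)] .
  have t\<psi>e: "gcomp G (ta \<psi>) (ta e) \<in> ghom G (t c) b" using cat_comp[OF G te(1) t\<psi>] .
  have \<gamma>: "\<gamma> \<in> ghom G c (t c)" unfolding \<gamma>_def using cat_comp[OF G \<psi>e te(2)] .
  have t\<gamma>: "ta \<gamma> = gcomp G e' (gcomp G (ta \<psi>) (ta e))"
    unfolding \<gamma>_def using functor_comp[OF T \<psi>e te(2)] functor_comp[OF T e(1) \<psi>(2)] involutive(2) e(2)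
    by (simp add: ghom_def)
  show e_arrow: "gcomp G \<psi> e = gcomp G (ta e) \<gamma>"
    unfolding \<gamma>_def using cat_inverse_cancel[OF G te(2,1) te_inv(1) \<psi>e] by simp
  have e_t\<gamma>: "gcomp G e (ta \<gamma>) = gcomp G (ta \<psi>) (ta e)"
    unfolding t\<gamma> using cat_inverse_cancel[OF G e(2,1) e(4) t\<psi>e] by simp
  have "gcomp G (ta \<gamma>) \<gamma> = gcomp G e' (gcomp G (gcomp G (ta \<psi>) (ta e)) \<gamma>)"
    unfolding t\<gamma> using cat_assoc[OF G \<gamma> t\<psi>e e(2)] by simp
  also have "\<dots> = gcomp G e' (gcomp G (ta \<psi>) (gcomp G \<psi> e))"
    using cat_assoc[OF G \<gamma> te(1) t\<psi>] e_arrow by simp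
  also have "\<dots> = gide G c" using cat_inverse_cancel[OF G \<psi>(2) t\<psi> \<psi>(3) e(1)] e(3) by simp
  finally have 1: "gcomp G (ta \<gamma>) \<gamma> = gide G c" .
  have t\<gamma>_hom: "ta \<gamma> \<in> ghom G (t c) c" using functor_hom[OF T \<gamma>] involutive(1)[OF c] by simp
  have \<gamma>_eq: "gcomp G (ta e') (gcomp G \<psi> e) = \<gamma>" unfolding \<gamma>_def ..
  have "gcomp G \<gamma> (ta \<gamma>) = gcomp G (ta e') (gcomp G \<psi> (gcomp G e (ta \<gamma>)))"
    using cat_assoc[OF G t\<gamma>_hom \<psi>e te(2)] cat_assoc[OF G t\<gamma>_hom e(1) \<psi>(2)] \<gamma>_eq by simp
  also have "\<dots> = gide G (t c)"
    using e_t\<gamma> cat_inverse_cancel[OF G t\<psi> \<psi>(2) \<psi>(4) te(1)] te_inv(2) by simp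
  finally have 2: "gcomp G \<gamma> (ta \<gamma>) = gide G (t c)" .
  show "(c,\<gamma>) \<in> hfp_obs G t ta" using c \<gamma> 1 2 by (simp add: hfp_obs_iff)
  have "gcomp G \<gamma> e' = gcomp G (ta e') (gcomp G \<psi> (gcomp G e e'))"
    unfolding \<gamma>_def using cat_assoc[OF G e(2) \<psi>e te(2)] cat_assoc[OF G e(2) e(1) \<psi>(2)] by simp
  then show "gcomp G \<gamma> e' = gcomp G (ta e') \<psi>" using e(4) cat_id_right[OF G \<psi>(2)] by simp
qed

lemma hfp_iso_transport:
  assumes G: "category G" and T: "is_functor G G t ta"
    and involutive: "\<And>x. x \<in> gobs G \<Longrightarrow> t (t x) = x" "\<And>\<alpha>. \<alpha> \<in> garrs G \<Longrightarrow> ta (ta \<alpha>) = \<alpha>"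
    and b: "(b,\<psi>) \<in> hfp_obs G t ta"
    and e: "e \<in> ghom G c b" "e' \<in> ghom G b c" "gcomp G e' e = gide G c" "gcomp G e e' = gide G b"
  defines "\<gamma> \<equiv> gcomp G (ta e') (gcomp G \<psi> e)"
  shows "((c,\<gamma>),e,(b,\<psi>)) \<in> ghom (hfp_grpd G t ta) (c,\<gamma>) (b,\<psi>)"
    and "is_iso (hfp_grpd G t ta) ((c,\<gamma>),e,(b,\<psi>))" and "(c,\<gamma>) \<in> hfp_obs G t ta"
proof -
  note transport = hfp_obs_transport[OF G T involutive b e, folded \<gamma>_def]
  show E: "((c,\<gamma>),e,(b,\<psi>)) \<in> ghom (hfp_grpd G t ta) (c,\<gamma>) (b,\<psi>)"
    using transport(1,2) b e(1) by (simp add: hfp_hom_iff)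
  have "((b,\<psi>),e',(c,\<gamma>)) \<in> ghom (hfp_grpd G t ta) (b,\<psi>) (c,\<gamma>)"
    using transport(1,3) b e(2) by (simp add: hfp_hom_iff)
  moreover have "gcomp (hfp_grpd G t ta) ((b,\<psi>),e',(c,\<gamma>)) ((c,\<gamma>),e,(b,\<psi>)) = gide (hfp_grpd G t ta) (c,\<gamma>)"
    "gcomp (hfp_grpd G t ta) ((c,\<gamma>),e,(b,\<psi>)) ((b,\<psi>),e',(c,\<gamma>)) = gide (hfp_grpd G t ta) (b,\<psi>)"
    using e(3,4) by (simp_all only: hfp_grpd_simps fst_conv)
  ultimately show "is_iso (hfp_grpd G t ta) ((c,\<gamma>),e,(b,\<psi>))"
    by (rule is_isoI[OF E])
  show "(c,\<gamma>) \<in> hfp_obs G t ta" using transport(1) .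
qed

lemma hfp_psh_simps:
  "psec (hfp_psh X T) U = hfp_grpd (psec X U) (aob T U) (aar T U)"
  "prob (hfp_psh X T) f (x,\<phi>) = (prob X f x, prar X f \<phi>)"
  "prar (hfp_psh X T) f ((x,\<phi>),\<alpha>,(y,\<psi>)) = ((prob X f x, prar X f \<phi>), prar X f \<alpha>, (prob X f y, prar X f \<psi>))"
  unfolding hfp_psh_def by simp_all

lemma hfp_mor_simps:
  "mob (hfp_mor F) U (x,\<phi>) = (mob F U x, mar F U \<phi>)"
  "mar (hfp_mor F) U ((x,\<phi>),\<alpha>,(y,\<psi>)) = ((mob F U x, mar F U \<phi>), mar F U \<alpha>, (mob F U y, mar F U \<psi>))"
  unfolding hfp_mor_def by simp_all

context
  fixes C :: "('o,'m) gcat" and X :: "('o,'m,'a,'b) pgrpd" and T :: "('o,'a,'b) z2act"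
  assumes T: "z2_action C X T"
begin

lemma z2_action_functor: "U \<in> gobs C \<Longrightarrow> is_functor (psec X U) (psec X U) (aob T U) (aar T U)"
  using T unfolding z2_action_def by blast

lemma z2_action_involutive_ob: "U \<in> gobs C \<Longrightarrow> a \<in> gobs (psec X U) \<Longrightarrow> aob T U (aob T U a) = a"
  using T unfolding z2_action_def by blast

lemma z2_action_involutive_arr: "U \<in> gobs C \<Longrightarrow> \<alpha> \<in> garrs (psec X U) \<Longrightarrow> aar T U (aar T U \<alpha>) = \<alpha>"
  using T unfolding z2_action_def by blast

lemma z2_action_restrict_ob:
  "g \<in> ghom C W U \<Longrightarrow> a \<in> gobs (psec X U) \<Longrightarrow> prob X g (aob T U a) = aob T W (prob X g a)"
  using T unfolding z2_action_def ghom_def by auto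

lemma z2_action_restrict_arr:
  "g \<in> ghom C W U \<Longrightarrow> \<alpha> \<in> garrs (psec X U) \<Longrightarrow> prar X g (aar T U \<alpha>) = aar T W (prar X g \<alpha>)"
  using T unfolding z2_action_def ghom_def by auto

lemma hfp_presheaf_of_categories:
  assumes C: "category C" and X: "presheaf_of_categories C X"
  shows "presheaf_of_categories C (hfp_psh X T)"
  unfolding presheaf_of_categories_def
proof (intro conjI ballI impI)
  fix U assume U: "U \<in> gobs C"
  show "category (psec (hfp_psh X T) U)"
    unfolding hfp_psh_simps using hfp_category[OF section_category[OF X U] z2_action_functor[OF U]] .
  show "prob (hfp_psh X T) (gide C U) p = p" if "p \<in> gobs (psec (hfp_psh X T) U)" for p
    using that psh_restrict_id[OF obs_presheaf[OF X] U] psh_restrict_id[OF arrs_presheaf[OF X] U]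
    by (cases p) (auto simp: hfp_psh_simps hfp_grpd_simps dest: hfp_obs_arrs)
  show "prar (hfp_psh X T) (gide C U) f = f" if "f \<in> garrs (psec (hfp_psh X T) U)" for f
    using hfp_arrs_cases[OF that[unfolded hfp_psh_simps]] psh_restrict_id[OF obs_presheaf[OF X] U]
      psh_restrict_id[OF arrs_presheaf[OF X] U] by (auto simp: hfp_psh_simps)
next
  fix f assume f: "f \<in> garrs C"
  have fh: "f \<in> ghom C (gdom C f) (gcod C f)" using garrs_ghom[OF f] .
  have U: "gcod C f \<in> gobs C" using cat_arr_cod[OF C f] .
  show "is_functor (psec (hfp_psh X T) (gcod C f)) (psec (hfp_psh X T) (gdom C f))
      (prob (hfp_psh X T) f) (prar (hfp_psh X T) f)"
    using hfp_functor[where t' = "aob T (gdom C f)" and ta' = "aar T (gdom C f)",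
        OF section_category[OF X U] restriction_functor[OF X fh] z2_action_functor[OF U]
        z2_action_restrict_ob[OF fh] z2_action_restrict_arr[OF fh] z2_action_involutive_ob[OF U]]
    by (simp add: hfp_psh_def)
next
  fix f g assume fg: "f \<in> garrs C" "g \<in> garrs C" "gcod C f = gdom C g"
  have h: "f \<in> ghom C (gdom C f) (gdom C g)" "g \<in> ghom C (gdom C g) (gcod C g)" using fg
    by (auto simp: ghom_def)
  note comp = psh_restrict_comp[OF obs_presheaf[OF X] h] psh_restrict_comp[OF arrs_presheaf[OF X] h]
  show "prob (hfp_psh X T) (gcomp C g f) p = prob (hfp_psh X T) f (prob (hfp_psh X T) g p)"
    if "p \<in> gobs (psec (hfp_psh X T) (gcod C g))" for p
    using that comp by (cases p) (auto simp: hfp_psh_simps hfp_grpd_simps dest: hfp_obs_arrs)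
  show "prar (hfp_psh X T) (gcomp C g f) \<alpha> = prar (hfp_psh X T) f (prar (hfp_psh X T) g \<alpha>)"
    if "\<alpha> \<in> garrs (psec (hfp_psh X T) (gcod C g))" for \<alpha>
    using hfp_arrs_cases[OF that[unfolded hfp_psh_simps]] comp by (auto simp: hfp_psh_simps)
qed

end

lemma hfp_mor_restrict:
  assumes F: "presheaf_morphism C X Y F" and g: "g \<in> ghom C W' W"
    and "a \<in> gobs (psec X W)" "a' \<in> gobs (psec X W)"
    and "\<phi> \<in> garrs (psec X W)" "\<alpha> \<in> garrs (psec X W)" "\<phi>' \<in> garrs (psec X W)"
  shows "mar (hfp_mor F) W' (prar (hfp_psh X TX) g ((a,\<phi>),\<alpha>,(a',\<phi>')))
    = prar (hfp_psh Y TY) g (mar (hfp_mor F) W ((a,\<phi>),\<alpha>,(a',\<phi>')))"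
  using assms(3-) morphism_restrict_ob[OF F g] morphism_restrict_arr[OF F g]
  by (simp add: hfp_psh_simps hfp_mor_simps)

lemma hfp_presheaf_morphism:
  assumes X: "presheaf_of_categories C X" and Y: "presheaf_of_categories C Y"
    and TX: "z2_action C X TX" and TY: "z2_action C Y TY"
    and F: "presheaf_morphism C X Y F" and E: "equivariant C X TX TY F"
  shows "presheaf_morphism C (hfp_psh X TX) (hfp_psh Y TY) (hfp_mor F)"
  unfolding presheaf_morphism_def
proof (intro conjI ballI)
  fix U assume U: "U \<in> gobs C"
  show "is_functor (psec (hfp_psh X TX) U) (psec (hfp_psh Y TY) U) (mob (hfp_mor F) U) (mar (hfp_mor F) U)"
    using hfp_functor[where t' = "aob TY U" and ta' = "aar TY U",
        OF section_category[OF X U] section_functor[OF F U] z2_action_functor[OF TX U]]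
      E U z2_action_involutive_ob[OF TX U] unfolding equivariant_def
    by (simp add: hfp_psh_def hfp_mor_def)
next
  fix f assume f: "f \<in> garrs C"
  note fh = garrs_ghom[OF f]
  show "mob (hfp_mor F) (gdom C f) (prob (hfp_psh X TX) f p) = prob (hfp_psh Y TY) f (mob (hfp_mor F) (gcod C f) p)"
    if "p \<in> gobs (psec (hfp_psh X TX) (gcod C f))" for p
    using that morphism_restrict_ob[OF F fh] morphism_restrict_arr[OF F fh]
    by (cases p) (auto simp: hfp_psh_simps hfp_mor_simps hfp_grpd_simps dest: hfp_obs_arrs)
  show "mar (hfp_mor F) (gdom C f) (prar (hfp_psh X TX) f \<alpha>) = prar (hfp_psh Y TY) f (mar (hfp_mor F) (gcod C f) \<alpha>)"
    if "\<alpha> \<in> garrs (psec (hfp_psh X TX) (gcod C f))" for \<alpha>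
    using hfp_arrs_cases[OF that[unfolded hfp_psh_simps]] morphism_restrict_ob[OF F fh]
      morphism_restrict_arr[OF F fh] by (auto simp: hfp_psh_simps hfp_mor_simps)
qed

lemma equivariant_ob:
  "equivariant C X TX TY F \<Longrightarrow> U \<in> gobs C \<Longrightarrow> a \<in> gobs (psec X U) \<Longrightarrow> mob F U (aob TX U a) = aob TY U (mob F U a)"
  unfolding equivariant_def by blast

lemma equivariant_arr:
  "equivariant C X TX TY F \<Longrightarrow> U \<in> gobs C \<Longrightarrow> \<alpha> \<in> garrs (psec X U) \<Longrightarrow> mar F U (aar TX U \<alpha>) = aar TY U (mar F U \<alpha>)"
  unfolding equivariant_def by blast

section \<open>Homotopy fixed points preserve local weak equivalences\<close>

context flat_point
begin

lemma locally_faithful_restrict_eq_gide: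
  assumes X: "presheaf_of_categories C X" and Y: "presheaf_of_categories C Y"
    and F: "presheaf_morphism C X Y F"
    and L: "locally_faithful X F" and U: "U \<in> gobs C" "x \<in> sob u U"
    and \<theta>: "\<theta> \<in> ghom (psec X U) c c" "mar F U \<theta> = gide (psec Y U) (mob F U c)"
  shows "\<exists>W z k. el_arr W z k U x \<and> prar X k \<theta> = gide (psec X W) (prob X k c)"
proof -
  have c: "c \<in> gobs (psec X U)" using cat_dom[OF section_category[OF X U(1)] \<theta>(1)] .
  have "mar F U \<theta> = mar F U (gide (psec X U) c)" using \<theta>(2) functor_id[OF section_functor[OF F U(1)] c]
    by simp
  then obtain W z k where "el_arr W z k U x" "prar X k \<theta> = prar X k (gide (psec X U) c)"
    using L U \<theta>(1) cat_id[OF section_category[OF X U(1)] c] unfolding locally_faithful_def by blast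
  then show ?thesis using restrict_gide[OF X _ c] by metis
qed

context
  fixes X :: "('o,'m,'a,'b) pgrpd" and Y :: "('o,'m,'c,'d) pgrpd" and F :: "('o,'a,'b,'c,'d) pmor"
    and TX :: "('o,'a,'b) z2act" and TY :: "('o,'c,'d) z2act"
  assumes X: "presheaf_of_categories C X" and Y: "presheaf_of_categories C Y"
    and F: "presheaf_morphism C X Y F"
    and TX: "z2_action C X TX" and TY: "z2_action C Y TY" and E: "equivariant C X TX TY F"
begin

lemma hfp_X_presheaf: "presheaf_of_categories C (hfp_psh X TX)"
  using hfp_presheaf_of_categories[OF TX cat X] .

lemma hfp_Y_presheaf: "presheaf_of_categories C (hfp_psh Y TY)"
  using hfp_presheaf_of_categories[OF TY cat Y] .

lemma hfp_F_morphism: "presheaf_morphism C (hfp_psh X TX) (hfp_psh Y TY) (hfp_mor F)"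
  using hfp_presheaf_morphism[OF X Y TX TY F E] .

lemma hfp_locally_faithful:
  assumes L: "locally_faithful X F"
  shows "locally_faithful (hfp_psh X TX) (hfp_mor F)"
  unfolding locally_faithful_def
proof (intro allI impI, elim conjE)
  fix U x p p' A B
  assume U: "U \<in> gobs C" "x \<in> sob u U"
    and AB: "A \<in> ghom (psec (hfp_psh X TX) U) p p'" "B \<in> ghom (psec (hfp_psh X TX) U) p p'"
    and eq: "mar (hfp_mor F) U A = mar (hfp_mor F) U B"
  obtain a \<phi> \<alpha> a' \<phi>' b \<chi> \<beta> b' \<chi>' where A: "A = ((a,\<phi>),\<alpha>,(a',\<phi>'))" and B: "B = ((b,\<chi>),\<beta>,(b',\<chi>'))"
    by (cases A, cases B) auto
  have h: "\<alpha> \<in> ghom (psec X U) a a'" "\<beta> \<in> ghom (psec X U) a a'" "b = a" "\<chi> = \<phi>" "b' = a'" "\<chi>' = \<phi>'"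
    using AB unfolding A B hfp_psh_simps hfp_hom_iff by auto
  have "mar F U \<alpha> = mar F U \<beta>" using eq unfolding A B hfp_mor_simps by simp
  then obtain W z k where k: "el_arr W z k U x" "prar X k \<alpha> = prar X k \<beta>"
    using L U h(1,2) unfolding locally_faithful_def by blast
  have "prar (hfp_psh X TX) k A = prar (hfp_psh X TX) k B" unfolding A B hfp_psh_simps using h k(2) by simp
  then show "\<exists>W z k. el_arr W z k U x \<and> prar (hfp_psh X TX) k A = prar (hfp_psh X TX) k B"
    using k(1) by blast
qed

lemma hfp_arrow_after_restriction:
  assumes faithful: "locally_faithful X F" and W: "W \<in> gobs C" "z \<in> sob u W"
    and p: "(a,\<phi>) \<in> hfp_obs (psec X W) (aob TX W) (aar TX W)"
      "(a',\<phi>') \<in> hfp_obs (psec X W) (aob TX W) (aar TX W)"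
    and \<alpha>: "\<alpha> \<in> ghom (psec X W) a a'"
    and image: "mar (hfp_mor F) W ((a,\<phi>),\<alpha>,(a',\<phi>')) \<in> garrs (psec (hfp_psh Y TY) W)"
  shows "\<exists>W' z' k. el_arr W' z' k W z \<and> prar (hfp_psh X TX) k ((a,\<phi>),\<alpha>,(a',\<phi>'))
    \<in> ghom (psec (hfp_psh X TX) W') (prob (hfp_psh X TX) k (a,\<phi>)) (prob (hfp_psh X TX) k (a',\<phi>'))"
proof -
  note cat_W = section_category[OF X W(1)]
  have \<phi>: "\<phi> \<in> ghom (psec X W) a (aob TX W a)" "\<phi>' \<in> ghom (psec X W) a' (aob TX W a')"
    using p by (simp_all add: hfp_obs_iff)
  have \<alpha>_bar: "aar TX W \<alpha> \<in> ghom (psec X W) (aob TX W a) (aob TX W a')"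
    using functor_hom[OF z2_action_functor[OF TX W(1)] \<alpha>] .
  have "gcomp (psec Y W) (mar F W \<phi>') (mar F W \<alpha>) = gcomp (psec Y W) (aar TY W (mar F W \<alpha>)) (mar F W \<phi>)"
    using image by (simp add: hfp_mor_simps hfp_psh_simps hfp_grpd_simps)
  then have "mar F W (gcomp (psec X W) \<phi>' \<alpha>) = mar F W (gcomp (psec X W) (aar TX W \<alpha>) \<phi>)"
    using functor_comp[OF section_functor[OF F W(1)]] \<alpha> \<phi> \<alpha>_bar equivariant_arr[OF E W(1)]
    by (simp add: ghom_def)
  then obtain W' z' k where k: "el_arr W' z' k W z"
    "prar X k (gcomp (psec X W) \<phi>' \<alpha>) = prar X k (gcomp (psec X W) (aar TX W \<alpha>) \<phi>)"
    using faithful W cat_comp[OF cat_W \<alpha> \<phi>(2)] cat_comp[OF cat_W \<phi>(1) \<alpha>_bar]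
    unfolding locally_faithful_def by blast
  have "gcomp (psec X W') (prar X k \<phi>') (prar X k \<alpha>) = gcomp (psec X W') (aar TX W' (prar X k \<alpha>)) (prar X k \<phi>)"
    using k(2) restrict_gcomp[OF X k(1) \<alpha> \<phi>(2)] restrict_gcomp[OF X k(1) \<phi>(1) \<alpha>_bar]
      z2_action_restrict_arr[OF TX el_arr_hom[OF k(1)] ghomD[OF \<alpha>, THEN conjunct1]] by simp
  then show ?thesis
    using k(1) restrict_ob[OF hfp_X_presheaf k(1), of "(a,\<phi>)"]
      restrict_ob[OF hfp_X_presheaf k(1), of "(a',\<phi>')"] p
      restrict_hom[OF X k(1) \<alpha>] by (auto simp: hfp_psh_simps hfp_grpd_simps ghom_def)
qed

lemma hfp_locally_full:
  assumes full: "locally_full X Y F" and faithful: "locally_faithful X F"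
  shows "locally_full (hfp_psh X TX) (hfp_psh Y TY) (hfp_mor F)"
  unfolding locally_full_def
proof (intro allI impI, elim conjE)
  fix U x p p' \<Gamma>
  assume U: "U \<in> gobs C" "x \<in> sob u U"
    and p: "p \<in> gobs (psec (hfp_psh X TX) U)" "p' \<in> gobs (psec (hfp_psh X TX) U)"
    and \<Gamma>: "\<Gamma> \<in> ghom (psec (hfp_psh Y TY) U) (mob (hfp_mor F) U p) (mob (hfp_mor F) U p')"
  obtain a \<phi> a' \<phi>' where pa: "p = (a,\<phi>)" "p' = (a',\<phi>')" by (cases p, cases p')
  have a: "a \<in> gobs (psec X U)" "a' \<in> gobs (psec X U)" "\<phi> \<in> garrs (psec X U)" "\<phi>' \<in> garrs (psec X U)"
    using p unfolding pa by (auto simp: hfp_psh_simps hfp_grpd_simps dest: hfp_obs_arrs)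
  obtain \<gamma> where \<Gamma>_eq: "\<Gamma> = (mob (hfp_mor F) U p, \<gamma>, mob (hfp_mor F) U p')"
    and \<gamma>: "\<gamma> \<in> ghom (psec Y U) (mob F U a) (mob F U a')"
    using \<Gamma> unfolding pa hfp_psh_simps hfp_mor_simps by (cases \<Gamma>) (auto simp: hfp_hom_iff)
  obtain W z k \<alpha> where k: "el_arr W z k U x" "\<alpha> \<in> ghom (psec X W) (prob X k a) (prob X k a')"
    "mar F W \<alpha> = prar Y k \<gamma>"
    using full U a \<gamma> unfolding locally_full_def by blast
  have W: "W \<in> gobs C" "z \<in> sob u W" using el_arrD[OF k(1)] by blast+
  define A where "A = (prob (hfp_psh X TX) k p, \<alpha>, prob (hfp_psh X TX) k p')"
  have pW: "prob (hfp_psh X TX) k p = (prob X k a, prar X k \<phi>)"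
    "prob (hfp_psh X TX) k p' = (prob X k a', prar X k \<phi>')"
    unfolding pa by (simp_all add: hfp_psh_simps)
  txt \<open>The image of \<open>A\<close> is the restriction of \<open>\<Gamma>\<close>, hence an arrow of homotopy fixed points.\<close>
  have FA: "mar (hfp_mor F) W A = prar (hfp_psh Y TY) k \<Gamma>"
    using k(3) morphism_restrict_ob[OF hfp_F_morphism el_arr_hom[OF k(1)] p(1)]
      morphism_restrict_ob[OF hfp_F_morphism el_arr_hom[OF k(1)] p(2)]
    unfolding A_def \<Gamma>_eq pW pa by (simp add: hfp_psh_simps hfp_mor_simps)
  moreover have "prar (hfp_psh Y TY) k \<Gamma> \<in> garrs (psec (hfp_psh Y TY) W)"
    using restrict_hom[OF hfp_Y_presheaf k(1) \<Gamma>] by (simp add: ghom_def)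
  moreover note pk = restrict_ob[OF hfp_X_presheaf k(1) p(1)] restrict_ob[OF hfp_X_presheaf k(1) p(2)]
  ultimately obtain W' z' k' where k': "el_arr W' z' k' W z"
    "prar (hfp_psh X TX) k' A \<in> ghom (psec (hfp_psh X TX) W')
      (prob (hfp_psh X TX) (gcomp C k k') p) (prob (hfp_psh X TX) (gcomp C k k') p')"
    using hfp_arrow_after_restriction[OF faithful W _ _ k(2), of "prar X k \<phi>" "prar X k \<phi>'"]
      restrict_ob_comp[OF hfp_X_presheaf k(1) _ p(1)] restrict_ob_comp[OF hfp_X_presheaf k(1) _ p(2)]
    unfolding A_def pW by (simp add: hfp_psh_simps hfp_grpd_simps) blast
  moreover have "mar (hfp_mor F) W' (prar (hfp_psh X TX) k' A) = prar (hfp_psh Y TY) (gcomp C k k') \<Gamma>"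
    using hfp_mor_restrict[OF F el_arr_hom[OF k'(1)] restrict_ob[OF X k(1) a(1)] restrict_ob[OF X k(1) a(2)]
        restrict_arr[OF X k(1) a(3)] ghomD[OF k(2), THEN conjunct1] restrict_arr[OF X k(1) a(4)], of TX TY]
      FA restrict_arr_comp[OF hfp_Y_presheaf k(1) k'(1)] ghomD[OF \<Gamma>]
    unfolding A_def pW by simp
  ultimately show "\<exists>W z k A. el_arr W z k U x \<and>
      A \<in> ghom (psec (hfp_psh X TX) W) (prob (hfp_psh X TX) k p) (prob (hfp_psh X TX) k p') \<and>
      mar (hfp_mor F) W A = prar (hfp_psh Y TY) k \<Gamma>"
    using el_arr_comp[OF k(1) k'(1)] by blast
qed

lemma hfp_obs_after_restriction:
  assumes faithful: "locally_faithful X F" and W: "W \<in> gobs C" "z \<in> sob u W"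
    and \<phi>: "\<phi> \<in> ghom (psec X W) a (aob TX W a)"
    and inv: "mar F W (gcomp (psec X W) (aar TX W \<phi>) \<phi>) = gide (psec Y W) (mob F W a)"
      "mar F W (gcomp (psec X W) \<phi> (aar TX W \<phi>)) = gide (psec Y W) (mob F W (aob TX W a))"
  shows "\<exists>W' z' k. el_arr W' z' k W z \<and> (prob X k a, prar X k \<phi>) \<in> hfp_obs (psec X W') (aob TX W') (aar TX W')"
proof -
  note cat_W = section_category[OF X W(1)]
  have a: "a \<in> gobs (psec X W)" "aob TX W a \<in> gobs (psec X W)" using cat_dom[OF cat_W \<phi>] cat_cod[OF cat_W \<phi>] .
  have \<phi>_bar: "aar TX W \<phi> \<in> ghom (psec X W) (aob TX W a) a"
    using functor_hom[OF z2_action_functor[OF TX W(1)] \<phi>] z2_action_involutive_ob[OF TX W(1) a(1)] by simp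
  have \<theta>: "gcomp (psec X W) (aar TX W \<phi>) \<phi> \<in> ghom (psec X W) a a"
    "gcomp (psec X W) \<phi> (aar TX W \<phi>) \<in> ghom (psec X W) (aob TX W a) (aob TX W a)"
    using cat_comp[OF cat_W \<phi> \<phi>_bar] cat_comp[OF cat_W \<phi>_bar \<phi>] .
  obtain W1 z1 k1 where k1: "el_arr W1 z1 k1 W z"
    "prar X k1 (gcomp (psec X W) (aar TX W \<phi>) \<phi>) = gide (psec X W1) (prob X k1 a)"
    using locally_faithful_restrict_eq_gide[OF X Y F faithful W \<theta>(1) inv(1)] by blast
  have W1: "W1 \<in> gobs C" "z1 \<in> sob u W1" and k1C: "k1 \<in> ghom C W1 W" using el_arrD[OF k1(1)] by blast+
  have "mar F W1 (prar X k1 (gcomp (psec X W) \<phi> (aar TX W \<phi>))) = gide (psec Y W1) (mob F W1 (prob X k1 (aob TX W a)))"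
    using morphism_restrict_arr[OF F k1C ghomD[OF \<theta>(2), THEN conjunct1]] inv(2)
      restrict_gide[OF Y k1(1) functor_ob[OF section_functor[OF F W(1)] a(2)]]
      morphism_restrict_ob[OF F k1C a(2)]
    by simp
  then obtain W2 z2 k2 where k2: "el_arr W2 z2 k2 W1 z1"
    "prar X k2 (prar X k1 (gcomp (psec X W) \<phi> (aar TX W \<phi>))) = gide (psec X W2) (prob X k2 (prob X k1 (aob TX W a)))"
    using locally_faithful_restrict_eq_gide[OF X Y F faithful W1 restrict_hom[OF X k1(1) \<theta>(2)]] by blast
  note K = el_arr_comp[OF k1(1) k2(1)]
  note Kob = restrict_ob_comp[OF X k1(1) k2(1)] and Karr = restrict_arr_comp[OF X k1(1) k2(1)]
  have bar: "aar TX W2 (prar X (gcomp C k1 k2) \<phi>) = prar X (gcomp C k1 k2) (aar TX W \<phi>)"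
    using z2_action_restrict_arr[OF TX el_arr_hom[OF K] ghomD[OF \<phi>, THEN conjunct1]] by simp
  have "prar X (gcomp C k1 k2) \<phi> \<in> ghom (psec X W2) (prob X (gcomp C k1 k2) a) (aob TX W2 (prob X (gcomp C k1 k2) a))"
    using restrict_hom[OF X K \<phi>] z2_action_restrict_ob[OF TX el_arr_hom[OF K] a(1)] by simp
  moreover have "gcomp (psec X W2) (aar TX W2 (prar X (gcomp C k1 k2) \<phi>)) (prar X (gcomp C k1 k2) \<phi>)
      = gide (psec X W2) (prob X (gcomp C k1 k2) a)"
    using bar restrict_gcomp[OF X K \<phi> \<phi>_bar, symmetric] Karr ghomD[OF \<theta>(1)] k1(2)
      restrict_gide[OF X k2(1) restrict_ob[OF X k1(1) a(1)]] Kob[OF a(1)] by simp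
  moreover have "gcomp (psec X W2) (prar X (gcomp C k1 k2) \<phi>) (aar TX W2 (prar X (gcomp C k1 k2) \<phi>))
      = gide (psec X W2) (aob TX W2 (prob X (gcomp C k1 k2) a))"
    using bar restrict_gcomp[OF X K \<phi>_bar \<phi>, symmetric] Karr ghomD[OF \<theta>(2)] k2(2) Kob[OF a(2)]
      z2_action_restrict_ob[OF TX el_arr_hom[OF K] a(1)] by simp
  ultimately show ?thesis using K restrict_ob[OF X K a(1)] unfolding hfp_obs_iff by blast
qed

lemma hfp_obs_lift:
  assumes full: "locally_full X Y F" and faithful: "locally_faithful X F"
    and W: "W \<in> gobs C" "z \<in> sob u W" and a: "a \<in> gobs (psec X W)"
    and \<gamma>: "(mob F W a, \<gamma>) \<in> hfp_obs (psec Y W) (aob TY W) (aar TY W)"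
  shows "\<exists>W' z' k \<phi>. el_arr W' z' k W z \<and> (prob X k a, \<phi>) \<in> hfp_obs (psec X W') (aob TX W') (aar TX W') \<and>
    mar F W' \<phi> = prar Y k \<gamma>"
proof -
  have a_bar: "aob TX W a \<in> gobs (psec X W)" using functor_ob[OF z2_action_functor[OF TX W(1)] a] .
  have "\<gamma> \<in> ghom (psec Y W) (mob F W a) (mob F W (aob TX W a))"
    using \<gamma> equivariant_ob[OF E W(1) a] by (simp add: hfp_obs_iff)
  then obtain W1 z1 k1 \<phi> where k1: "el_arr W1 z1 k1 W z"
    "\<phi> \<in> ghom (psec X W1) (prob X k1 a) (prob X k1 (aob TX W a))"
    "mar F W1 \<phi> = prar Y k1 \<gamma>"
    using full W a a_bar unfolding locally_full_def by blast
  have W1: "W1 \<in> gobs C" "z1 \<in> sob u W1" using el_arrD[OF k1(1)] by blast+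
  have \<phi>: "\<phi> \<in> ghom (psec X W1) (prob X k1 a) (aob TX W1 (prob X k1 a))"
    using k1(2) z2_action_restrict_ob[OF TX el_arr_hom[OF k1(1)] a] by simp
  have a1: "prob X k1 a \<in> gobs (psec X W1)" using restrict_ob[OF X k1(1) a] .
  have \<phi>_bar: "aar TX W1 \<phi> \<in> ghom (psec X W1) (aob TX W1 (prob X k1 a)) (prob X k1 a)"
    using functor_hom[OF z2_action_functor[OF TX W1(1)] \<phi>] z2_action_involutive_ob[OF TX W1(1) a1] by simp
  have "(mob F W1 (prob X k1 a), mar F W1 \<phi>) \<in> hfp_obs (psec Y W1) (aob TY W1) (aar TY W1)"
    using restrict_ob[OF hfp_Y_presheaf k1(1), of "(mob F W a, \<gamma>)"] \<gamma> k1(3)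
      morphism_restrict_ob[OF F el_arr_hom[OF k1(1)] a]
    by (simp add: hfp_psh_simps hfp_grpd_simps)
  then have "mar F W1 (gcomp (psec X W1) (aar TX W1 \<phi>) \<phi>) = gide (psec Y W1) (mob F W1 (prob X k1 a))"
      "mar F W1 (gcomp (psec X W1) \<phi> (aar TX W1 \<phi>)) = gide (psec Y W1) (mob F W1 (aob TX W1 (prob X k1 a)))"
    using functor_comp[OF section_functor[OF F W1(1)] \<phi> \<phi>_bar]
      functor_comp[OF section_functor[OF F W1(1)] \<phi>_bar \<phi>]
      equivariant_arr[OF E W1(1) ghomD[OF \<phi>, THEN conjunct1]] equivariant_ob[OF E W1(1) a1]
    by (simp_all add: hfp_obs_iff)
  then obtain W2 z2 k2 where k2: "el_arr W2 z2 k2 W1 z1"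
    "(prob X k2 (prob X k1 a), prar X k2 \<phi>) \<in> hfp_obs (psec X W2) (aob TX W2) (aar TX W2)"
    using hfp_obs_after_restriction[OF faithful W1 \<phi>] by blast
  have "mar F W2 (prar X k2 \<phi>) = prar Y (gcomp C k1 k2) \<gamma>"
    using morphism_restrict_arr[OF F el_arr_hom[OF k2(1)] ghomD[OF \<phi>, THEN conjunct1]] k1(3)
      restrict_arr_comp[OF Y k1(1) k2(1)] \<gamma> by (simp add: hfp_obs_iff ghom_def)
  moreover have "(prob X (gcomp C k1 k2) a, prar X k2 \<phi>) \<in> hfp_obs (psec X W2) (aob TX W2) (aar TX W2)"
    using k2(2) restrict_ob_comp[OF X k1(1) k2(1) a] by simp
  ultimately show ?thesis using el_arr_comp[OF k1(1) k2(1)] by blast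
qed

lemma hfp_locally_ess_surj:
  assumes ess_surj: "locally_ess_surj X Y F" and full: "locally_full X Y F"
    and faithful: "locally_faithful X F"
  shows "locally_ess_surj (hfp_psh X TX) (hfp_psh Y TY) (hfp_mor F)"
  unfolding locally_ess_surj_def
proof (intro allI impI, elim conjE)
  fix U x q assume U: "U \<in> gobs C" "x \<in> sob u U" and q: "q \<in> gobs (psec (hfp_psh Y TY) U)"
  obtain b \<psi> where q_eq: "q = (b,\<psi>)" by (cases q)
  have "(b,\<psi>) \<in> hfp_obs (psec Y U) (aob TY U) (aar TY U)"
    using q unfolding q_eq by (simp add: hfp_psh_simps hfp_grpd_simps)
  then have b: "b \<in> gobs (psec Y U)" by (rule hfp_obs_arrs[THEN conjunct1])
  obtain W1 z1 k1 a e where k1: "el_arr W1 z1 k1 U x" "a \<in> gobs (psec X W1)"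
    "e \<in> ghom (psec Y W1) (mob F W1 a) (prob Y k1 b)" "is_iso (psec Y W1) e"
    using ess_surj U b unfolding locally_ess_surj_def by blast
  have W1: "W1 \<in> gobs C" "z1 \<in> sob u W1" using el_arrD[OF k1(1)] by blast+
  note cat_W1 = section_category[OF Y W1(1)]
  note e' = ginv[OF cat_W1 k1(3,4)]
  have q1: "(prob Y k1 b, prar Y k1 \<psi>) \<in> hfp_obs (psec Y W1) (aob TY W1) (aar TY W1)"
    using restrict_ob[OF hfp_Y_presheaf k1(1) q] unfolding q_eq
    by (simp add: hfp_psh_simps hfp_grpd_simps)
  define \<gamma> where
    "\<gamma> = gcomp (psec Y W1) (aar TY W1 (ginv (psec Y W1) e)) (gcomp (psec Y W1) (prar Y k1 \<psi>) e)"
  define E1 where "E1 = ((mob F W1 a, \<gamma>), e, (prob Y k1 b, prar Y k1 \<psi>))"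
  have E1: "E1 \<in> ghom (psec (hfp_psh Y TY) W1) (mob F W1 a, \<gamma>) (prob (hfp_psh Y TY) k1 q)"
    "is_iso (psec (hfp_psh Y TY) W1) E1" "(mob F W1 a, \<gamma>) \<in> hfp_obs (psec Y W1) (aob TY W1) (aar TY W1)"
    using hfp_iso_transport[OF cat_W1 z2_action_functor[OF TY W1(1)] z2_action_involutive_ob[OF TY W1(1)]
        z2_action_involutive_arr[OF TY W1(1)] q1 k1(3) e', folded \<gamma>_def E1_def] q_eq
    by (simp_all add: hfp_psh_simps)
  obtain W z k \<phi> where k: "el_arr W z k W1 z1" "(prob X k a, \<phi>) \<in> hfp_obs (psec X W) (aob TX W) (aar TX W)"
    "mar F W \<phi> = prar Y k \<gamma>"
    using hfp_obs_lift[OF full faithful W1 k1(2) E1(3)] by blast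
  have "prob (hfp_psh Y TY) k (mob F W1 a, \<gamma>) = mob (hfp_mor F) W (prob X k a, \<phi>)"
    using k(3) morphism_restrict_ob[OF F el_arr_hom[OF k(1)] k1(2)] by (simp add: hfp_psh_simps hfp_mor_simps)
  then have "prar (hfp_psh Y TY) k E1
      \<in> ghom (psec (hfp_psh Y TY) W) (mob (hfp_mor F) W (prob X k a, \<phi>))
        (prob (hfp_psh Y TY) (gcomp C k1 k) q)"
    using restrict_hom[OF hfp_Y_presheaf k(1) E1(1)] restrict_ob_comp[OF hfp_Y_presheaf k1(1) k(1) q] by simp
  moreover have "is_iso (psec (hfp_psh Y TY) W) (prar (hfp_psh Y TY) k E1)"
    using functor_iso[OF restriction_functor[OF hfp_Y_presheaf el_arr_hom[OF k(1)]]
      section_category[OF hfp_Y_presheaf W1(1)] E1(1,2)] .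
  moreover have "(prob X k a, \<phi>) \<in> gobs (psec (hfp_psh X TX) W)"
    using k(2) by (simp add: hfp_psh_simps hfp_grpd_simps)
  ultimately show "\<exists>W z k p E. el_arr W z k U x \<and> p \<in> gobs (psec (hfp_psh X TX) W) \<and>
      E \<in> ghom (psec (hfp_psh Y TY) W) (mob (hfp_mor F) W p) (prob (hfp_psh Y TY) k q) \<and>
      is_iso (psec (hfp_psh Y TY) W) E"
    using el_arr_comp[OF k1(1) k(1)] by blast
qed

end

end

theorem mainTheorem8:
  fixes C :: "('o,'m) gcat" and J :: "'o \<Rightarrow> 'm set set"
    and X :: "('o,'m,'a,'b) pgrpd" and Y :: "('o,'m,'c,'d) pgrpd"
    and TX :: "('o,'a,'b) z2act" and TY :: "('o,'c,'d) z2act"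
    and F :: "('o,'a,'b,'c,'d) pmor"
  assumes "site C J"
    and "enough_points C J TYPE('x) TYPE('v)"
    and "presheaf_of_groupoids C X" and "presheaf_of_groupoids C Y"
    and "z2_action C X TX" and "z2_action C Y TY"
    and "presheaf_morphism C X Y F" and "equivariant C X TX TY F"
    and "local_weq C J TYPE('x) X Y F"
  shows "local_weq C J TYPE('x) (hfp_psh X TX) (hfp_psh Y TY) (hfp_mor F)"
  unfolding local_weq_def
proof (intro allI impI)
  fix u :: "('o,'m,'x) setfunctor" assume u: "site_point C J u"
  txt \<open>The definition of \<open>local_weq\<close> is pointwise.\<close>
  have C: "category C" using assms(1) unfolding site_def by blast
  interpret flat_point C u using C u unfolding site_point_def by unfold_locales blast+
  note X = presheaf_of_groupoids_imp_categories[OF assms(3)]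
  note Y = presheaf_of_groupoids_imp_categories[OF assms(4)]
  note hyps = X Y assms(7,5,6,8)
  have "\<And>U. U \<in> gobs C \<Longrightarrow> groupoid (psec Y U)"
    using assms(4) unfolding presheaf_of_groupoids_def by blast
  then have "locally_faithful X F" "locally_full X Y F" "locally_ess_surj X Y F"
    using stalk_weq_imp_local[OF X Y assms(7)] assms(9) u unfolding local_weq_def by blast+
  then show "grpd_weq (stalk C u (hfp_psh X TX)) (stalk C u (hfp_psh Y TY))
      (stalk_mob C u (hfp_psh Y TY) (hfp_mor F)) (stalk_mar C u (hfp_psh Y TY) (hfp_mor F))"
    using local_imp_stalk_weq[OF hfp_presheaf_of_categories[OF assms(5) C X]
        hfp_presheaf_of_categories[OF assms(6) C Y] hfp_presheaf_morphism[OF X Y assms(5,6,7,8)]]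
      hfp_locally_faithful[OF hyps] hfp_locally_full[OF hyps] hfp_locally_ess_surj[OF hyps] by blast
qed

end
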